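(* Let $F:\mathbb R^d\times\mathcal P_2(\mathbb R^d)\to\mathbb R^{d\times m}$ satisfy Regularity assumptions 1 with constant $\Lambda$. Fix $\omega\in\Omega$, let $X(\omega)$ be an $\omega$-controlled path and $Y(\cdot)$ an $\mathbb R^d$-valued random controlled path on $[0,T]$, such that $\delta_\mu X(\omega)\equiv0$ and $\delta_\mu Y(\cdot)\equiv0$, and such that $$M:=\sup_{0\le t\le T}\big(|\delta_xX_t(\omega)|\vee\langle\delta_xY_t(\cdot)\rangle_\infty\big)<\infty.$$ Then the path $t\mapsto F(X_t(\omega),Y_t(\cdot)):=F(X_t(\omega),\mathcal L(Y_t))$ is an $\omega$-controlled path with $$\delta_x\big(F(X(\omega),Y(\cdot))\big)_t=\partial_xF(X_t(\omega),Y_t(\cdot))\,\delta_xX_t(\omega),$$ understood as $\big(\sum_{\ell=1}^d\partial_{x_\ell}F^{i,j}(X_t(\omega),Y_t(\cdot))(\delta_xX^\ell_t(\omega))_k\big)_{i,j,k}$, and $$\delta_\mu\big(F(X(\omega),Y(\cdot))\big)_t=\nabla_ZF(X_t(\omega),Y_t(\cdot))\,\delta_xY_t(\cdot)=D_\mu F(X_t(\omega),\mathcal L(Y_t))(Y_t(\cdot))\,\delta_xY_t(\cdot)$$ (with the analogous contraction), and there is a constant $C_{\Lambda,M}$, depending only on $\Lambda$ and $M$, such that $$|||F(X(\omega),Y(\cdot))|||_{\star,[0,T],w,p}\le C_{\Lambda,M}\Big(1+|||X(\omega)|||^2_{[0,T],w,p}+\big\langle|||Y(\cdot)|||_{[0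,T],w,p}\big\rangle_8^2\Big).$$
   Context: Fix $T>0$, integers $m,d\ge1$, $p\in[2,3)$, $q\ge8$. $(\Omega,\mathcal F,\mathbb P)$ is an atomless probability space, $\Omega$ Polish, $\mathcal F$ the completed Borel $\sigma$-field; $\langle Z\rangle_r=\mathbb E[|Z|^r]^{1/r}$, $\langle Z\rangle_\infty$ the essential sup of $|Z|$, $\langle\!\langle\cdot\rangle\!\rangle_r$ the $L^r$ norm on $(\Omega^2,\mathbb P^{\otimes2})$; a dot in place of a sample point means the object is regarded as a random variable in that argument. $\mathcal S_2^T=\{(s,t)\in[0,T]^2:s\le t\}$, $f_{s,t}=f_t-f_s$. $p'$-variations: $\|G\|^{p'}_{[s,t],p'\text{-var}}=\sup\sum_i|G_{t_{i-1},t_i}|^{p'}$ over partitions of $[s,t]$; $\langle G(\cdot)\rangle^{p'}_{q;[s,t],p'\text{-var}}=\sup\sum_i\langle G_{t_{i-1},t_i}(\cdot)\rangle_q^{p'}$; likewise on $\Omega^2$. Rough set-up $\boldsymbol W=(W,\mathbb W,\mathbb W^\perp)$ on $[0,T]$: Borel maps $W:\Omega\to C([0,T];\mathbb R^m)$, $\mathbb W:\Omega\to C(\mathcal S_2^T;\mathbb R^{m\times m})$, $\mathbb W^\perp:\Omega^2\to C(\mathcal S_2^T;\mathbb R^{m\times m})$ with $q$-integrable suprema, sections $\mathbb W^\perp(\omega,\cdot),\mathbb W^\perp(\cdot,\omega)$ continuous into $L^q(\Omega)$ for every $\omega$, $\mathbb W^\perp(\cdot,\cdot)$ continuous into $L^q(\Omega^2)$,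 satisfying for all $r\le s\le t$ and all $\omega$ Chen's relations $\mathbb W_{r,t}(\omega)=\mathbb W_{r,s}(\omega)+\mathbb W_{s,t}(\omega)+W_{r,s}(\omega)\otimes W_{s,t}(\omega)$, $\mathbb W^\perp_{r,t}(\cdot,\omega)=\mathbb W^\perp_{r,s}(\cdot,\omega)+\mathbb W^\perp_{s,t}(\cdot,\omega)+W_{r,s}(\cdot)\otimes W_{s,t}(\omega)$, $\mathbb W^\perp_{r,t}(\omega,\cdot)=\mathbb W^\perp_{r,s}(\omega,\cdot)+\mathbb W^\perp_{s,t}(\omega,\cdot)+W_{r,s}(\omega)\otimes W_{s,t}(\cdot)$, $\mathbb W^\perp_{r,t}(\cdot,\cdot)=\mathbb W^\perp_{r,s}(\cdot,\cdot)+\mathbb W^\perp_{s,t}(\cdot,\cdot)+W_{r,s}(\cdot)\otimes W_{s,t}(\cdot)$ ($X(\cdot)\otimes Y(\cdot):(\omega,\omega')\mapsto(X_i(\omega)Y_j(\omega'))_{i,j}$). With $v(s,t,\omega)=\|W(\omega)\|^p_{[s,t],p\text{-var}}+\langle W(\cdot)\rangle^p_{q;[s,t],p\text{-var}}+\|\mathbb W(\omega)\|^{p/2}_{[s,t],p/2\text{-var}}+\langle\mathbb W^\perp(\omega,\cdot)\rangle^{p/2}_{q;[s,t],p/2\text{-var}}+\langle\mathbb W^\perp(\cdot,\omega)\rangle^{p/2}_{q;[s,t],p/2\text{-var}}+\langle\!\langle\mathbb W^\perp(\cdot,\cdot)\rangle\!\rangle^{p/2}_{q;[s,t],p/2\text{-var}}$,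 one requires $v(0,T,\omega)<\infty$ for all $\omega$, $\langle v(0,T,\cdot)\rangle_q<\infty$, and $\langle v\rangle_{q;[0,T],1\text{-var}}<\infty$ where $\langle v\rangle_{q;[s,t],1\text{-var}}=\sup\sum_i\langle v(t_{i-1},t_i,\cdot)\rangle_q$. Control $w$: random variables $w(s,t,\omega)$ jointly continuous in $(s,t)$ with $w(s,t,\omega)\ge v(s,t,\omega)+\langle v\rangle_{q;[s,t],1\text{-var}}$, $\langle w(s,t,\cdot)\rangle_q\le2w(s,t,\omega)$, and superadditive in $(s,t)$. $\omega$-controlled path (here possibly with values in $\mathbb R^d\otimes\mathbb R^m$ instead of $\mathbb R^d$): continuous $X(\omega)$ with derivatives $\delta_xX(\omega)\in C([0,T];\mathbb R^{d\times m})$, $\delta_\mu X(\omega,\cdot)\in C([0,T];L^{4/3}(\Omega;\mathbb R^{d\times m}))$, remainder $R^X_{s,t}(\omega)=X_{s,t}(\omega)-\delta_xX_s(\omega)W_{s,t}(\omega)-\mathbb E[\delta_\mu X_s(\omega,\cdot)W_{s,t}(\cdot)]$ continuous, and $|||X(\omega)|||_{[0,T],w,p}=\sup\frac{|X_{s,t}(\omega)|}{w(s,t,\omega)^{1/p}}+\sup\frac{|\delta_xX_{s,t}(\omega)|}{w(s,t,\omega)^{1/p}}+\sup\frac{\langle\delta_\mu X_{s,t}(\omega,\cdot)\rangle_{4/3}}{w(s,t,\omega)^{1/p}}+\sup\frac{|R^X_{s,t}(\omega)|}{w(s,t,\omega)^{2/p}}<\infty$; $|||X(\omega)|||_{\star,[0,T],w,p}=|X_0(\omega)|+|\delta_xX_0(\omega)|+\langle\delta_\mu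 X_0(\omega,\cdot)\rangle_{4/3}+|||X(\omega)|||_{[0,T],w,p}$. A random controlled path is a family $(X(\omega))_\omega$ of $\omega$-controlled paths with measurable dependence of $X,\delta_xX,\delta_\mu X,R^X$ on $\omega$ and $\langle X_0(\cdot)\rangle_2+\langle|||X(\cdot)|||_{[0,T],w,p}\rangle_8<\infty$. Lions derivative: for $u$ on $\mathcal P_2(\mathbb R^d)$ with lift $U(Z)=u(\mathcal L(Z))$ on $L^2(\Omega;\mathbb R^d)$, differentiability means Fréchet differentiability of $U$; if $u$ is $C^1$, $\nabla_ZU=Du(\mathcal L(Z))(Z)$. Write $F(x,Z)=F(x,\mathcal L(Z))$, $\nabla_ZF(x,Z)=D_\mu F(x,\mathcal L(Z))(Z)$. Regularity assumptions 1: $(x,Z)\mapsto F(x,Z)$ and $\partial_xF$ continuously differentiable in $(x,Z)$; $|F|,|\partial_xF|,|\partial_x^2F|\le\Lambda$; $\|\nabla_ZF(x,Z)\|_{L^2}\vee\|\partial_x\nabla_ZF(x,Z)\|_{L^2}\le\Lambda$; $Z\mapsto\nabla_ZF(x,Z)$ is $\Lambda$-Lipschitz from $L^2$ to $L^2$ uniformly in $x$. *)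

theory Defs
  imports "HOL-Probability.Probability"
begin

text \<open>Real powers of extended nonnegative reals (infinity stays infinity; used only with r > 0).\<close>
definition epow :: "ennreal \<Rightarrow> real \<Rightarrow> ennreal" where
  "epow x r = (if x = \<infinity> then \<infinity> else ennreal (enn2real x powr r))"

definition LqE :: "'a measure \<Rightarrow> real \<Rightarrow> ('a \<Rightarrow> ennreal) \<Rightarrow> ennreal" where
  "LqE M r g = epow (\<integral>\<^sup>+ x. epow (g x) r \<partial>M) (1 / r)"

definition Lq :: "'a measure \<Rightarrow> real \<Rightarrow> ('a \<Rightarrow> 'b::real_normed_vector) \<Rightarrow> ennreal" where
  "Lq M r f = LqE M r (\<lambda>x. ennreal (norm (f x)))"

definition Linf :: "'a measure \<Rightarrow> ('a \<Rightarrow> 'b::real_normed_vector) \<Rightarrow> ennreal" where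
  "Linf M f = esssup M (\<lambda>x. ennreal (norm (f x)))"

definition in_Lq :: "'a measure \<Rightarrow> real \<Rightarrow> ('a \<Rightarrow> 'b::real_normed_vector) \<Rightarrow> bool" where
  "in_Lq M r f \<longleftrightarrow> f \<in> borel_measurable M \<and> Lq M r f < \<infinity>"

definition Lq_continuous_on ::
  "'a measure \<Rightarrow> real \<Rightarrow> 'i::topological_space set \<Rightarrow> ('i \<Rightarrow> 'a \<Rightarrow> 'b::real_normed_vector) \<Rightarrow> bool" where
  "Lq_continuous_on M r S G \<longleftrightarrow>
     (\<forall>i\<in>S. ((\<lambda>j. Lq M r (\<lambda>x. G j x - G i x)) \<longlongrightarrow> 0) (at i within S))"

definition atomless :: "'a measure \<Rightarrow> bool" where
  "atomless M \<longleftrightarrow> (\<forall>A\<in>sets M. 0 < measure M A \<longrightarrow>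
      (\<exists>B\<in>sets M. B \<subseteq> A \<and> 0 < measure M B \<and> measure M B < measure M A))"

definition standing_space :: "'w::polish_space measure \<Rightarrow> bool" where
  "standing_space M \<longleftrightarrow> prob_space M \<and> atomless M \<and>
     (\<exists>M0. sets M0 = sets (borel :: 'w measure) \<and> M = completion M0)"

definition S2 :: "real \<Rightarrow> (real \<times> real) set" where
  "S2 T = {(s, t). 0 \<le> s \<and> s \<le> t \<and> t \<le> T}"

definition partitions :: "real \<Rightarrow> real \<Rightarrow> real list set" where
  "partitions s t = {xs. xs \<noteq> [] \<and> sorted xs \<and> hd xs = s \<and> last xs = t}"

definition var_sum :: "(real \<Rightarrow> real \<Rightarrow> ennreal) \<Rightarrow> real list \<Rightarrow> ennreal" where
  "var_sum g xs = (\<Sum>i < length xs - 1. g (xs ! i) (xs ! Suc i))"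

text \<open>pvar g s t = sup over partitions of [s,t] of the sums of g over consecutive points.
  With g = |G_{a,b}|^p' this is the p'-th power of the p'-variation.\<close>
definition pvar :: "(real \<Rightarrow> real \<Rightarrow> ennreal) \<Rightarrow> real \<Rightarrow> real \<Rightarrow> ennreal" where
  "pvar g s t = (SUP xs \<in> partitions s t. var_sum g xs)"

definition outer :: "real^'m \<Rightarrow> real^'m \<Rightarrow> real^'m^'m" where
  "outer a b = (\<chi> i j. a $ i * b $ j)"

text \<open>A derivative D (column k = derivative in direction e_k) applied to a vector h.\<close>
definition apply_deriv :: "'v^'m \<Rightarrow> real^'m \<Rightarrow> 'v::real_vector" where
  "apply_deriv D h = (\<Sum>k\<in>UNIV. h $ k *\<^sub>R D $ k)"

definition vfun ::
  "'w measure \<Rightarrow> real \<Rightarrow> real \<Rightarrow> ('w \<Rightarrow> real \<Rightarrow> real^'m) \<Rightarrow> ('w \<Rightarrow> real \<Rightarrow> real \<Rightarrow> real^'m^'m)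
   \<Rightarrow> ('w \<Rightarrow> 'w \<Rightarrow> real \<Rightarrow> real \<Rightarrow> real^'m^'m) \<Rightarrow> real \<Rightarrow> real \<Rightarrow> 'w \<Rightarrow> ennreal" where
  "vfun M p q W WW WP s t \<omega> =
       pvar (\<lambda>a b. ennreal (norm (W \<omega> b - W \<omega> a) powr p)) s t
     + pvar (\<lambda>a b. epow (Lq M q (\<lambda>\<omega>'. W \<omega>' b - W \<omega>' a)) p) s t
     + pvar (\<lambda>a b. ennreal (norm (WW \<omega> a b) powr (p / 2))) s t
     + pvar (\<lambda>a b. epow (Lq M q (\<lambda>\<omega>'. WP \<omega> \<omega>' a b)) (p / 2)) s t
     + pvar (\<lambda>a b. epow (Lq M q (\<lambda>\<omega>'. WP \<omega>' \<omega> a b)) (p / 2)) s t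
     + pvar (\<lambda>a b. epow (Lq (M \<Otimes>\<^sub>M M) q (\<lambda>(\<omega>1, \<omega>2). WP \<omega>1 \<omega>2 a b)) (p / 2)) s t"

definition rough_setup ::
  "'w measure \<Rightarrow> real \<Rightarrow> real \<Rightarrow> real \<Rightarrow> ('w \<Rightarrow> real \<Rightarrow> real^'m) \<Rightarrow> ('w \<Rightarrow> real \<Rightarrow> real \<Rightarrow> real^'m^'m)
   \<Rightarrow> ('w \<Rightarrow> 'w \<Rightarrow> real \<Rightarrow> real \<Rightarrow> real^'m^'m) \<Rightarrow> bool" where
  "rough_setup M T p q W WW WP \<longleftrightarrow>
     \<comment> \<open>Borel maps into spaces of continuous paths\<close>
     (\<forall>\<omega>. continuous_on {0..T} (W \<omega>)) \<and> (\<forall>t. (\<lambda>\<omega>. W \<omega> t) \<in> borel_measurable M) \<and>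
     (\<forall>\<omega>. continuous_on (S2 T) (\<lambda>(s, t). WW \<omega> s t)) \<and> (\<forall>s t. (\<lambda>\<omega>. WW \<omega> s t) \<in> borel_measurable M) \<and>
     (\<forall>\<omega>1 \<omega>2. continuous_on (S2 T) (\<lambda>(s, t). WP \<omega>1 \<omega>2 s t)) \<and>
     (\<forall>s t. (\<lambda>(\<omega>1, \<omega>2). WP \<omega>1 \<omega>2 s t) \<in> borel_measurable (M \<Otimes>\<^sub>M M)) \<and>
     \<comment> \<open>q-integrable suprema\<close>
     LqE M q (\<lambda>\<omega>. SUP t\<in>{0..T}. ennreal (norm (W \<omega> t))) < \<infinity> \<and>
     LqE M q (\<lambda>\<omega>. SUP st\<in>S2 T. ennreal (norm (WW \<omega> (fst st) (snd st)))) < \<infinity> \<and>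
     LqE (M \<Otimes>\<^sub>M M) q (\<lambda>(\<omega>1, \<omega>2). SUP st\<in>S2 T. ennreal (norm (WP \<omega>1 \<omega>2 (fst st) (snd st)))) < \<infinity> \<and>
     \<comment> \<open>sections continuous into L^q(Omega), and the whole map continuous into L^q(Omega^2)\<close>
     (\<forall>\<omega>. \<forall>(s, t)\<in>S2 T. in_Lq M q (\<lambda>\<omega>'. WP \<omega> \<omega>' s t) \<and> in_Lq M q (\<lambda>\<omega>'. WP \<omega>' \<omega> s t)) \<and>
     (\<forall>\<omega>. Lq_continuous_on M q (S2 T) (\<lambda>(s, t) \<omega>'. WP \<omega> \<omega>' s t)) \<and>
     (\<forall>\<omega>. Lq_continuous_on M q (S2 T) (\<lambda>(s, t) \<omega>'. WP \<omega>' \<omega> s t)) \<and>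
     (\<forall>(s, t)\<in>S2 T. in_Lq (M \<Otimes>\<^sub>M M) q (\<lambda>(\<omega>1, \<omega>2). WP \<omega>1 \<omega>2 s t)) \<and>
     Lq_continuous_on (M \<Otimes>\<^sub>M M) q (S2 T) (\<lambda>(s, t) (\<omega>1, \<omega>2). WP \<omega>1 \<omega>2 s t) \<and>
     \<comment> \<open>Chen's relations (the three relations for WP all amount to this pointwise identity)\<close>
     (\<forall>\<omega> r s t. 0 \<le> r \<longrightarrow> r \<le> s \<longrightarrow> s \<le> t \<longrightarrow> t \<le> T \<longrightarrow>
        WW \<omega> r t = WW \<omega> r s + WW \<omega> s t + outer (W \<omega> s - W \<omega> r) (W \<omega> t - W \<omega> s)) \<and>
     (\<forall>\<omega>1 \<omega>2 r s t. 0 \<le> r \<longrightarrow> r \<le> s \<longrightarrow> s \<le> t \<longrightarrow> t \<le> T \<longrightarrow>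
        WP \<omega>1 \<omega>2 r t = WP \<omega>1 \<omega>2 r s + WP \<omega>1 \<omega>2 s t + outer (W \<omega>1 s - W \<omega>1 r) (W \<omega>2 t - W \<omega>2 s)) \<and>
     \<comment> \<open>integrability of the variation functional v\<close>
     (\<forall>\<omega>. vfun M p q W WW WP 0 T \<omega> < \<infinity>) \<and>
     LqE M q (vfun M p q W WW WP 0 T) < \<infinity> \<and>
     pvar (\<lambda>a b. LqE M q (vfun M p q W WW WP a b)) 0 T < \<infinity>"

definition control ::
  "'w measure \<Rightarrow> real \<Rightarrow> real \<Rightarrow> real \<Rightarrow> ('w \<Rightarrow> real \<Rightarrow> real^'m) \<Rightarrow> ('w \<Rightarrow> real \<Rightarrow> real \<Rightarrow> real^'m^'m)
   \<Rightarrow> ('w \<Rightarrow> 'w \<Rightarrow> real \<Rightarrow> real \<Rightarrow> real^'m^'m) \<Rightarrow> (real \<Rightarrow> real \<Rightarrow> 'w \<Rightarrow> real) \<Rightarrow> bool" where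
  "control M T p q W WW WP w \<longleftrightarrow>
     (\<forall>s t. (\<lambda>\<omega>. w s t \<omega>) \<in> borel_measurable M) \<and>
     (\<forall>\<omega>. continuous_on (S2 T) (\<lambda>(s, t). w s t \<omega>)) \<and>
     (\<forall>(s, t)\<in>S2 T. \<forall>\<omega>. 0 \<le> w s t \<omega> \<and>
        vfun M p q W WW WP s t \<omega> + pvar (\<lambda>a b. LqE M q (vfun M p q W WW WP a b)) s t \<le> ennreal (w s t \<omega>)) \<and>
     (\<forall>(s, t)\<in>S2 T. \<forall>\<omega>. Lq M q (\<lambda>\<omega>'. w s t \<omega>') \<le> ennreal (2 * w s t \<omega>)) \<and>
     (\<forall>s u t \<omega>. 0 \<le> s \<longrightarrow> s \<le> u \<longrightarrow> u \<le> t \<longrightarrow> t \<le> T \<longrightarrow> w s u \<omega> + w u t \<omega> \<le> w s t \<omega>)"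

definition cp_rem ::
  "'w measure \<Rightarrow> ('w \<Rightarrow> real \<Rightarrow> real^'m) \<Rightarrow> 'w \<Rightarrow> (real \<Rightarrow> 'v::euclidean_space) \<Rightarrow> (real \<Rightarrow> 'v^'m)
   \<Rightarrow> (real \<Rightarrow> 'w \<Rightarrow> 'v^'m) \<Rightarrow> real \<Rightarrow> real \<Rightarrow> 'v" where
  "cp_rem M W \<omega> X DX DmuX s t =
     X t - X s - apply_deriv (DX s) (W \<omega> t - W \<omega> s)
     - (\<integral>\<omega>'. apply_deriv (DmuX s \<omega>') (W \<omega>' t - W \<omega>' s) \<partial>M)"

text \<open>The seminorm |||X(omega)|||_{[0,T],w,p}; ennreal division gives a/0 = infinity for a > 0, 0/0 = 0.\<close>
definition cp_norm ::
  "'w measure \<Rightarrow> ('w \<Rightarrow> real \<Rightarrow> real^'m) \<Rightarrow> (real \<Rightarrow> real \<Rightarrow> 'w \<Rightarrow> real) \<Rightarrow> real \<Rightarrow> real \<Rightarrow> 'w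
   \<Rightarrow> (real \<Rightarrow> 'v::euclidean_space) \<Rightarrow> (real \<Rightarrow> 'v^'m) \<Rightarrow> (real \<Rightarrow> 'w \<Rightarrow> 'v^'m) \<Rightarrow> ennreal" where
  "cp_norm M W w T p \<omega> X DX DmuX =
       (SUP st\<in>S2 T. ennreal (norm (X (snd st) - X (fst st)))
                      / ennreal (w (fst st) (snd st) \<omega> powr (1 / p)))
     + (SUP st\<in>S2 T. ennreal (norm (DX (snd st) - DX (fst st)))
                      / ennreal (w (fst st) (snd st) \<omega> powr (1 / p)))
     + (SUP st\<in>S2 T. Lq M (4 / 3) (\<lambda>\<omega>'. DmuX (snd st) \<omega>' - DmuX (fst st) \<omega>')
                      / ennreal (w (fst st) (snd st) \<omega> powr (1 / p)))
     + (SUP st\<in>S2 T. ennreal (norm (cp_rem M W \<omega> X DX DmuX (fst st) (snd st)))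
                      / ennreal (w (fst st) (snd st) \<omega> powr (2 / p)))"

definition cp_norm_star ::
  "'w measure \<Rightarrow> ('w \<Rightarrow> real \<Rightarrow> real^'m) \<Rightarrow> (real \<Rightarrow> real \<Rightarrow> 'w \<Rightarrow> real) \<Rightarrow> real \<Rightarrow> real \<Rightarrow> 'w
   \<Rightarrow> (real \<Rightarrow> 'v::euclidean_space) \<Rightarrow> (real \<Rightarrow> 'v^'m) \<Rightarrow> (real \<Rightarrow> 'w \<Rightarrow> 'v^'m) \<Rightarrow> ennreal" where
  "cp_norm_star M W w T p \<omega> X DX DmuX =
     ennreal (norm (X 0)) + ennreal (norm (DX 0)) + Lq M (4 / 3) (DmuX 0)
     + cp_norm M W w T p \<omega> X DX DmuX"

text \<open>omega-controlled path with path X, Gubinelli derivative DX and measure derivative DmuX.\<close>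
definition controlled_path ::
  "'w measure \<Rightarrow> ('w \<Rightarrow> real \<Rightarrow> real^'m) \<Rightarrow> (real \<Rightarrow> real \<Rightarrow> 'w \<Rightarrow> real) \<Rightarrow> real \<Rightarrow> real \<Rightarrow> 'w
   \<Rightarrow> (real \<Rightarrow> 'v::euclidean_space) \<Rightarrow> (real \<Rightarrow> 'v^'m) \<Rightarrow> (real \<Rightarrow> 'w \<Rightarrow> 'v^'m) \<Rightarrow> bool" where
  "controlled_path M W w T p \<omega> X DX DmuX \<longleftrightarrow>
     continuous_on {0..T} X \<and> continuous_on {0..T} DX \<and>
     (\<forall>t\<in>{0..T}. in_Lq M (4 / 3) (DmuX t)) \<and> Lq_continuous_on M (4 / 3) {0..T} DmuX \<and>
     continuous_on (S2 T) (\<lambda>(s, t). cp_rem M W \<omega> X DX DmuX s t) \<and>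
     cp_norm M W w T p \<omega> X DX DmuX < \<infinity>"

definition random_controlled_path ::
  "'w measure \<Rightarrow> ('w \<Rightarrow> real \<Rightarrow> real^'m) \<Rightarrow> (real \<Rightarrow> real \<Rightarrow> 'w \<Rightarrow> real) \<Rightarrow> real \<Rightarrow> real
   \<Rightarrow> ('w \<Rightarrow> real \<Rightarrow> 'v::euclidean_space) \<Rightarrow> ('w \<Rightarrow> real \<Rightarrow> 'v^'m) \<Rightarrow> ('w \<Rightarrow> real \<Rightarrow> 'w \<Rightarrow> 'v^'m) \<Rightarrow> bool" where
  "random_controlled_path M W w T p Y DY DmuY \<longleftrightarrow>
     (\<forall>\<omega>. controlled_path M W w T p \<omega> (Y \<omega>) (DY \<omega>) (DmuY \<omega>)) \<and>
     (\<forall>t. (\<lambda>\<omega>. Y \<omega> t) \<in> borel_measurable M) \<and>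
     (\<forall>t. (\<lambda>\<omega>. DY \<omega> t) \<in> borel_measurable M) \<and>
     (\<forall>t. (\<lambda>(\<omega>, \<omega>'). DmuY \<omega> t \<omega>') \<in> borel_measurable (M \<Otimes>\<^sub>M M)) \<and>
     (\<forall>s t. (\<lambda>\<omega>. cp_rem M W \<omega> (Y \<omega>) (DY \<omega>) (DmuY \<omega>) s t) \<in> borel_measurable M) \<and>
     Lq M 2 (\<lambda>\<omega>. Y \<omega> 0) < \<infinity> \<and>
     LqE M 8 (\<lambda>\<omega>. cp_norm M W w T p \<omega> (Y \<omega>) (DY \<omega>) (DmuY \<omega>)) < \<infinity>"

text \<open>G : R^d x L^2(Omega;R^d) -> V is continuously Frechet differentiable with partial x-derivative Gx
  (column l = derivative in direction e_l) and L^2-gradient GZ, i.e.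
  G(x+h, Z+H) = G(x,Z) + Gx(x,Z) h + E[GZ(x,Z) H] + o(|h| + ||H||_2), and
  (x,Z) -> (Gx(x,Z), GZ(x,Z)) is continuous into V^d x L^2.\<close>
definition frechet_C1 ::
  "'w measure \<Rightarrow> (real^'d \<Rightarrow> ('w \<Rightarrow> real^'d) \<Rightarrow> 'v::euclidean_space)
   \<Rightarrow> (real^'d \<Rightarrow> ('w \<Rightarrow> real^'d) \<Rightarrow> 'v^'d) \<Rightarrow> (real^'d \<Rightarrow> ('w \<Rightarrow> real^'d) \<Rightarrow> 'w \<Rightarrow> 'v^'d) \<Rightarrow> bool" where
  "frechet_C1 M G Gx GZ \<longleftrightarrow>
     (\<forall>x Z. in_Lq M 2 Z \<longrightarrow> in_Lq M 2 (GZ x Z) \<and>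
       (\<forall>e>0. \<exists>\<delta>>0. \<forall>h H. in_Lq M 2 H \<longrightarrow> norm h + enn2real (Lq M 2 H) < \<delta> \<longrightarrow>
          norm (G (x + h) (\<lambda>\<omega>. Z \<omega> + H \<omega>) - G x Z - apply_deriv (Gx x Z) h
                - (\<integral>\<omega>. apply_deriv (GZ x Z \<omega>) (H \<omega>) \<partial>M))
          \<le> e * (norm h + enn2real (Lq M 2 H))) \<and>
       (\<forall>e>0. \<exists>\<delta>>0. \<forall>x' Z'. in_Lq M 2 Z' \<longrightarrow>
          norm (x' - x) + enn2real (Lq M 2 (\<lambda>\<omega>. Z' \<omega> - Z \<omega>)) < \<delta> \<longrightarrow>
          norm (Gx x' Z' - Gx x Z) + enn2real (Lq M 2 (\<lambda>\<omega>. GZ x' Z' \<omega> - GZ x Z \<omega>)) < e))"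

text \<open>Regularity assumptions 1 for F(x, mu), with lift F(x, Z) = F(x, law of Z).
  DxF = partial_x F, DZF = nabla_Z F = D_mu F(x, L(Z))(Z), DxxF = partial_x^2 F,
  DxZF = partial_x nabla_Z F (all as functions of (x, Z)).\<close>
definition regularity1 ::
  "'w measure \<Rightarrow> (real^'d \<Rightarrow> (real^'d) measure \<Rightarrow> 'v::euclidean_space)
   \<Rightarrow> (real^'d \<Rightarrow> ('w \<Rightarrow> real^'d) \<Rightarrow> 'v^'d) \<Rightarrow> (real^'d \<Rightarrow> ('w \<Rightarrow> real^'d) \<Rightarrow> 'w \<Rightarrow> 'v^'d)
   \<Rightarrow> (real^'d \<Rightarrow> ('w \<Rightarrow> real^'d) \<Rightarrow> 'v^'d^'d) \<Rightarrow> (real^'d \<Rightarrow> ('w \<Rightarrow> real^'d) \<Rightarrow> 'w \<Rightarrow> 'v^'d^'d)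
   \<Rightarrow> real \<Rightarrow> bool" where
  "regularity1 M F DxF DZF DxxF DxZF \<Lambda> \<longleftrightarrow>
     frechet_C1 M (\<lambda>x Z. F x (distr M borel Z)) DxF DZF \<and>
     frechet_C1 M DxF DxxF DxZF \<and>
     (\<forall>x Z. in_Lq M 2 Z \<longrightarrow>
        norm (F x (distr M borel Z)) \<le> \<Lambda> \<and> norm (DxF x Z) \<le> \<Lambda> \<and> norm (DxxF x Z) \<le> \<Lambda> \<and>
        Lq M 2 (DZF x Z) \<le> ennreal \<Lambda> \<and> Lq M 2 (DxZF x Z) \<le> ennreal \<Lambda>) \<and>
     (\<forall>x Z Z'. in_Lq M 2 Z \<longrightarrow> in_Lq M 2 Z' \<longrightarrow>
        Lq M 2 (\<lambda>\<omega>. DZF x Z \<omega> - DZF x Z' \<omega>) \<le> ennreal \<Lambda> * Lq M 2 (\<lambda>\<omega>. Z \<omega> - Z' \<omega>))"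

end

theory Submission
  imports Defs
begin

(* Write lift(x, Z) = F(x, law of Z). Mean value inequalities along segments in R^d and along lines
   in L^2 turn the bounds of Regularity assumptions 1 into Lipschitz and second-order Taylor
   estimates for lift and its x-derivative in both variables; the L^2-Lipschitz bound of nabla_Z lift
   in x follows by testing against suitable L^2 fields. On [s,t] the increment of lift(X, Y) is
   split into a change of x at fixed Z and a change of Z at fixed x. The pathwise controlled-path
   bounds of X(omega), together with their L^2 / L^4 versions for Y -- obtained from Hoelder's
   inequality, <|||Y|||>_8 and <w(s,t,.)>_q <= 2 w(s,t,omega) -- then bound every quotient in the
   seminorm of lift(X, Y) by a polynomial of degree two in |||X(omega)||| and <|||Y|||>_8. The
   remainder of lift(X, Y) is the sum of the two Taylor remainders, a cross term, dx lift R^X and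
   E[nabla_Z lift R^Y]. *)

section \<open>Lebesgue quasi-norms\<close>

lemma epow_ennreal: "0 \<le> y \<Longrightarrow> epow (ennreal y) r = ennreal (y powr r)"
  by (simp add: epow_def)

lemma epow_top [simp]: "epow \<top> r = \<top>"
  by (simp add: epow_def)

lemma epow_infinity [simp]: "epow \<infinity> r = \<infinity>"
  by (simp add: epow_def)

lemma epow_zero [simp]: "epow 0 r = 0"
  by (simp add: epow_def)

lemma epow_one: "epow x 1 = x"
  by (cases x) (auto simp: epow_def)

lemma epow_epow: "epow (epow x a) b = epow x (a * b)"
  by (cases "x = \<infinity>") (auto simp: epow_def powr_powr)

lemma epow_mono:
  assumes "x \<le> y" "0 \<le> r"
  shows "epow x r \<le> epow y r"
proof (cases "y = \<infinity>")
  case False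
  then have "x \<noteq> \<infinity>" using assms(1) by (auto simp: top_unique)
  then show ?thesis using False assms
    by (simp add: epow_def) (intro ennreal_leI powr_mono2, auto intro!: enn2real_mono simp: less_top)
qed (simp add: epow_def)

lemma epow_mult:
  assumes "0 < r" "x \<noteq> \<infinity>" "y \<noteq> \<infinity>"
  shows "epow (x * y) r = epow x r * epow y r"
proof -
  obtain a b where "x = ennreal a" "y = ennreal b" "0 \<le> a" "0 \<le> b"
    using assms by (cases x; cases y) auto
  then show ?thesis by (simp add: epow_def powr_mult ennreal_mult[symmetric])
qed

lemma powr_add_le:
  fixes x y \<theta> :: real
  assumes "0 \<le> x" "0 \<le> y" "0 < \<theta>"
  shows "(x + y) powr \<theta> \<le> 2 powr \<theta> * (x powr \<theta> + y powr \<theta>)"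
proof -
  have "(x + y) powr \<theta> \<le> (2 * max x y) powr \<theta>"
    using assms by (intro powr_mono2) auto
  also have "\<dots> = 2 powr \<theta> * max x y powr \<theta>" using assms by (simp add: powr_mult)
  also have "max x y powr \<theta> \<le> x powr \<theta> + y powr \<theta>"
    by (cases "x \<le> y") (auto simp: max_def)
  finally show ?thesis by simp
qed

lemma two_mult_powr_le: "0 < \<theta> \<Longrightarrow> \<theta> \<le> 1 \<Longrightarrow> 0 \<le> u \<Longrightarrow> (2 * u) powr \<theta> \<le> 2 * u powr (\<theta>::real)"
  using powr_mono[of \<theta> 1 2] by (simp add: powr_mult mult_right_mono)

lemma epow_add_le:
  assumes "0 < \<theta>" "\<theta> \<le> 1"
  shows "epow (I + J) \<theta> \<le> 2 * (epow I \<theta> + epow J \<theta>)"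
proof (cases "I = \<infinity> \<or> J = \<infinity>")
  case True then show ?thesis by (auto simp: ennreal_mult_eq_top_iff)
next
  case False
  then obtain i j where ij: "I = ennreal i" "J = ennreal j" "0 \<le> i" "0 \<le> j"
    by (cases I; cases J) auto
  have "2 powr \<theta> \<le> 2" using assms powr_mono[of \<theta> 1 2] by simp
  then have "(i + j) powr \<theta> \<le> 2 * (i powr \<theta> + j powr \<theta>)"
    using powr_add_le[of i j \<theta>] ij assms
    by (meson add_nonneg_nonneg mult_right_mono order_trans powr_ge_zero)
  then have "epow (I + J) \<theta> \<le> ennreal (2 * (i powr \<theta> + j powr \<theta>))"
    using ij by (simp add: epow_ennreal ennreal_leI flip: ennreal_plus)
  also have "\<dots> = 2 * (epow I \<theta> + epow J \<theta>)"
    using ij by (simp add: epow_ennreal ennreal_mult ennreal_plus)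
  finally show ?thesis .
qed

lemma LqE_ennreal:
  "(\<And>x. 0 \<le> f x) \<Longrightarrow> LqE M r (\<lambda>x. ennreal (f x)) = epow (\<integral>\<^sup>+ x. ennreal (f x powr r) \<partial>M) (1/r)"
  unfolding LqE_def by (simp add: epow_ennreal)

lemma LqE_1: "LqE M 1 f = (\<integral>\<^sup>+ x. f x \<partial>M)"
  unfolding LqE_def by (simp add: epow_one)

lemma LqE_mono:
  assumes "\<And>x. x \<in> space M \<Longrightarrow> f x \<le> g x" "0 < r"
  shows "LqE M r f \<le> LqE M r g"
  unfolding LqE_def using assms by (intro epow_mono nn_integral_mono) auto

lemma LqE_mono_AE:
  assumes "AE x in M. f x \<le> g x" "0 < r"
  shows "LqE M r f \<le> LqE M r g"
  unfolding LqE_def using assms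
  by (intro epow_mono nn_integral_mono_AE) (auto elim!: eventually_mono intro: epow_mono)

lemma LqE_powr:
  fixes f :: "'a \<Rightarrow> real"
  assumes "\<And>x. 0 \<le> f x" "0 < b" "0 < \<theta>"
  shows "LqE M b (\<lambda>x. ennreal (f x powr \<theta>)) = epow (LqE M (b * \<theta>) (\<lambda>x. ennreal (f x))) \<theta>"
proof -
  have "(\<lambda>x. ennreal ((f x powr \<theta>) powr b)) = (\<lambda>x. ennreal (f x powr (b * \<theta>)))"
    by (simp add: powr_powr mult.commute)
  then show ?thesis
    using assms by (simp add: LqE_ennreal epow_epow)
qed

lemma LqE_cmult:
  fixes f :: "'a \<Rightarrow> real"
  assumes f: "f \<in> borel_measurable M" "\<And>x. 0 \<le> f x" and c: "0 \<le> c" and r: "0 < r"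
  shows "LqE M r (\<lambda>x. ennreal (c * f x)) = ennreal c * LqE M r (\<lambda>x. ennreal (f x))"
proof -
  define I where "I = (\<integral>\<^sup>+ x. ennreal (f x powr r) \<partial>M)"
  have "(\<integral>\<^sup>+ x. ennreal ((c * f x) powr r) \<partial>M) = (\<integral>\<^sup>+ x. ennreal (c powr r) * ennreal (f x powr r) \<partial>M)"
    using c f by (intro nn_integral_cong) (simp add: powr_mult ennreal_mult)
  also have "\<dots> = ennreal (c powr r) * I" unfolding I_def using f by (simp add: nn_integral_cmult)
  finally have L: "LqE M r (\<lambda>x. ennreal (c * f x)) = epow (ennreal (c powr r) * I) (1/r)"
    using c f by (simp add: LqE_ennreal)
  have R: "LqE M r (\<lambda>x. ennreal (f x)) = epow I (1/r)"
    using f by (simp add: LqE_ennreal I_def)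
  consider "c = 0" | "0 < c" "I = \<infinity>" | "0 < c" "I \<noteq> \<infinity>"
    using c by fastforce
  then show ?thesis
  proof cases
    case 1
    then show ?thesis by (simp add: LqE_def)
  next
    case 2
    then show ?thesis unfolding L R by (simp add: ennreal_mult_eq_top_iff)
  next
    case 3
    then show ?thesis unfolding L R using r by (simp add: epow_mult epow_ennreal powr_powr)
  qed
qed

text \<open>A quasi-triangle inequality, with constant 4 in place of Minkowski's 1, suffices for all estimates.\<close>

lemma LqE_add_le:
  fixes f g :: "'a \<Rightarrow> real"
  assumes f: "f \<in> borel_measurable M" "\<And>x. 0 \<le> f x"
    and g: "g \<in> borel_measurable M" "\<And>x. 0 \<le> g x" and r: "1 \<le> r"
  shows "LqE M r (\<lambda>x. ennreal (f x + g x))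
     \<le> 4 * (LqE M r (\<lambda>x. ennreal (f x)) + LqE M r (\<lambda>x. ennreal (g x)))"
proof -
  define I where "I = (\<integral>\<^sup>+ x. ennreal (f x powr r) \<partial>M)"
  define J where "J = (\<integral>\<^sup>+ x. ennreal (g x powr r) \<partial>M)"
  have "(\<integral>\<^sup>+ x. ennreal ((f x + g x) powr r) \<partial>M)
      \<le> (\<integral>\<^sup>+ x. ennreal (2 powr r) * (ennreal (f x powr r) + ennreal (g x powr r)) \<partial>M)"
  proof (intro nn_integral_mono)
    fix x
    have "(f x + g x) powr r \<le> 2 powr r * (f x powr r + g x powr r)"
      using powr_add_le f g r by simp
    then show "ennreal ((f x + g x) powr r) \<le> ennreal (2 powr r) * (ennreal (f x powr r) + ennreal (g x powr r))"
      by (simp add: ennreal_mult[symmetric] ennreal_plus[symmetric] ennreal_leI del: ennreal_plus)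
  qed
  also have "\<dots> = ennreal (2 powr r) * (I + J)"
    unfolding I_def J_def using f g by (simp add: nn_integral_cmult nn_integral_add)
  moreover have "LqE M r (\<lambda>x. ennreal (f x + g x)) = epow (\<integral>\<^sup>+ x. ennreal ((f x + g x) powr r) \<partial>M) (1/r)"
    by (rule LqE_ennreal) (use f g in auto)
  ultimately have "LqE M r (\<lambda>x. ennreal (f x + g x)) \<le> epow (ennreal (2 powr r) * (I + J)) (1/r)"
    using r by (simp add: epow_mono)
  also have "\<dots> \<le> 2 * epow (I + J) (1/r)"
  proof (cases "I + J = \<infinity>")
    case True
    then have "epow (I + J) (1/r) = \<top>" by (metis epow_infinity infinity_ennreal_def)
    moreover have "(2::ennreal) * \<top> = \<top>" by (simp add: ennreal_mult_top)
    ultimately show ?thesis by simp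
  next
    case False
    then show ?thesis using r by (simp add: epow_mult epow_ennreal powr_powr)
  qed
  also have "\<dots> \<le> 2 * (2 * (epow I (1/r) + epow J (1/r)))"
    using r by (intro mult_left_mono epow_add_le) auto
  finally show ?thesis
    using f g by (simp add: LqE_ennreal I_def J_def mult.assoc[symmetric])
qed

lemma Youngs_inequality_nonneg:
  fixes u v :: real
  assumes "0 \<le> u" "0 \<le> v" "0 < \<alpha>" "0 < \<beta>" "\<alpha> + \<beta> = 1"
  shows "u powr \<alpha> * v powr \<beta> \<le> \<alpha> * u + \<beta> * v"
  using assms Youngs_inequality_0[of \<alpha> \<beta> u v] by (cases "u = 0 \<or> v = 0") auto

text \<open>Integrated Young inequality for the normalised functions \<open>f\<^sup>a / i\<close> and \<open>g\<^sup>b / j\<close>.\<close>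

lemma nn_integral_powr_mult_le:
  fixes f g :: "'a \<Rightarrow> real"
  assumes f: "f \<in> borel_measurable M" "\<And>x. 0 \<le> f x" and g: "g \<in> borel_measurable M" "\<And>x. 0 \<le> g x"
    and r: "0 < r" "0 < a" "0 < b" "1/r = 1/a + 1/b"
    and i: "(\<integral>\<^sup>+ x. ennreal (f x powr a) \<partial>M) = ennreal i" "0 < i"
    and j: "(\<integral>\<^sup>+ x. ennreal (g x powr b) \<partial>M) = ennreal j" "0 < j"
  shows "(\<integral>\<^sup>+ x. ennreal ((f x * g x) powr r) \<partial>M) \<le> ennreal (i powr (r/a) * j powr (r/b))"
proof -
  define \<alpha> \<beta> where "\<alpha> = r / a" and "\<beta> = r / b"
  have ab: "0 < \<alpha>" "0 < \<beta>" "\<alpha> + \<beta> = 1"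
    using r unfolding \<alpha>_def \<beta>_def by (auto simp: field_simps)
  define c where "c = i powr \<alpha> * j powr \<beta>"
  have c: "0 < c" unfolding c_def using i j by simp
  have pt: "(f x * g x) powr r \<le> c * (\<alpha> / i * f x powr a + \<beta> / j * g x powr b)" for x
  proof -
    have "(f x * g x) powr r = c * ((f x powr a / i) powr \<alpha> * (g x powr b / j) powr \<beta>)"
      using i j f(2)[of x] g(2)[of x] r
      by (simp add: c_def powr_divide powr_powr powr_mult \<alpha>_def \<beta>_def)
    also have "\<dots> \<le> c * (\<alpha> * (f x powr a / i) + \<beta> * (g x powr b / j))"
      using c i j ab by (intro mult_left_mono Youngs_inequality_nonneg) auto
    finally show ?thesis by simp
  qed
  have "(\<integral>\<^sup>+ x. ennreal ((f x * g x) powr r) \<partial>M)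
      \<le> (\<integral>\<^sup>+ x. ennreal (c * (\<alpha> / i)) * ennreal (f x powr a) + ennreal (c * (\<beta> / j)) * ennreal (g x powr b) \<partial>M)"
  proof (intro nn_integral_mono)
    fix x
    have "ennreal ((f x * g x) powr r) \<le> ennreal (c * (\<alpha> / i) * f x powr a + c * (\<beta> / j) * g x powr b)"
      using pt[of x] by (intro ennreal_leI) (simp add: algebra_simps)
    also have "\<dots> = ennreal (c * (\<alpha> / i) * f x powr a) + ennreal (c * (\<beta> / j) * g x powr b)"
      using c i j ab by (intro ennreal_plus) auto
    also have "\<dots> = ennreal (c * (\<alpha> / i)) * ennreal (f x powr a) + ennreal (c * (\<beta> / j)) * ennreal (g x powr b)"
      by (intro arg_cong2[where f="(+)"] ennreal_mult'') simp_all
    finally show "ennreal ((f x * g x) powr r) \<le> \<dots>" .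
  qed
  also have "\<dots> = ennreal (c * (\<alpha> / i)) * ennreal i + ennreal (c * (\<beta> / j)) * ennreal j"
    using f g by (simp add: nn_integral_add nn_integral_cmult i j)
  also have "\<dots> = ennreal c"
    using c i j ab by (simp add: ennreal_mult[symmetric] del: ennreal_plus)
      (simp add: ennreal_plus[symmetric] del: ennreal_plus flip: distrib_left)
  finally show ?thesis unfolding c_def \<alpha>_def \<beta>_def .
qed

lemma AE_eq_0_of_nn_integral_powr_eq_0:
  fixes h :: "'a \<Rightarrow> real"
  assumes "(\<integral>\<^sup>+ x. ennreal (h x powr e) \<partial>M) = 0" "h \<in> borel_measurable M" "\<And>x. 0 \<le> h x"
  shows "AE x in M. h x = 0"
proof -
  have "AE x in M. ennreal (h x powr e) = 0"
    using assms by (subst nn_integral_0_iff_AE[symmetric]) auto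
  then show ?thesis by eventually_elim (use assms in auto)
qed

lemma LqE_Hoelder:
  fixes f g :: "'a \<Rightarrow> real"
  assumes f: "f \<in> borel_measurable M" "\<And>x. 0 \<le> f x" and g: "g \<in> borel_measurable M" "\<And>x. 0 \<le> g x"
    and r: "0 < r" "0 < a" "0 < b" "1/r = 1/a + 1/b"
  shows "LqE M r (\<lambda>x. ennreal (f x * g x))
     \<le> LqE M a (\<lambda>x. ennreal (f x)) * LqE M b (\<lambda>x. ennreal (g x))"
proof -
  define I J where "I = (\<integral>\<^sup>+ x. ennreal (f x powr a) \<partial>M)" and "J = (\<integral>\<^sup>+ x. ennreal (g x powr b) \<partial>M)"
  define K where "K = (\<integral>\<^sup>+ x. ennreal ((f x * g x) powr r) \<partial>M)"
  have eqs: "LqE M r (\<lambda>x. ennreal (f x * g x)) = epow K (1/r)"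
    "LqE M a (\<lambda>x. ennreal (f x)) = epow I (1/a)" "LqE M b (\<lambda>x. ennreal (g x)) = epow J (1/b)"
    unfolding I_def J_def K_def using f g by (simp_all add: LqE_ennreal)
  consider "I = 0 \<or> J = 0" | "I \<noteq> 0" "J \<noteq> 0" "I = \<infinity> \<or> J = \<infinity>"
    | i j where "I = ennreal i" "0 < i" "J = ennreal j" "0 < j"
    by (cases I rule: ennreal_cases; cases J rule: ennreal_cases) (fastforce simp: less_le)+
  then show ?thesis
  proof cases
    case 1
    then have "AE x in M. f x = 0 \<or> g x = 0"
      using AE_eq_0_of_nn_integral_powr_eq_0[of M f a] AE_eq_0_of_nn_integral_powr_eq_0[of M g b] f g
      unfolding I_def J_def by (auto elim!: eventually_mono)
    then have "K = 0"
      unfolding K_def using r f g by (subst nn_integral_0_iff_AE) (auto elim!: eventually_mono)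
    then show ?thesis unfolding eqs by simp
  next
    case 2
    then have "epow I (1/a) \<noteq> 0" "epow J (1/b) \<noteq> 0"
      using r by (cases I; cases J; auto simp: epow_def)+
    then have "epow I (1/a) * epow J (1/b) = \<infinity>"
      using 2 by (auto simp: ennreal_mult_eq_top_iff)
    then show ?thesis unfolding eqs by simp
  next
    case 3
    have "K \<le> ennreal (i powr (r/a) * j powr (r/b))"
      unfolding K_def by (rule nn_integral_powr_mult_le[OF f g r]) (use 3 in \<open>auto simp: I_def J_def\<close>)
    then have "epow K (1/r) \<le> ennreal ((i powr (r/a) * j powr (r/b)) powr (1/r))"
      using r by (metis epow_ennreal epow_mono less_eq_real_def powr_ge_zero zero_le_divide_1_iff zero_le_mult_iff)
    also have "(i powr (r/a) * j powr (r/b)) powr (1/r) = i powr (1/a) * j powr (1/b)"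
    proof -
      have "r/a * (1/r) = 1/a" "r/b * (1/r) = 1/b" using r(1) by auto
      then show ?thesis by (simp only: powr_mult powr_powr)
    qed
    finally show ?thesis unfolding eqs using 3 by (simp add: epow_ennreal ennreal_mult)
  qed
qed

lemma (in prob_space) LqE_const:
  assumes "0 \<le> c" "0 < r"
  shows "LqE M r (\<lambda>x. ennreal c) = ennreal c"
  using assms by (simp add: LqE_ennreal emeasure_space_1 epow_ennreal powr_powr)

lemma (in prob_space) LqE_mono_exponent:
  fixes f :: "'a \<Rightarrow> real"
  assumes f: "f \<in> borel_measurable M" "\<And>x. 0 \<le> f x" and rs: "0 < r" "r \<le> s"
  shows "LqE M r (\<lambda>x. ennreal (f x)) \<le> LqE M s (\<lambda>x. ennreal (f x))"
proof (cases "r = s")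
  case False
  define b where "b = r * s / (s - r)"
  have b: "0 < b" "1/r = 1/s + 1/b" using rs False unfolding b_def by (auto simp: field_simps)
  have "LqE M r (\<lambda>x. ennreal (f x * 1)) \<le> LqE M s (\<lambda>x. ennreal (f x)) * LqE M b (\<lambda>x. ennreal 1)"
    by (rule LqE_Hoelder[OF f]) (use rs b in auto)
  then show ?thesis using LqE_const[of 1 b] b by simp
qed simp

lemma norm_integral_le_Lq1:
  fixes f :: "'a \<Rightarrow> 'b::{banach, second_countable_topology}"
  shows "ennreal (norm (integral\<^sup>L M f)) \<le> Lq M 1 f"
proof (cases "integrable M f")
  case True
  then show ?thesis unfolding Lq_def LqE_1 by (simp add: integral_norm_bound_ennreal)
qed (simp add: not_integrable_integral_eq)

lemma Lq_mono:
  assumes "\<And>x. x \<in> space M \<Longrightarrow> norm (f x) \<le> norm (g x)" "0 < r"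
  shows "Lq M r f \<le> Lq M r g"
  unfolding Lq_def using assms by (intro LqE_mono) auto

lemma Lq_minus_commute: "Lq M r (\<lambda>x. f x - g x) = Lq M r (\<lambda>x. g x - f x)"
  by (simp add: Lq_def norm_minus_commute)

lemma Lq_scaleR:
  assumes "H \<in> borel_measurable M" "0 < r"
  shows "Lq M r (\<lambda>x. c *\<^sub>R H x) = ennreal \<bar>c\<bar> * Lq M r H"
  unfolding Lq_def using LqE_cmult[of "\<lambda>x. norm (H x)" M "\<bar>c\<bar>" r] assms by simp

lemma Lq_Hoelder:
  fixes f :: "'a \<Rightarrow> 'b::real_normed_vector" and g :: "'a \<Rightarrow> 'c::real_normed_vector"
    and h :: "'a \<Rightarrow> 'e::real_normed_vector"
  assumes "(\<lambda>x. norm (f x)) \<in> borel_measurable M" "(\<lambda>x. norm (g x)) \<in> borel_measurable M"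
    and "\<And>x. norm (h x) \<le> norm (f x) * norm (g x)"
    and "0 < r" "0 < a" "0 < b" "1/r = 1/a + 1/b"
  shows "Lq M r h \<le> Lq M a f * Lq M b g"
proof -
  have "Lq M r h \<le> LqE M r (\<lambda>x. ennreal (norm (f x) * norm (g x)))"
    unfolding Lq_def using assms by (intro LqE_mono ennreal_leI) auto
  also have "\<dots> \<le> Lq M a f * Lq M b g"
    unfolding Lq_def using assms by (intro LqE_Hoelder) auto
  finally show ?thesis .
qed

lemma (in prob_space) Lq_le_AE_bounded_factor:
  fixes f :: "'a \<Rightarrow> 'b::real_normed_vector" and g :: "'a \<Rightarrow> 'c::real_normed_vector"
    and h :: "'a \<Rightarrow> 'e::real_normed_vector"
  assumes f: "(\<lambda>x. norm (f x)) \<in> borel_measurable M"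
    and g: "AE x in M. norm (g x) \<le> c" and c: "0 \<le> c"
    and h: "\<And>x. norm (h x) \<le> norm (f x) * norm (g x)" and r: "0 < r" "r \<le> 2"
  shows "Lq M r h \<le> ennreal c * Lq M 2 f"
proof -
  have "Lq M r h \<le> LqE M r (\<lambda>x. ennreal (c * norm (f x)))"
    unfolding Lq_def
  proof (rule LqE_mono_AE[OF _ r(1)])
    show "AE x in M. ennreal (norm (h x)) \<le> ennreal (c * norm (f x))"
      using g
    proof eventually_elim
      case (elim x)
      have "norm (h x) \<le> norm (f x) * norm (g x)" by (rule h)
      also have "\<dots> \<le> norm (f x) * c" using elim by (intro mult_left_mono) auto
      finally show ?case by (intro ennreal_leI) (simp add: mult.commute)
    qed
  qed
  also have "\<dots> = ennreal c * LqE M r (\<lambda>x. ennreal (norm (f x)))"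
    by (rule LqE_cmult[OF f _ c r(1)]) simp
  also have "\<dots> \<le> ennreal c * Lq M 2 f"
    unfolding Lq_def by (intro mult_left_mono LqE_mono_exponent f) (use r in auto)
  finally show ?thesis .
qed

lemma Lq_add_le:
  fixes f g :: "'a \<Rightarrow> 'b::real_normed_vector"
  assumes "f \<in> borel_measurable M" "g \<in> borel_measurable M" "1 \<le> r"
  shows "Lq M r (\<lambda>x. f x + g x) \<le> 4 * (Lq M r f + Lq M r g)"
proof -
  have "Lq M r (\<lambda>x. f x + g x) \<le> LqE M r (\<lambda>x. ennreal (norm (f x) + norm (g x)))"
    unfolding Lq_def using assms by (intro LqE_mono ennreal_leI norm_triangle_ineq) auto
  also have "\<dots> \<le> 4 * (Lq M r f + Lq M r g)"
    unfolding Lq_def using assms by (intro LqE_add_le) auto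
  finally show ?thesis .
qed

lemma Lq_diff_le:
  fixes f g :: "'a \<Rightarrow> 'b::{real_normed_vector, second_countable_topology}"
  assumes "f \<in> borel_measurable M" "g \<in> borel_measurable M" "1 \<le> r"
  shows "Lq M r (\<lambda>x. f x - g x) \<le> 4 * (Lq M r f + Lq M r g)"
  using Lq_add_le[of f M "\<lambda>x. - g x" r] assms by (simp add: Lq_def)

lemma ennreal_4_add_le:
  assumes "A \<le> 4 * (B + C)" "B \<le> ennreal x" "C \<le> ennreal y" "0 \<le> x" "0 \<le> y"
  shows "A \<le> ennreal (4 * (x + y))"
proof -
  have "A \<le> 4 * (ennreal x + ennreal y)"
    using assms by (meson add_mono mult_left_mono order_trans zero_le)
  also have "\<dots> = ennreal (4 * (x + y))" using assms by (simp add: ennreal_mult ennreal_plus)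
  finally show ?thesis .
qed

lemma in_Lq_zero [simp]: "in_Lq M r (\<lambda>x. 0)"
  by (simp add: in_Lq_def Lq_def LqE_def)

lemma in_Lq_le:
  assumes "f \<in> borel_measurable M" "Lq M r f \<le> ennreal c"
  shows "in_Lq M r f"
  using assms by (auto simp: in_Lq_def intro: le_less_trans)

lemma in_Lq_add:
  fixes f g :: "'a \<Rightarrow> 'b::{real_normed_vector, second_countable_topology}"
  assumes "in_Lq M r f" "in_Lq M r g" "1 \<le> r"
  shows "in_Lq M r (\<lambda>x. f x + g x)"
proof -
  have "Lq M r (\<lambda>x. f x + g x) \<le> 4 * (Lq M r f + Lq M r g)"
    using assms by (intro Lq_add_le) (auto simp: in_Lq_def)
  also have "\<dots> < \<infinity>" using assms by (auto simp: in_Lq_def ennreal_mult_less_top)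
  finally show ?thesis using assms by (auto simp: in_Lq_def)
qed

lemma in_Lq_scaleR:
  assumes "in_Lq M r H" "0 < r"
  shows "in_Lq M r (\<lambda>x. c *\<^sub>R H x)"
  using assms Lq_scaleR[of H M r c] by (auto simp: in_Lq_def ennreal_mult_less_top)

lemma in_Lq_diff:
  fixes f g :: "'a \<Rightarrow> 'b::{real_normed_vector, second_countable_topology}"
  assumes "in_Lq M r f" "in_Lq M r g" "1 \<le> r"
  shows "in_Lq M r (\<lambda>x. f x - g x)"
  using in_Lq_add[OF assms(1) in_Lq_scaleR[OF assms(2), of "-1"]] assms(3) by simp

lemma in_Lq_line:
  fixes Z H :: "'a \<Rightarrow> 'b::{real_normed_vector, second_countable_topology}"
  assumes "in_Lq M 2 Z" "in_Lq M 2 H"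
  shows "in_Lq M 2 (\<lambda>x. Z x + \<tau> *\<^sub>R H x)"
  by (intro in_Lq_add in_Lq_scaleR assms) auto

text \<open>Since \<open>enn2real \<infinity> = 0\<close>, \<open>L2_norm M f\<close> is meaningful only when \<open>in_Lq M 2 f\<close>.\<close>

definition L2_norm :: "'a measure \<Rightarrow> ('a \<Rightarrow> 'b::real_normed_vector) \<Rightarrow> real" where
  "L2_norm M f = enn2real (Lq M 2 f)"

lemma L2_norm_nonneg [simp]: "0 \<le> L2_norm M f"
  by (simp add: L2_norm_def)

lemma Lq_2_eq_L2_norm: "in_Lq M 2 f \<Longrightarrow> Lq M 2 f = ennreal (L2_norm M f)"
  by (auto simp: L2_norm_def in_Lq_def less_top)

lemma L2_norm_le: "in_Lq M 2 f \<Longrightarrow> Lq M 2 f \<le> ennreal c \<Longrightarrow> 0 \<le> c \<Longrightarrow> L2_norm M f \<le> c"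
  by (simp add: Lq_2_eq_L2_norm)

lemma L2_norm_scaleR:
  assumes "H \<in> borel_measurable M"
  shows "L2_norm M (\<lambda>x. c *\<^sub>R H x) = \<bar>c\<bar> * L2_norm M H"
  unfolding L2_norm_def using Lq_scaleR[OF assms, of 2 c] by (simp add: enn2real_mult)

lemma L2_norm_power2:
  assumes f: "in_Lq M 2 f"
  shows "L2_norm M f ^ 2 = (\<integral>x. norm (f x) ^ 2 \<partial>M)"
proof -
  define I where "I = (\<integral>\<^sup>+ x. ennreal (norm (f x) ^ 2) \<partial>M)"
  have LI: "Lq M 2 f = epow I (1/2)"
    unfolding Lq_def I_def by (subst LqE_ennreal) auto
  with f obtain i where i: "I = ennreal i" "0 \<le> i"
    by (cases I) (auto simp: in_Lq_def)
  have int: "integrable M (\<lambda>x. norm (f x) ^ 2)"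
    using i f by (intro integrableI_bounded) (auto simp: I_def in_Lq_def)
  have "I = ennreal (\<integral>x. norm (f x) ^ 2 \<partial>M)"
    unfolding I_def using int by (intro nn_integral_eq_integral) auto
  then have "i = (\<integral>x. norm (f x) ^ 2 \<partial>M)" using i by simp
  moreover have "L2_norm M f = i powr (1/2)" unfolding L2_norm_def LI i using i by (simp add: epow_ennreal)
  ultimately show ?thesis
    using i by (simp add: power2_eq_square powr_add[symmetric])
qed

section \<open>Derivatives applied to vectors\<close>

lemma apply_deriv_add_right: "apply_deriv D (a + b) = apply_deriv D a + apply_deriv D b"
  unfolding apply_deriv_def by (simp add: scaleR_add_left sum.distrib)

lemma apply_deriv_diff_right: "apply_deriv D (a - b) = apply_deriv D a - apply_deriv D b"
  unfolding apply_deriv_def by (simp add: scaleR_diff_left sum_subtractf)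

lemma apply_deriv_scaleR_right: "apply_deriv D (c *\<^sub>R a) = c *\<^sub>R apply_deriv D a"
  unfolding apply_deriv_def by (simp add: scaleR_sum_right)

lemma apply_deriv_diff_left: "apply_deriv (D1 - D2) h = apply_deriv D1 h - apply_deriv D2 h"
  unfolding apply_deriv_def by (simp add: scaleR_diff_right sum_subtractf)

lemma apply_deriv_diff_left_fun: "apply_deriv (D1 - D2) = (\<lambda>h. apply_deriv D1 h - apply_deriv D2 h)"
  by (rule ext) (rule apply_deriv_diff_left)

lemma apply_deriv_zero_left [simp]: "apply_deriv 0 h = 0"
  unfolding apply_deriv_def by simp

lemma apply_deriv_zero_right [simp]: "apply_deriv D 0 = 0"
  unfolding apply_deriv_def by simp

lemma norm_apply_deriv_le: "norm (apply_deriv D h) \<le> norm D * norm h"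
proof -
  have "norm (apply_deriv D h) \<le> (\<Sum>k\<in>UNIV. \<bar>norm (D $ k)\<bar> * \<bar>h $ k\<bar>)"
    unfolding apply_deriv_def by (rule order_trans[OF norm_sum]) (simp add: mult.commute)
  also have "\<dots> \<le> L2_set (\<lambda>k. norm (D $ k)) UNIV * L2_set (\<lambda>k. h $ k) UNIV"
    by (rule L2_set_mult_ineq)
  also have "\<dots> = norm D * norm h" by (simp add: norm_vec_def L2_set_def)
  finally show ?thesis .
qed

lemma bounded_linear_apply_deriv: "bounded_linear (apply_deriv D)"
  by (rule bounded_linear_intro[where K="norm D"])
     (simp_all add: apply_deriv_add_right apply_deriv_scaleR_right norm_apply_deriv_le mult.commute)

lemma apply_deriv_chi_apply_deriv:
  "apply_deriv (\<chi> k. apply_deriv D (V $ k)) h = apply_deriv D (apply_deriv V h)"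
proof -
  have "apply_deriv (\<chi> k. apply_deriv D (V $ k)) h
      = (\<Sum>k\<in>UNIV. \<Sum>l\<in>UNIV. (h $ k * V $ k $ l) *\<^sub>R D $ l)"
    unfolding apply_deriv_def by (simp add: scaleR_sum_right)
  also have "\<dots> = (\<Sum>l\<in>UNIV. \<Sum>k\<in>UNIV. (h $ k * V $ k $ l) *\<^sub>R D $ l)"
    by (rule sum.swap)
  also have "\<dots> = apply_deriv D (apply_deriv V h)"
    unfolding apply_deriv_def by (simp add: sum_component scaleR_sum_left)
  finally show ?thesis .
qed

lemma chi_apply_deriv_diff:
  fixes A B :: "'v::real_vector^'n" and V U :: "(real^'n)^'m"
  shows "(\<chi> k. apply_deriv A (V $ k)) - (\<chi> k. apply_deriv B (U $ k))
       = (\<chi> k. apply_deriv (A - B) (V $ k)) + (\<chi> k. apply_deriv B ((V - U) $ k))"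
  by (simp add: vec_eq_iff apply_deriv_diff_left apply_deriv_diff_right)

lemma norm_chi_apply_deriv_le: "norm (\<chi> k. apply_deriv D (V $ k)) \<le> norm D * norm V"
proof -
  have "norm (\<chi> k. apply_deriv D (V $ k)) = L2_set (\<lambda>k. norm (apply_deriv D (V $ k))) UNIV"
    by (simp add: norm_vec_def)
  also have "\<dots> \<le> L2_set (\<lambda>k. norm D * norm (V $ k)) UNIV"
    by (intro L2_set_mono norm_apply_deriv_le) auto
  also have "\<dots> = norm D * norm V"
    by (simp add: L2_set_right_distrib[symmetric] norm_vec_def)
  finally show ?thesis .
qed

lemma continuous_on_apply_deriv:
  "continuous_on UNIV (\<lambda>z. apply_deriv (fst z) (snd z :: real^'n) :: 'v::real_normed_vector)"
  unfolding apply_deriv_def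
  by (intro continuous_intros continuous_on_component continuous_on_fst continuous_on_snd continuous_on_id)

lemma continuous_on_chi_apply_deriv:
  "continuous_on UNIV (\<lambda>z. (\<chi> k. apply_deriv (fst z) (snd z $ k)) :: 'v::real_normed_vector ^'m)"
  unfolding apply_deriv_def
  by (intro continuous_on_vec_lambda continuous_intros continuous_on_component continuous_on_fst
      continuous_on_snd continuous_on_id)

lemma borel_measurable_continuous_on_Pair:
  fixes f :: "'a \<Rightarrow> 'b::second_countable_topology" and g :: "'a \<Rightarrow> 'c::second_countable_topology"
  assumes "f \<in> borel_measurable M" "g \<in> borel_measurable M"
    and "continuous_on UNIV (\<lambda>z. h (fst z) (snd z) :: 'd::topological_space)"
  shows "(\<lambda>x. h (f x) (g x)) \<in> borel_measurable M"
proof -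
  have "(\<lambda>x. (f x, g x)) \<in> borel_measurable M"
    using measurable_Pair[OF assms(1,2)] by (simp add: borel_prod)
  from borel_measurable_continuous_on[OF assms(3) this] show ?thesis by simp
qed

lemma borel_measurable_apply_deriv [measurable]:
  fixes D :: "'a \<Rightarrow> 'v::euclidean_space^'n" and h :: "'a \<Rightarrow> real^'n"
  assumes "D \<in> borel_measurable M" "h \<in> borel_measurable M"
  shows "(\<lambda>x. apply_deriv (D x) (h x)) \<in> borel_measurable M"
  using borel_measurable_continuous_on_Pair[OF assms continuous_on_apply_deriv] .

lemma borel_measurable_chi_apply_deriv [measurable]:
  fixes D :: "'a \<Rightarrow> 'v::euclidean_space^'n" and V :: "'a \<Rightarrow> (real^'n)^'m"
  assumes "D \<in> borel_measurable M" "V \<in> borel_measurable M"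
  shows "(\<lambda>x. \<chi> k. apply_deriv (D x) (V x $ k)) \<in> borel_measurable M"
  using borel_measurable_continuous_on_Pair[OF assms continuous_on_chi_apply_deriv] .

lemma integrable_apply_deriv:
  fixes D :: "'a \<Rightarrow> 'v::euclidean_space^'n" and H :: "'a \<Rightarrow> real^'n"
  assumes "in_Lq M a D" "in_Lq M b H" "0 < a" "0 < b" "1/a + 1/b = 1"
  shows "integrable M (\<lambda>x. apply_deriv (D x) (H x))"
proof (rule integrableI_bounded)
  show "(\<lambda>x. apply_deriv (D x) (H x)) \<in> borel_measurable M"
    using assms by (auto simp: in_Lq_def)
  have "(\<integral>\<^sup>+ x. ennreal (norm (apply_deriv (D x) (H x))) \<partial>M) = Lq M 1 (\<lambda>x. apply_deriv (D x) (H x))"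
    by (simp add: Lq_def LqE_1)
  also have "\<dots> \<le> Lq M a D * Lq M b H"
    by (rule Lq_Hoelder[OF _ _ norm_apply_deriv_le]) (use assms in \<open>auto simp: in_Lq_def\<close>)
  also have "\<dots> < \<infinity>" using assms by (simp add: in_Lq_def ennreal_mult_less_top)
  finally show "(\<integral>\<^sup>+ x. ennreal (norm (apply_deriv (D x) (H x))) \<partial>M) < \<infinity>" .
qed

lemma norm_integral_apply_deriv_le:
  fixes D :: "'a \<Rightarrow> 'v::euclidean_space^'n" and H :: "'a \<Rightarrow> real^'n"
  assumes "in_Lq M 2 D" "in_Lq M 2 H"
  shows "norm (\<integral>x. apply_deriv (D x) (H x) \<partial>M) \<le> L2_norm M D * L2_norm M H"
proof -
  have "ennreal (norm (\<integral>x. apply_deriv (D x) (H x) \<partial>M)) \<le> Lq M 1 (\<lambda>x. apply_deriv (D x) (H x))"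
    by (rule norm_integral_le_Lq1)
  also have "\<dots> \<le> Lq M 2 D * Lq M 2 H"
    by (rule Lq_Hoelder[OF _ _ norm_apply_deriv_le]) (use assms in \<open>auto simp: in_Lq_def\<close>)
  also have "\<dots> = ennreal (L2_norm M D * L2_norm M H)"
    using assms by (simp add: Lq_2_eq_L2_norm ennreal_mult)
  finally show ?thesis by simp
qed

lemma integral_apply_deriv_diff_left:
  fixes D1 D2 :: "'a \<Rightarrow> 'v::euclidean_space^'n" and H :: "'a \<Rightarrow> real^'n"
  assumes "in_Lq M 2 D1" "in_Lq M 2 D2" "in_Lq M 2 H"
  shows "(\<integral>x. apply_deriv (D1 x) (H x) \<partial>M) - (\<integral>x. apply_deriv (D2 x) (H x) \<partial>M)
       = (\<integral>x. apply_deriv (D1 x - D2 x) (H x) \<partial>M)"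
  using assms by (simp add: apply_deriv_diff_left integral_diff integrable_apply_deriv[where a=2 and b=2])

section \<open>Mean value estimates for Frechet differentiable lifts\<close>

lemma norm_diff_unit_interval_le:
  fixes \<phi> :: "real \<Rightarrow> 'v::real_inner"
  assumes der: "\<And>\<tau>. \<tau> \<in> {0..1} \<Longrightarrow> (\<phi> has_vector_derivative \<phi>' \<tau>) (at \<tau>)"
    and bd: "\<And>\<tau>. \<tau> \<in> {0..1} \<Longrightarrow> norm (\<phi>' \<tau>) \<le> B"
  shows "norm (\<phi> 1 - \<phi> 0) \<le> B"
proof -
  have cont: "continuous_on {0..1} \<phi>"
    using der by (intro continuous_at_imp_continuous_on ballI has_vector_derivative_continuous) auto
  have "\<exists>x\<in>{0<..<1}. norm (\<phi> 1 - \<phi> 0) \<le> norm ((\<lambda>h. h *\<^sub>R \<phi>' x) (1 - 0))"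
    by (rule mvt_general[OF _ cont]) (use der in \<open>auto simp: has_vector_derivative_def\<close>)
  then obtain x where "x \<in> {0<..<1}" "norm (\<phi> 1 - \<phi> 0) \<le> norm (\<phi>' x)" by auto
  then show ?thesis using bd[of x] by auto
qed

lemma norm_diff_segment_le:
  fixes f :: "real^'n \<Rightarrow> 'v::real_inner"
  assumes der: "\<And>\<tau>. \<tau> \<in> {0..1} \<Longrightarrow>
      (f has_derivative apply_deriv (Df (x + \<tau> *\<^sub>R (x' - x)))) (at (x + \<tau> *\<^sub>R (x' - x)))"
    and bd: "\<And>\<tau>. \<tau> \<in> {0..1} \<Longrightarrow> norm (Df (x + \<tau> *\<^sub>R (x' - x))) \<le> B"
  shows "norm (f x' - f x) \<le> B * norm (x' - x)"
proof -
  define \<phi> where "\<phi> \<tau> = f (x + \<tau> *\<^sub>R (x' - x))" for \<tau>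
  have "(\<phi> has_vector_derivative apply_deriv (Df (x + \<tau> *\<^sub>R (x' - x))) (x' - x)) (at \<tau>)"
    if "\<tau> \<in> {0..1}" for \<tau>
  proof -
    have "((\<lambda>\<tau>. x + \<tau> *\<^sub>R (x' - x)) has_derivative (\<lambda>\<sigma>. \<sigma> *\<^sub>R (x' - x))) (at \<tau>)"
      by (auto intro!: derivative_eq_intros)
    from has_derivative_compose[OF this der[OF that]] show ?thesis
      unfolding has_vector_derivative_def \<phi>_def by (simp add: apply_deriv_scaleR_right)
  qed
  moreover have "norm (apply_deriv (Df (x + \<tau> *\<^sub>R (x' - x))) (x' - x)) \<le> B * norm (x' - x)"
    if "\<tau> \<in> {0..1}" for \<tau>
    by (rule order_trans[OF norm_apply_deriv_le]) (intro mult_right_mono bd that, simp)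
  ultimately have "norm (\<phi> 1 - \<phi> 0) \<le> B * norm (x' - x)"
    by (intro norm_diff_unit_interval_le) auto
  then show ?thesis unfolding \<phi>_def by simp
qed

lemma norm_vector_derivative_le:
  fixes k :: "real \<Rightarrow> 'v::real_normed_vector"
  assumes "(k has_vector_derivative V) (at 0)" and b: "\<And>\<sigma>. norm (k \<sigma> - k 0) \<le> c * \<bar>\<sigma>\<bar>"
  shows "norm V \<le> c"
proof (rule field_le_epsilon)
  fix e :: real assume e: "0 < e"
  with assms(1) obtain d where d: "d > 0" "\<And>y. \<bar>y\<bar> < d \<Longrightarrow> norm (k y - k 0 - y *\<^sub>R V) \<le> e * \<bar>y\<bar>"
    unfolding has_vector_derivative_def has_derivative_at_alt by force
  define y where "y = d / 2"
  have y: "0 < y" "\<bar>y\<bar> < d" using d unfolding y_def by auto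
  have "y * norm V \<le> norm (k y - k 0) + norm (k y - k 0 - y *\<^sub>R V)"
    using y norm_triangle_ineq4[of "k y - k 0" "k y - k 0 - y *\<^sub>R V"] by simp
  also have "\<dots> \<le> y * (c + e)" using b[of y] d(2)[OF y(2)] y by (simp add: algebra_simps)
  finally show "norm V \<le> c + e" using y by simp
qed

lemma frechet_C1_in_Lq_grad: "frechet_C1 M G Gx GZ \<Longrightarrow> in_Lq M 2 Z \<Longrightarrow> in_Lq M 2 (GZ x Z)"
  by (simp add: frechet_C1_def)

context
  fixes M :: "'w measure" and G :: "real^'d \<Rightarrow> ('w \<Rightarrow> real^'d) \<Rightarrow> 'v::euclidean_space"
    and Gx :: "real^'d \<Rightarrow> ('w \<Rightarrow> real^'d) \<Rightarrow> 'v^'d"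
    and GZ :: "real^'d \<Rightarrow> ('w \<Rightarrow> real^'d) \<Rightarrow> 'w \<Rightarrow> 'v^'d"
  assumes fr: "frechet_C1 M G Gx GZ"
begin

lemma frechet_C1_has_derivative_x:
  assumes Z: "in_Lq M 2 Z"
  shows "((\<lambda>y. G y Z) has_derivative apply_deriv (Gx x Z)) (at x)"
  unfolding has_derivative_at_alt
proof (intro conjI allI impI bounded_linear_apply_deriv)
  fix e :: real assume e: "0 < e"
  with fr Z obtain \<delta> where "\<delta> > 0" and \<delta>: "\<forall>h H. in_Lq M 2 H \<longrightarrow> norm h + enn2real (Lq M 2 H) < \<delta> \<longrightarrow>
          norm (G (x + h) (\<lambda>\<omega>. Z \<omega> + H \<omega>) - G x Z - apply_deriv (Gx x Z) h
                - (\<integral>\<omega>. apply_deriv (GZ x Z \<omega>) (H \<omega>) \<partial>M))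
          \<le> e * (norm h + enn2real (Lq M 2 H))"
    unfolding frechet_C1_def by blast
  moreover have "norm (G y Z - G x Z - apply_deriv (Gx x Z) (y - x)) \<le> e * norm (y - x)"
    if "norm (y - x) < \<delta>" for y
    using \<delta>[rule_format, where h="y - x" and H="\<lambda>\<omega>. 0"] that by (simp add: Lq_def LqE_def)
  ultimately show "\<exists>d>0. \<forall>y. norm (y - x) < d \<longrightarrow>
      norm (G y Z - G x Z - apply_deriv (Gx x Z) (y - x)) \<le> e * norm (y - x)"
    by blast
qed

lemma frechet_C1_has_vector_derivative_line:
  assumes Z: "in_Lq M 2 Z" and H: "in_Lq M 2 H"
  shows "((\<lambda>\<tau>. G x (\<lambda>\<omega>. Z \<omega> + \<tau> *\<^sub>R H \<omega>)) has_vector_derivative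
           (\<integral>\<omega>. apply_deriv (GZ x (\<lambda>\<omega>. Z \<omega> + \<tau>0 *\<^sub>R H \<omega>) \<omega>) (H \<omega>) \<partial>M)) (at \<tau>0)"
proof -
  define Z0 where "Z0 = (\<lambda>\<omega>. Z \<omega> + \<tau>0 *\<^sub>R H \<omega>)"
  have Z0: "in_Lq M 2 Z0" unfolding Z0_def by (rule in_Lq_line[OF Z H])
  define n where "n = L2_norm M H"
  have n0: "0 \<le> n" unfolding n_def by simp
  define V where "V = (\<integral>\<omega>. apply_deriv (GZ x Z0 \<omega>) (H \<omega>) \<partial>M)"
  have "((\<lambda>\<tau>. G x (\<lambda>\<omega>. Z \<omega> + \<tau> *\<^sub>R H \<omega>)) has_derivative (\<lambda>\<sigma>. \<sigma> *\<^sub>R V)) (at \<tau>0)"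
    unfolding has_derivative_at_alt
  proof (intro conjI allI impI bounded_linear_scaleR_left)
    fix e :: real assume e: "0 < e"
    then have "0 < e / (n + 1)" using n0 by simp
    with fr Z0 obtain \<delta> where \<delta>: "\<delta> > 0" and h\<delta>: "\<forall>h Hh. in_Lq M 2 Hh \<longrightarrow> norm h + enn2real (Lq M 2 Hh) < \<delta> \<longrightarrow>
          norm (G (x + h) (\<lambda>\<omega>. Z0 \<omega> + Hh \<omega>) - G x Z0 - apply_deriv (Gx x Z0) h
                - (\<integral>\<omega>. apply_deriv (GZ x Z0 \<omega>) (Hh \<omega>) \<partial>M))
          \<le> e / (n + 1) * (norm h + enn2real (Lq M 2 Hh))"
      unfolding frechet_C1_def by blast
    show "\<exists>d>0. \<forall>y. norm (y - \<tau>0) < d \<longrightarrow>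
        norm (G x (\<lambda>\<omega>. Z \<omega> + y *\<^sub>R H \<omega>) - G x (\<lambda>\<omega>. Z \<omega> + \<tau>0 *\<^sub>R H \<omega>) - (y - \<tau>0) *\<^sub>R V)
        \<le> e * norm (y - \<tau>0)"
    proof (intro exI[of _ "\<delta> / (n + 1)"] conjI allI impI)
      show "0 < \<delta> / (n + 1)" using \<delta> n0 by simp
      fix y assume y: "norm (y - \<tau>0) < \<delta> / (n + 1)"
      define \<sigma> where "\<sigma> = y - \<tau>0"
      have Hs: "in_Lq M 2 (\<lambda>\<omega>. \<sigma> *\<^sub>R H \<omega>)" by (intro in_Lq_scaleR H) auto
      have nHs: "enn2real (Lq M 2 (\<lambda>\<omega>. \<sigma> *\<^sub>R H \<omega>)) = \<bar>\<sigma>\<bar> * n"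
        using L2_norm_scaleR[of H M \<sigma>] H unfolding n_def L2_norm_def in_Lq_def by simp
      have "\<bar>\<sigma>\<bar> * n \<le> \<bar>\<sigma>\<bar> * (n + 1)" by (intro mult_left_mono) auto
      moreover have "\<bar>\<sigma>\<bar> * (n + 1) < \<delta>" using y n0 unfolding \<sigma>_def by (simp add: field_simps)
      ultimately have "norm (G x (\<lambda>\<omega>. Z0 \<omega> + \<sigma> *\<^sub>R H \<omega>) - G x Z0 - \<sigma> *\<^sub>R V) \<le> e / (n + 1) * (\<bar>\<sigma>\<bar> * n)"
        using h\<delta>[rule_format, where h=0 and Hh="\<lambda>\<omega>. \<sigma> *\<^sub>R H \<omega>", OF Hs] nHs
        by (simp add: V_def apply_deriv_scaleR_right)
      also have "\<dots> \<le> e * \<bar>\<sigma>\<bar>"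
        using n0 e by (simp add: field_simps mult_left_mono)
      finally show "norm (G x (\<lambda>\<omega>. Z \<omega> + y *\<^sub>R H \<omega>) - G x (\<lambda>\<omega>. Z \<omega> + \<tau>0 *\<^sub>R H \<omega>) - (y - \<tau>0) *\<^sub>R V)
        \<le> e * norm (y - \<tau>0)"
        by (simp add: Z0_def \<sigma>_def algebra_simps)
    qed
  qed
  then show ?thesis unfolding has_vector_derivative_def V_def Z0_def .
qed

lemma frechet_C1_lipschitz_x:
  assumes "in_Lq M 2 Z" "\<And>y. norm (Gx y Z) \<le> L"
  shows "norm (G x' Z - G x Z) \<le> L * norm (x' - x)"
  by (rule norm_diff_segment_le[where Df = "\<lambda>y. Gx y Z"]) (use frechet_C1_has_derivative_x assms in auto)

lemma frechet_C1_diff_lipschitz_x: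
  assumes Z1: "in_Lq M 2 Z1" and Z2: "in_Lq M 2 Z2" and bd: "\<And>y. norm (Gx y Z1 - Gx y Z2) \<le> L"
  shows "norm ((G x' Z1 - G x' Z2) - (G x Z1 - G x Z2)) \<le> L * norm (x' - x)"
proof -
  have "((\<lambda>y. G y Z1 - G y Z2) has_derivative apply_deriv (Gx y Z1 - Gx y Z2)) (at y)" for y
    unfolding apply_deriv_diff_left_fun
    by (rule has_derivative_diff[OF frechet_C1_has_derivative_x[OF Z1] frechet_C1_has_derivative_x[OF Z2]])
  from norm_diff_segment_le[where Df = "\<lambda>y. Gx y Z1 - Gx y Z2", OF this bd] show ?thesis by simp
qed

lemma frechet_C1_taylor_x:
  assumes Z: "in_Lq M 2 Z" and L: "0 \<le> L" and lip: "\<And>y. norm (Gx y Z - Gx x Z) \<le> L * norm (y - x)"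
  shows "norm (G x' Z - G x Z - apply_deriv (Gx x Z) (x' - x)) \<le> L * norm (x' - x) ^ 2"
proof -
  define f where "f y = G y Z - apply_deriv (Gx x Z) y" for y
  have "norm (f x' - f x) \<le> (L * norm (x' - x)) * norm (x' - x)"
  proof (rule norm_diff_segment_le[where Df = "\<lambda>y. Gx y Z - Gx x Z"])
    fix \<tau> :: real
    show "(f has_derivative apply_deriv (Gx (x + \<tau> *\<^sub>R (x' - x)) Z - Gx x Z)) (at (x + \<tau> *\<^sub>R (x' - x)))"
      unfolding f_def apply_deriv_diff_left_fun
      by (rule has_derivative_diff[OF frechet_C1_has_derivative_x[OF Z]
            bounded_linear.has_derivative[OF bounded_linear_apply_deriv has_derivative_ident]])
    assume "\<tau> \<in> {0..1}"
    then have "L * norm (\<tau> *\<^sub>R (x' - x)) \<le> L * norm (x' - x)"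
      using L by (intro mult_left_mono) (auto simp: mult_left_le_one_le)
    then show "norm (Gx (x + \<tau> *\<^sub>R (x' - x)) Z - Gx x Z) \<le> L * norm (x' - x)"
      using lip[of "x + \<tau> *\<^sub>R (x' - x)"] by simp
  qed
  then show ?thesis unfolding f_def by (simp add: apply_deriv_diff_right power2_eq_square algebra_simps)
qed

lemma frechet_C1_lipschitz_Z:
  assumes Z: "in_Lq M 2 Z" and Z': "in_Lq M 2 Z'" and bd: "\<And>Z. in_Lq M 2 Z \<Longrightarrow> L2_norm M (GZ x Z) \<le> L"
  shows "norm (G x Z' - G x Z) \<le> L * L2_norm M (\<lambda>\<omega>. Z' \<omega> - Z \<omega>)"
proof -
  define H where "H = (\<lambda>\<omega>. Z' \<omega> - Z \<omega>)"
  have H: "in_Lq M 2 H" unfolding H_def by (intro in_Lq_diff Z Z') auto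
  have "norm (G x (\<lambda>\<omega>. Z \<omega> + 1 *\<^sub>R H \<omega>) - G x (\<lambda>\<omega>. Z \<omega> + 0 *\<^sub>R H \<omega>)) \<le> L * L2_norm M H"
  proof (rule norm_diff_unit_interval_le[OF frechet_C1_has_vector_derivative_line[OF Z H]])
    fix \<tau> :: real
    have "norm (\<integral>\<omega>. apply_deriv (GZ x (\<lambda>\<omega>. Z \<omega> + \<tau> *\<^sub>R H \<omega>) \<omega>) (H \<omega>) \<partial>M)
        \<le> L2_norm M (GZ x (\<lambda>\<omega>. Z \<omega> + \<tau> *\<^sub>R H \<omega>)) * L2_norm M H"
      by (rule norm_integral_apply_deriv_le[OF frechet_C1_in_Lq_grad[OF fr in_Lq_line[OF Z H]] H])
    also have "\<dots> \<le> L * L2_norm M H" using bd[OF in_Lq_line[OF Z H]] by (intro mult_right_mono) auto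
    finally show "norm (\<integral>\<omega>. apply_deriv (GZ x (\<lambda>\<omega>. Z \<omega> + \<tau> *\<^sub>R H \<omega>) \<omega>) (H \<omega>) \<partial>M) \<le> L * L2_norm M H" .
  qed
  then show ?thesis unfolding H_def by simp
qed

lemma frechet_C1_taylor_Z:
  assumes Z: "in_Lq M 2 Z" and Z': "in_Lq M 2 Z'" and L: "0 \<le> L"
    and lip: "\<And>Z1 Z2. in_Lq M 2 Z1 \<Longrightarrow> in_Lq M 2 Z2 \<Longrightarrow>
               L2_norm M (\<lambda>\<omega>. GZ x Z1 \<omega> - GZ x Z2 \<omega>) \<le> L * L2_norm M (\<lambda>\<omega>. Z1 \<omega> - Z2 \<omega>)"
  shows "norm (G x Z' - G x Z - (\<integral>\<omega>. apply_deriv (GZ x Z \<omega>) (Z' \<omega> - Z \<omega>) \<partial>M))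
         \<le> L * L2_norm M (\<lambda>\<omega>. Z' \<omega> - Z \<omega>) ^ 2"
proof -
  define H where "H = (\<lambda>\<omega>. Z' \<omega> - Z \<omega>)"
  have H: "in_Lq M 2 H" unfolding H_def by (intro in_Lq_diff Z Z') auto
  define E0 where "E0 = (\<integral>\<omega>. apply_deriv (GZ x Z \<omega>) (H \<omega>) \<partial>M)"
  have GZ0: "in_Lq M 2 (GZ x Z)" by (rule frechet_C1_in_Lq_grad[OF fr Z])
  define \<phi> where "\<phi> \<tau> = G x (\<lambda>\<omega>. Z \<omega> + \<tau> *\<^sub>R H \<omega>) - \<tau> *\<^sub>R E0" for \<tau>
  have "norm (\<phi> 1 - \<phi> 0) \<le> L * L2_norm M H * L2_norm M H"
  proof (rule norm_diff_unit_interval_le)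
    fix \<tau> :: real
    define Z\<tau> where "Z\<tau> = (\<lambda>\<omega>. Z \<omega> + \<tau> *\<^sub>R H \<omega>)"
    have GZ\<tau>: "in_Lq M 2 (GZ x Z\<tau>)" unfolding Z\<tau>_def by (rule frechet_C1_in_Lq_grad[OF fr in_Lq_line[OF Z H]])
    show "(\<phi> has_vector_derivative (\<integral>\<omega>. apply_deriv (GZ x Z\<tau> \<omega>) (H \<omega>) \<partial>M) - E0) (at \<tau>)"
      unfolding \<phi>_def Z\<tau>_def
      by (intro has_vector_derivative_diff frechet_C1_has_vector_derivative_line Z H)
         (auto intro!: derivative_eq_intros)
    assume "\<tau> \<in> {0..1}"
    have "(\<integral>\<omega>. apply_deriv (GZ x Z\<tau> \<omega>) (H \<omega>) \<partial>M) - E0 = (\<integral>\<omega>. apply_deriv (GZ x Z\<tau> \<omega> - GZ x Z \<omega>) (H \<omega>) \<partial>M)"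
      unfolding E0_def by (rule integral_apply_deriv_diff_left[OF GZ\<tau> GZ0 H])
    also have "norm \<dots> \<le> L2_norm M (\<lambda>\<omega>. GZ x Z\<tau> \<omega> - GZ x Z \<omega>) * L2_norm M H"
      by (rule norm_integral_apply_deriv_le[OF in_Lq_diff[OF GZ\<tau> GZ0] H]) simp
    also have "\<dots> \<le> (L * L2_norm M (\<lambda>\<omega>. Z\<tau> \<omega> - Z \<omega>)) * L2_norm M H"
      unfolding Z\<tau>_def by (intro mult_right_mono lip in_Lq_line Z H) auto
    also have "L2_norm M (\<lambda>\<omega>. Z\<tau> \<omega> - Z \<omega>) = \<bar>\<tau>\<bar> * L2_norm M H"
      using L2_norm_scaleR[of H M \<tau>] H by (simp add: Z\<tau>_def in_Lq_def)
    also have "L * (\<bar>\<tau>\<bar> * L2_norm M H) * L2_norm M H \<le> L * L2_norm M H * L2_norm M H"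
      using \<open>\<tau> \<in> {0..1}\<close> L by (intro mult_right_mono) (auto simp: mult_left_le_one_le mult_le_cancel_left1 mult_left_mono)
    finally show "norm ((\<integral>\<omega>. apply_deriv (GZ x Z\<tau> \<omega>) (H \<omega>) \<partial>M) - E0) \<le> L * L2_norm M H * L2_norm M H" .
  qed
  then show ?thesis unfolding \<phi>_def H_def E0_def by (simp add: power2_eq_square algebra_simps)
qed

end

lemma norm_power2_vec_Basis:
  fixes D :: "'v::euclidean_space^'d"
  shows "norm D ^ 2 = (\<Sum>b\<in>Basis. \<Sum>k\<in>UNIV. (D $ k \<bullet> b) ^ 2)"
proof -
  have "norm D ^ 2 = (\<Sum>k\<in>UNIV. norm (D $ k) ^ 2)"
    by (simp add: norm_vec_def L2_set_def sum_nonneg)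
  also have "\<dots> = (\<Sum>k\<in>UNIV. \<Sum>b\<in>Basis. (D $ k \<bullet> b) ^ 2)"
  proof (rule sum.cong)
    show "norm (D $ k) ^ 2 = (\<Sum>b\<in>Basis. (D $ k \<bullet> b) ^ 2)" for k
      by (subst power2_norm_eq_inner, subst euclidean_inner) (simp add: power2_eq_square)
  qed simp
  also have "\<dots> = (\<Sum>b\<in>Basis. \<Sum>k\<in>UNIV. (D $ k \<bullet> b) ^ 2)" by (rule sum.swap)
  finally show ?thesis .
qed

lemma inner_apply_deriv_components:
  fixes D :: "'v::euclidean_space^'d"
  shows "b \<bullet> apply_deriv D (\<chi> k. D $ k \<bullet> b) = (\<Sum>k\<in>UNIV. (D $ k \<bullet> b) ^ 2)"
  unfolding apply_deriv_def by (simp add: inner_sum_right power2_eq_square inner_commute)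

lemma continuous_on_vec_components:
  "continuous_on UNIV (\<lambda>D :: 'v::euclidean_space^'d. \<chi> k. D $ k \<bullet> b)"
  by (intro continuous_on_vec_lambda continuous_intros continuous_on_component continuous_on_id)

lemma norm_vec_components_le:
  fixes D :: "'v::euclidean_space^'d"
  assumes "b \<in> Basis"
  shows "norm (\<chi> k. D $ k \<bullet> b) \<le> norm D"
  unfolding norm_vec_def using assms by (auto intro!: L2_set_mono Basis_le_norm)

text \<open>Testing \<open>D\<close> against the fields \<open>\<omega> \<mapsto> (D(\<omega>)\<^sub>k \<bullet> b)\<^sub>k\<close>, \<open>b \<in> Basis\<close>, recovers \<open>\<parallel>D\<parallel>\<^sub>2\<^sup>2\<close>.\<close>

lemma L2_norm_le_of_pairing_le:
  fixes D :: "'a \<Rightarrow> 'v::euclidean_space^'d"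
  assumes D: "in_Lq M 2 D" and c: "0 \<le> c"
    and pairing: "\<And>H. in_Lq M 2 H \<Longrightarrow> norm (\<integral>x. apply_deriv (D x) (H x) \<partial>M) \<le> c * L2_norm M H"
  shows "L2_norm M D \<le> real DIM('v) * c"
proof -
  define Hb where "Hb b x = (\<chi> k. D x $ k \<bullet> b)" for b x
  have Hb_meas: "Hb b \<in> borel_measurable M" for b
    using D borel_measurable_continuous_on[OF continuous_on_vec_components]
    unfolding Hb_def in_Lq_def by blast
  have Hb: "in_Lq M 2 (Hb b)" and Hb_le: "L2_norm M (Hb b) \<le> L2_norm M D" if b: "b \<in> Basis" for b
  proof -
    have le: "Lq M 2 (Hb b) \<le> Lq M 2 D"
      unfolding Hb_def by (intro Lq_mono norm_vec_components_le b) auto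
    then show "in_Lq M 2 (Hb b)" using D Hb_meas by (auto simp: in_Lq_def)
    then show "L2_norm M (Hb b) \<le> L2_norm M D"
      using le D by (simp add: Lq_2_eq_L2_norm)
  qed
  have "L2_norm M D ^ 2 = (\<integral>x. (\<Sum>b\<in>Basis. b \<bullet> apply_deriv (D x) (Hb b x)) \<partial>M)"
    unfolding L2_norm_power2[OF D] Hb_def inner_apply_deriv_components norm_power2_vec_Basis ..
  also have "\<dots> = (\<Sum>b\<in>Basis. b \<bullet> (\<integral>x. apply_deriv (D x) (Hb b x) \<partial>M))"
    using integrable_apply_deriv[OF D Hb] by (simp add: integral_sum integral_inner_right)
  also have "\<dots> \<le> (\<Sum>b\<in>(Basis::'v set). c * L2_norm M D)"
  proof (intro sum_mono)
    fix b :: 'v assume b: "b \<in> Basis"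
    have "b \<bullet> (\<integral>x. apply_deriv (D x) (Hb b x) \<partial>M) \<le> norm (\<integral>x. apply_deriv (D x) (Hb b x) \<partial>M)"
      using b by (metis Basis_le_norm inner_commute abs_le_D1)
    also have "\<dots> \<le> c * L2_norm M D"
      by (rule order_trans[OF pairing[OF Hb[OF b]] mult_left_mono[OF Hb_le[OF b] c]])
    finally show "b \<bullet> (\<integral>x. apply_deriv (D x) (Hb b x) \<partial>M) \<le> c * L2_norm M D" .
  qed
  finally have sq: "L2_norm M D * L2_norm M D \<le> (real DIM('v) * c) * L2_norm M D"
    by (simp add: power2_eq_square)
  show ?thesis
  proof (cases "L2_norm M D = 0")
    case False
    then have "0 < L2_norm M D" using L2_norm_nonneg[of M D] by linarith
    with sq show ?thesis by (rule mult_right_le_imp_le)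
  qed (use c in simp)
qed

lemma frechet_C1_grad_pairing_lipschitz_x:
  assumes fr: "frechet_C1 M G Gx GZ" and Z: "in_Lq M 2 Z" and H: "in_Lq M 2 H"
    and lipx: "\<And>y Z1 Z2. in_Lq M 2 Z1 \<Longrightarrow> in_Lq M 2 Z2 \<Longrightarrow>
                 norm (Gx y Z1 - Gx y Z2) \<le> L * L2_norm M (\<lambda>\<omega>. Z1 \<omega> - Z2 \<omega>)"
  shows "norm (\<integral>\<omega>. apply_deriv (GZ x' Z \<omega> - GZ x Z \<omega>) (H \<omega>) \<partial>M) \<le> L * norm (x' - x) * L2_norm M H"
proof -
  define k where "k \<sigma> = G x' (\<lambda>\<omega>. Z \<omega> + \<sigma> *\<^sub>R H \<omega>) - G x (\<lambda>\<omega>. Z \<omega> + \<sigma> *\<^sub>R H \<omega>)" for \<sigma>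
  have Z0: "(\<lambda>\<omega>. Z \<omega> + 0 *\<^sub>R H \<omega>) = Z" by simp
  have k': "(k has_vector_derivative
      (\<integral>\<omega>. apply_deriv (GZ x' Z \<omega>) (H \<omega>) \<partial>M) - (\<integral>\<omega>. apply_deriv (GZ x Z \<omega>) (H \<omega>) \<partial>M)) (at 0)"
    using has_vector_derivative_diff[OF frechet_C1_has_vector_derivative_line[OF fr Z H, of x' 0]
        frechet_C1_has_vector_derivative_line[OF fr Z H, of x 0]]
    unfolding k_def Z0 .
  have k'_eq: "(\<integral>\<omega>. apply_deriv (GZ x' Z \<omega>) (H \<omega>) \<partial>M) - (\<integral>\<omega>. apply_deriv (GZ x Z \<omega>) (H \<omega>) \<partial>M)
      = (\<integral>\<omega>. apply_deriv (GZ x' Z \<omega> - GZ x Z \<omega>) (H \<omega>) \<partial>M)"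
    by (rule integral_apply_deriv_diff_left[OF frechet_C1_in_Lq_grad[OF fr Z] frechet_C1_in_Lq_grad[OF fr Z] H])
  have "norm (k \<sigma> - k 0) \<le> (L * norm (x' - x) * L2_norm M H) * \<bar>\<sigma>\<bar>" for \<sigma>
  proof -
    define Z\<sigma> where "Z\<sigma> = (\<lambda>\<omega>. Z \<omega> + \<sigma> *\<^sub>R H \<omega>)"
    have Z\<sigma>: "in_Lq M 2 Z\<sigma>" unfolding Z\<sigma>_def by (rule in_Lq_line[OF Z H])
    have "L2_norm M (\<lambda>\<omega>. Z\<sigma> \<omega> - Z \<omega>) = \<bar>\<sigma>\<bar> * L2_norm M H"
      unfolding Z\<sigma>_def using L2_norm_scaleR[of H M \<sigma>] H by (simp add: in_Lq_def)
    then have "norm ((G x' Z\<sigma> - G x' Z) - (G x Z\<sigma> - G x Z)) \<le> (L * (\<bar>\<sigma>\<bar> * L2_norm M H)) * norm (x' - x)"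
      using lipx[OF Z\<sigma> Z] by (intro frechet_C1_diff_lipschitz_x[OF fr Z\<sigma> Z]) simp
    then show ?thesis by (simp add: k_def Z\<sigma>_def algebra_simps)
  qed
  from norm_vector_derivative_le[OF k' this] show ?thesis unfolding k'_eq .
qed

lemma frechet_C1_grad_lipschitz_x:
  fixes GZ :: "real^'d \<Rightarrow> ('w \<Rightarrow> real^'d) \<Rightarrow> 'w \<Rightarrow> 'v::euclidean_space^'d"
  assumes fr: "frechet_C1 M G Gx GZ" and Z: "in_Lq M 2 Z" and L: "0 \<le> L"
    and lipx: "\<And>y Z1 Z2. in_Lq M 2 Z1 \<Longrightarrow> in_Lq M 2 Z2 \<Longrightarrow>
                 norm (Gx y Z1 - Gx y Z2) \<le> L * L2_norm M (\<lambda>\<omega>. Z1 \<omega> - Z2 \<omega>)"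
  shows "L2_norm M (\<lambda>\<omega>. GZ x' Z \<omega> - GZ x Z \<omega>) \<le> real DIM('v) * L * norm (x' - x)"
proof -
  have "L2_norm M (\<lambda>\<omega>. GZ x' Z \<omega> - GZ x Z \<omega>) \<le> real DIM('v) * (L * norm (x' - x))"
  proof (rule L2_norm_le_of_pairing_le)
    show "in_Lq M 2 (\<lambda>\<omega>. GZ x' Z \<omega> - GZ x Z \<omega>)"
      by (intro in_Lq_diff frechet_C1_in_Lq_grad[OF fr Z]) auto
    fix H :: "'w \<Rightarrow> real^'d" assume "in_Lq M 2 H"
    show "norm (\<integral>\<omega>. apply_deriv (GZ x' Z \<omega> - GZ x Z \<omega>) (H \<omega>) \<partial>M) \<le> L * norm (x' - x) * L2_norm M H"
      by (rule frechet_C1_grad_pairing_lipschitz_x[OF fr Z \<open>in_Lq M 2 H\<close> lipx])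
  qed (use L in simp)
  then show ?thesis by (simp add: mult.assoc)
qed

section \<open>Controls and controlled paths\<close>

lemma pvar_ge: "s \<le> t \<Longrightarrow> g s t \<le> pvar g s t"
  unfolding pvar_def partitions_def
  by (rule SUP_upper2[of "[s, t]"]) (simp_all add: var_sum_def)

lemma fst_S2_subset: "fst ` S2 T \<subseteq> {0..T}" and snd_S2_subset: "snd ` S2 T \<subseteq> {0..T}"
  by (auto simp: S2_def)

lemma le_powr_inverse:
  fixes l u p :: real
  assumes "0 \<le> l" "0 < p" "l powr p \<le> u"
  shows "l \<le> u powr (1/p)"
proof -
  have "(l powr p) powr (1/p) \<le> u powr (1/p)" using assms by (intro powr_mono2) auto
  then show ?thesis using assms by (simp add: powr_powr)
qed

lemma le_mult_of_ennreal_divide_le: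
  assumes x: "0 \<le> x" and y: "0 \<le> y" and le: "ennreal x / ennreal y \<le> N" and N: "N < \<infinity>"
  shows "x \<le> enn2real N * y"
proof (cases "y = 0")
  case True
  then show ?thesis
    using le N x by (cases "x = 0") (auto simp: ennreal_divide_zero)
next
  case False
  then have "ennreal (x / y) \<le> N" using le x y by (simp add: divide_ennreal)
  then have "x / y \<le> enn2real N"
    using N x y enn2real_mono[of "ennreal (x / y)" N] by simp
  then show ?thesis using False y by (simp add: field_simps)
qed

lemma ennreal_divide_le_of_le_mult:
  assumes "L \<le> ennreal (K * y)" "0 \<le> y" "0 \<le> K"
  shows "L / ennreal y \<le> ennreal K"
proof (cases "y = 0")
  case False
  have "L / ennreal y \<le> ennreal (K * y) / ennreal y" by (rule divide_right_mono_ennreal[OF assms(1)])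
  also have "\<dots> = ennreal K" using False assms by (simp add: divide_ennreal)
  finally show ?thesis .
qed (use assms in simp)

lemma cp_norm_increment_bounds:
  fixes M :: "'w measure" and W :: "'w \<Rightarrow> real \<Rightarrow> real^'m" and w :: "real \<Rightarrow> real \<Rightarrow> 'w \<Rightarrow> real"
    and T p :: real and \<omega> :: 'w and Z :: "real \<Rightarrow> 'v::euclidean_space" and DZ :: "real \<Rightarrow> 'v^'m"
  defines "N \<equiv> enn2real (cp_norm M W w T p \<omega> Z DZ (\<lambda>t \<omega>'. 0))"
  assumes fin: "cp_norm M W w T p \<omega> Z DZ (\<lambda>t \<omega>'. 0) < \<infinity>"
    and st: "0 \<le> s" "s \<le> t" "t \<le> T" and w0: "0 \<le> w s t \<omega>"
  shows "norm (Z t - Z s) \<le> N * w s t \<omega> powr (1/p)"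
    and "norm (DZ t - DZ s) \<le> N * w s t \<omega> powr (1/p)"
    and "norm (Z t - Z s - apply_deriv (DZ s) (W \<omega> t - W \<omega> s)) \<le> N * w s t \<omega> powr (2/p)"
proof -
  have mem: "(s, t) \<in> S2 T" using st by (simp add: S2_def)
  have le_sum: "a \<le> a + b + c + d" "b \<le> a + b + c + d" "d \<le> a + b + c + d" for a b c d :: ennreal
    by (simp_all add: add.assoc add_increasing2 add_increasing)
  show "norm (Z t - Z s) \<le> N * w s t \<omega> powr (1/p)"
    unfolding N_def
    by (rule le_mult_of_ennreal_divide_le[OF norm_ge_zero _ _ fin], simp)
       (unfold cp_norm_def, rule order_trans[OF _ le_sum(1)], rule SUP_upper2[OF mem], simp)
  show "norm (DZ t - DZ s) \<le> N * w s t \<omega> powr (1/p)"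
    unfolding N_def
    by (rule le_mult_of_ennreal_divide_le[OF norm_ge_zero _ _ fin], simp)
       (unfold cp_norm_def, rule order_trans[OF _ le_sum(2)], rule SUP_upper2[OF mem], simp)
  show "norm (Z t - Z s - apply_deriv (DZ s) (W \<omega> t - W \<omega> s)) \<le> N * w s t \<omega> powr (2/p)"
    unfolding N_def
    by (rule le_mult_of_ennreal_divide_le[OF norm_ge_zero _ _ fin], simp)
       (unfold cp_norm_def, rule order_trans[OF _ le_sum(3)], rule SUP_upper2[OF mem], simp add: cp_rem_def)
qed

locale rough_control =
  fixes M :: "'w::polish_space measure" and T p q :: real
    and W :: "'w \<Rightarrow> real \<Rightarrow> real^'m" and WW :: "'w \<Rightarrow> real \<Rightarrow> real \<Rightarrow> real^'m^'m"
    and WP :: "'w \<Rightarrow> 'w \<Rightarrow> real \<Rightarrow> real \<Rightarrow> real^'m^'m" and w :: "real \<Rightarrow> real \<Rightarrow> 'w \<Rightarrow> real"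
  assumes prob: "prob_space M" and T_nonneg: "0 \<le> T" and p_ge: "2 \<le> p" and q_ge: "8 \<le> q"
    and rough: "rough_setup M T p q W WW WP" and ctrl: "control M T p q W WW WP w"
begin

lemma p_pos: "0 < p"
  using p_ge by simp

lemma W_measurable [measurable]: "(\<lambda>\<omega>'. W \<omega>' t) \<in> borel_measurable M"
  using rough by (simp add: rough_setup_def)

lemma W_continuous_on: "continuous_on {0..T} (W \<omega>')"
  using rough by (simp add: rough_setup_def)

lemma w_measurable [measurable]: "(\<lambda>\<omega>. w s t \<omega>) \<in> borel_measurable M"
  using ctrl by (simp add: control_def)

lemma w_continuous_on: "continuous_on (S2 T) (\<lambda>(s, t). w s t \<omega>')"
  using ctrl by (simp add: control_def)

lemma w_nonneg: "0 \<le> s \<Longrightarrow> s \<le> t \<Longrightarrow> t \<le> T \<Longrightarrow> 0 \<le> w s t \<omega>'"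
  using ctrl by (auto simp: control_def S2_def)

lemma vfun_le_w:
  assumes "0 \<le> s" "s \<le> t" "t \<le> T"
  shows "vfun M p q W WW WP s t \<omega>' \<le> ennreal (w s t \<omega>')"
proof -
  have "vfun M p q W WW WP s t \<omega>' + pvar (\<lambda>a b. LqE M q (vfun M p q W WW WP a b)) s t \<le> ennreal (w s t \<omega>')"
    using ctrl assms by (auto simp: control_def S2_def)
  then show ?thesis by (rule order_trans[OF add_increasing2[OF zero_le order_refl]])
qed

lemma Lq_w_le: "0 \<le> s \<Longrightarrow> s \<le> t \<Longrightarrow> t \<le> T \<Longrightarrow> Lq M q (\<lambda>\<omega>'. w s t \<omega>') \<le> ennreal (2 * w s t \<omega>0)"
  using ctrl by (auto simp: control_def S2_def)

lemma w_superadditive: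
  "0 \<le> s \<Longrightarrow> s \<le> u \<Longrightarrow> u \<le> t \<Longrightarrow> t \<le> T \<Longrightarrow> w s u \<omega>' + w u t \<omega>' \<le> w s t \<omega>'"
  using ctrl by (simp add: control_def)

lemma w_diag: "0 \<le> t \<Longrightarrow> t \<le> T \<Longrightarrow> w t t \<omega>' = 0"
  using w_superadditive[of t t t \<omega>'] w_nonneg[of t t \<omega>'] by simp

lemma w_mono:
  "0 \<le> s \<Longrightarrow> s \<le> s' \<Longrightarrow> s' \<le> t' \<Longrightarrow> t' \<le> t \<Longrightarrow> t \<le> T \<Longrightarrow> w s' t' \<omega>' \<le> w s t \<omega>'"
  using w_superadditive[of s s' t \<omega>'] w_superadditive[of s' t' t \<omega>'] w_nonneg[of s s' \<omega>']
    w_nonneg[of t' t \<omega>'] by linarith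

lemma Lq_W_increment_le:
  assumes "0 \<le> s" "s \<le> t" "t \<le> T"
  shows "Lq M q (\<lambda>\<omega>''. W \<omega>'' t - W \<omega>'' s) \<le> ennreal (w s t \<omega>' powr (1/p))"
proof -
  have "epow (Lq M q (\<lambda>\<omega>''. W \<omega>'' t - W \<omega>'' s)) p
      \<le> pvar (\<lambda>a b. epow (Lq M q (\<lambda>\<omega>'. W \<omega>' b - W \<omega>' a)) p) s t"
    using pvar_ge[OF assms(2)] .
  also have "\<dots> \<le> vfun M p q W WW WP s t \<omega>'"
    unfolding vfun_def add.assoc by (rule add_increasing[OF zero_le add_increasing2[OF zero_le order_refl]])
  also have "\<dots> \<le> ennreal (w s t \<omega>')" by (rule vfun_le_w[OF assms])
  finally have le: "epow (Lq M q (\<lambda>\<omega>''. W \<omega>'' t - W \<omega>'' s)) p \<le> ennreal (w s t \<omega>')" .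
  show ?thesis
  proof (cases "Lq M q (\<lambda>\<omega>''. W \<omega>'' t - W \<omega>'' s)")
    case (real l)
    then have "l powr p \<le> w s t \<omega>'" using le w_nonneg[OF assms] by (simp add: epow_ennreal)
    then show ?thesis using real p_pos le_powr_inverse by simp
  qed (use le in \<open>simp add: top_unique\<close>)
qed

definition w_between :: "real \<Rightarrow> real \<Rightarrow> 'w \<Rightarrow> real" where
  "w_between a b \<omega> = w (min a b) (max a b) \<omega>"

lemma w_between_nonneg: "a \<in> {0..T} \<Longrightarrow> b \<in> {0..T} \<Longrightarrow> 0 \<le> w_between a b \<omega>"
  unfolding w_between_def by (intro w_nonneg) auto

lemma w_between_le_cases:
  assumes "\<And>s t. 0 \<le> s \<Longrightarrow> s \<le> t \<Longrightarrow> t \<le> T \<Longrightarrow> P s t \<le> B (w s t \<omega>)"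
    and "\<And>s t. P s t = P t s" and "a \<in> {0..T}" "b \<in> {0..T}"
  shows "P a b \<le> B (w_between a b \<omega>)"
proof (cases "a \<le> b")
  case True
  then show ?thesis using assms(1)[of a b] assms(3,4) by (simp add: w_between_def)
next
  case False
  then have "P b a \<le> B (w b a \<omega>)" using assms(1)[of b a] assms(3,4) by simp
  moreover have "w_between a b \<omega> = w b a \<omega>" using False by (simp add: w_between_def)
  ultimately show ?thesis using assms(2)[of a b] by simp
qed

lemma Lq4_W_increment_le:
  assumes "a \<in> {0..T}" "b \<in> {0..T}"
  shows "Lq M 4 (\<lambda>\<omega>'. W \<omega>' b - W \<omega>' a) \<le> ennreal (w_between a b \<omega> powr (1/p))"
proof (rule w_between_le_cases[where P="\<lambda>a b. Lq M 4 (\<lambda>\<omega>'. W \<omega>' b - W \<omega>' a)"])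
  interpret prob_space M by (rule prob)
  fix s t assume st: "0 \<le> s" "s \<le> t" "t \<le> T"
  have "Lq M 4 (\<lambda>\<omega>'. W \<omega>' t - W \<omega>' s) \<le> Lq M q (\<lambda>\<omega>'. W \<omega>' t - W \<omega>' s)"
    unfolding Lq_def by (rule LqE_mono_exponent) (use q_ge in auto)
  also have "\<dots> \<le> ennreal (w s t \<omega> powr (1/p))" by (rule Lq_W_increment_le[OF st])
  finally show "Lq M 4 (\<lambda>\<omega>'. W \<omega>' t - W \<omega>' s) \<le> ennreal (w s t \<omega> powr (1/p))" .
next
  fix s t show "Lq M 4 (\<lambda>\<omega>'. W \<omega>' t - W \<omega>' s) = Lq M 4 (\<lambda>\<omega>'. W \<omega>' s - W \<omega>' t)"
    by (rule Lq_minus_commute)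
qed (use assms in auto)

lemma tendsto_w_between_powr:
  assumes z0: "z0 \<in> S" and \<phi>: "continuous_on S \<phi>" "\<phi> ` S \<subseteq> {0..T}" and a: "a = \<phi> z0"
    and \<theta>: "0 < \<theta>"
  shows "((\<lambda>z. K * w_between a (\<phi> z) \<omega> powr \<theta>) \<longlongrightarrow> 0) (at z0 within S)"
proof -
  have aT: "a \<in> {0..T}" using a \<phi>(2) z0 by auto
  have "continuous_on {0..T} (\<lambda>b. (\<lambda>(s, t). w s t \<omega>) (min a b, max a b))"
  proof (rule continuous_on_compose2[OF w_continuous_on])
    show "continuous_on {0..T} (\<lambda>b. (min a b, max a b))" by (intro continuous_intros)
    show "(\<lambda>b. (min a b, max a b)) ` {0..T} \<subseteq> S2 T" using aT by (auto simp: S2_def)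
  qed
  then have "continuous_on S (\<lambda>z. (\<lambda>b. (\<lambda>(s, t). w s t \<omega>) (min a b, max a b)) (\<phi> z))"
    by (rule continuous_on_compose2[OF _ \<phi>])
  then have "continuous_on S (\<lambda>z. w_between a (\<phi> z) \<omega>)"
    by (simp add: w_between_def)
  then have "((\<lambda>z. w_between a (\<phi> z) \<omega>) \<longlongrightarrow> w_between a a \<omega>) (at z0 within S)"
    using z0 a by (simp add: continuous_on_def)
  moreover have "w_between a a \<omega> = 0" unfolding w_between_def using aT by (simp add: w_diag)
  moreover have "eventually (\<lambda>z. 0 \<le> w_between a (\<phi> z) \<omega>) (at z0 within S)"
    unfolding eventually_at_filter using w_between_nonneg[OF aT] \<phi>(2) by (auto intro!: always_eventually)
  ultimately have "((\<lambda>z. w_between a (\<phi> z) \<omega> powr \<theta>) \<longlongrightarrow> 0) (at z0 within S)"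
    using \<theta> by (intro tendsto_zero_powrI[OF _ tendsto_const]) auto
  then show ?thesis using tendsto_mult_right_zero by blast
qed

lemma continuous_on_of_increment_le:
  fixes f :: "real \<Rightarrow> 'a::real_normed_vector"
  assumes bound: "\<And>s t. 0 \<le> s \<Longrightarrow> s \<le> t \<Longrightarrow> t \<le> T \<Longrightarrow> norm (f t - f s) \<le> K * w s t \<omega> powr \<theta>"
    and \<theta>: "0 < \<theta>"
  shows "continuous_on {0..T} f"
  unfolding continuous_on_def
proof
  fix a assume a: "a \<in> {0..T}"
  have "norm (f b - f a) \<le> K * w_between a b \<omega> powr \<theta>" if "b \<in> {0..T}" for b
  proof (rule w_between_le_cases[where P="\<lambda>a b. norm (f b - f a)" and B="\<lambda>x. K * x powr \<theta>"])
    fix s t assume "0 \<le> s" "s \<le> t" "t \<le> T"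
    then show "norm (f t - f s) \<le> K * w s t \<omega> powr \<theta>" by (rule bound)
  next
    fix s t show "norm (f t - f s) = norm (f s - f t)" by (rule norm_minus_commute)
  qed (use a that in auto)
  then have "eventually (\<lambda>b. norm (f b - f a) \<le> K * w_between a b \<omega> powr \<theta>) (at a within {0..T})"
    unfolding eventually_at_filter by (auto intro!: always_eventually)
  moreover have "((\<lambda>b. K * w_between a b \<omega> powr \<theta>) \<longlongrightarrow> 0) (at a within {0..T})"
    using tendsto_w_between_powr[OF a continuous_on_id _ refl \<theta>] by simp
  ultimately have "((\<lambda>b. f b - f a) \<longlongrightarrow> 0) (at a within {0..T})"
    by (rule Lim_null_comparison)
  then show "(f \<longlongrightarrow> f a) (at a within {0..T})" by (simp add: LIM_zero_iff)
qed

lemma Lq_continuous_on_of_increment_le: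
  fixes G :: "real \<Rightarrow> 'w \<Rightarrow> 'a::real_normed_vector"
  assumes bound: "\<And>s t. 0 \<le> s \<Longrightarrow> s \<le> t \<Longrightarrow> t \<le> T \<Longrightarrow>
      Lq M r (\<lambda>x. G t x - G s x) \<le> ennreal (K * w s t \<omega> powr \<theta>)"
    and \<theta>: "0 < \<theta>"
  shows "Lq_continuous_on M r {0..T} G"
  unfolding Lq_continuous_on_def
proof
  fix a assume a: "a \<in> {0..T}"
  have "Lq M r (\<lambda>x. G b x - G a x) \<le> ennreal (K * w_between a b \<omega> powr \<theta>)" if "b \<in> {0..T}" for b
  proof (rule w_between_le_cases[where P="\<lambda>a b. Lq M r (\<lambda>x. G b x - G a x)"
        and B="\<lambda>x. ennreal (K * x powr \<theta>)"])
    fix s t assume "0 \<le> s" "s \<le> t" "t \<le> T"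
    then show "Lq M r (\<lambda>x. G t x - G s x) \<le> ennreal (K * w s t \<omega> powr \<theta>)" by (rule bound)
  next
    fix s t show "Lq M r (\<lambda>x. G t x - G s x) = Lq M r (\<lambda>x. G s x - G t x)" by (rule Lq_minus_commute)
  qed (use a that in auto)
  then have le: "eventually (\<lambda>b. Lq M r (\<lambda>x. G b x - G a x) \<le> ennreal (K * w_between a b \<omega> powr \<theta>))
      (at a within {0..T})"
    unfolding eventually_at_filter by (auto intro!: always_eventually)
  have "((\<lambda>b. K * w_between a b \<omega> powr \<theta>) \<longlongrightarrow> 0) (at a within {0..T})"
    using tendsto_w_between_powr[OF a continuous_on_id _ refl \<theta>] by simp
  from tendsto_ennrealI[OF this]
  have lim: "((\<lambda>b. ennreal (K * w_between a b \<omega> powr \<theta>)) \<longlongrightarrow> 0) (at a within {0..T})"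
    by simp
  show "((\<lambda>b. Lq M r (\<lambda>x. G b x - G a x)) \<longlongrightarrow> 0) (at a within {0..T})"
    using tendsto_sandwich[OF _ le tendsto_const lim] by simp
qed

lemma LqE_w_powr_le:
  assumes st: "0 \<le> s" "s \<le> t" "t \<le> T" and \<theta>: "0 < \<theta>" "\<theta> \<le> 1" and b: "0 < b" "b * \<theta> \<le> q"
  shows "LqE M b (\<lambda>\<omega>'. ennreal (w s t \<omega>' powr \<theta>)) \<le> ennreal (2 * w s t \<omega> powr \<theta>)"
proof -
  interpret prob_space M by (rule prob)
  have w0: "0 \<le> w s t \<omega>'" for \<omega>' using w_nonneg[OF st] .
  have "LqE M b (\<lambda>\<omega>'. ennreal (w s t \<omega>' powr \<theta>)) = epow (LqE M (b * \<theta>) (\<lambda>\<omega>'. ennreal (w s t \<omega>'))) \<theta>"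
    by (rule LqE_powr) (use w0 b \<theta> in auto)
  also have "\<dots> \<le> epow (Lq M q (\<lambda>\<omega>'. w s t \<omega>')) \<theta>"
    using LqE_mono_exponent[OF w_measurable w0, of "b * \<theta>" q] b \<theta> w0 by (intro epow_mono) (auto simp: Lq_def)
  also have "\<dots> \<le> epow (ennreal (2 * w s t \<omega>)) \<theta>"
    by (intro epow_mono Lq_w_le st) (use \<theta> in auto)
  also have "\<dots> \<le> ennreal (2 * w s t \<omega> powr \<theta>)"
    using w0 two_mult_powr_le[OF \<theta>] by (simp add: epow_ennreal)
  finally show ?thesis .
qed

lemma SUP_divide_w_le:
  assumes "\<And>s t. 0 \<le> s \<Longrightarrow> s \<le> t \<Longrightarrow> t \<le> T \<Longrightarrow> L s t \<le> ennreal (K * w s t \<omega> powr \<theta>)" "0 \<le> K"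
  shows "(SUP st\<in>S2 T. L (fst st) (snd st) / ennreal (w (fst st) (snd st) \<omega> powr \<theta>)) \<le> ennreal K"
  using assms by (intro SUP_least ennreal_divide_le_of_le_mult) (auto simp: S2_def)

end

locale random_cp = rough_control M T p q W WW WP w
  for M :: "'w::polish_space measure" and T p q :: real
    and W :: "'w \<Rightarrow> real \<Rightarrow> real^'m" and WW :: "'w \<Rightarrow> real \<Rightarrow> real \<Rightarrow> real^'m^'m"
    and WP :: "'w \<Rightarrow> 'w \<Rightarrow> real \<Rightarrow> real \<Rightarrow> real^'m^'m" and w :: "real \<Rightarrow> real \<Rightarrow> 'w \<Rightarrow> real" +
  fixes Y :: "'w \<Rightarrow> real \<Rightarrow> 'y::euclidean_space" and DY :: "'w \<Rightarrow> real \<Rightarrow> 'y^'m"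
  assumes random_cp: "random_controlled_path M W w T p Y DY (\<lambda>\<omega>' t \<omega>''. 0)"
begin

definition Ynorm :: "'w \<Rightarrow> ennreal" where
  "Ynorm \<omega>' = cp_norm M W w T p \<omega>' (Y \<omega>') (DY \<omega>') (\<lambda>t \<omega>''. 0)"

definition Ynorm8 :: real where
  "Ynorm8 = enn2real (LqE M 8 Ynorm)"

lemma controlled_path_Y: "controlled_path M W w T p \<omega>' (Y \<omega>') (DY \<omega>') (\<lambda>t \<omega>''. 0)"
  using random_cp by (simp add: random_controlled_path_def)

lemma Ynorm_finite: "Ynorm \<omega>' < \<infinity>"
  using controlled_path_Y by (simp add: controlled_path_def Ynorm_def)

lemma Ynorm8_nonneg: "0 \<le> Ynorm8"
  by (simp add: Ynorm8_def)

lemma LqE_Ynorm: "LqE M 8 Ynorm = ennreal Ynorm8"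
  using random_cp unfolding random_controlled_path_def Ynorm_def[abs_def] Ynorm8_def
  by (simp add: less_top)

lemma Y_measurable [measurable]: "(\<lambda>\<omega>'. Y \<omega>' t) \<in> borel_measurable M"
  using random_cp by (simp add: random_controlled_path_def)

lemma DY_measurable [measurable]: "(\<lambda>\<omega>'. DY \<omega>' t) \<in> borel_measurable M"
  using random_cp by (simp add: random_controlled_path_def)

lemma in_Lq_Y0: "in_Lq M 2 (\<lambda>\<omega>'. Y \<omega>' 0)"
  using random_cp by (simp add: random_controlled_path_def in_Lq_def)

lemma Y_increment_bounds:
  assumes "0 \<le> s" "s \<le> t" "t \<le> T"
  shows "norm (Y \<omega>' t - Y \<omega>' s) \<le> enn2real (Ynorm \<omega>') * w s t \<omega>' powr (1/p)"
    and "norm (DY \<omega>' t - DY \<omega>' s) \<le> enn2real (Ynorm \<omega>') * w s t \<omega>' powr (1/p)"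
    and "norm (Y \<omega>' t - Y \<omega>' s - apply_deriv (DY \<omega>' s) (W \<omega>' t - W \<omega>' s))
      \<le> enn2real (Ynorm \<omega>') * w s t \<omega>' powr (2/p)"
  using cp_norm_increment_bounds[OF Ynorm_finite[unfolded Ynorm_def] assms w_nonneg[OF assms]]
  unfolding Ynorm_def by auto

text \<open>Hoelder with exponents \<open>8\<close> and \<open>b\<close> splits a pathwise bound \<open>|||Y(\<omega>')||| w(s,t,\<omega>')\<^sup>\<theta>\<close> into
  \<open>\<langle>|||Y|||\<rangle>\<^sub>8\<close> and a moment of the control.\<close>

lemma LqE_le_Ynorm8:
  fixes g :: "'w \<Rightarrow> real"
  assumes g: "g \<in> borel_measurable M" "\<And>\<omega>'. 0 \<le> g \<omega>'"
    and g_le: "\<And>\<omega>'. g \<omega>' \<le> enn2real (Ynorm \<omega>') * w s t \<omega>' powr \<theta>"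
    and st: "0 \<le> s" "s \<le> t" "t \<le> T" and \<theta>: "0 < \<theta>" "\<theta> \<le> 1"
    and rb: "0 < r" "0 < b" "1/r = 1/8 + 1/b" "b * \<theta> \<le> q"
  shows "LqE M r (\<lambda>\<omega>'. ennreal (g \<omega>')) \<le> ennreal (2 * Ynorm8 * w s t \<omega> powr \<theta>)"
proof -
  have w0: "0 \<le> w s t \<omega>'" for \<omega>' using w_nonneg[OF st] .
  define f where "f \<omega>' = (if w s t \<omega>' = 0 then 0 else g \<omega>' / w s t \<omega>' powr \<theta>)" for \<omega>'
  have f_meas: "f \<in> borel_measurable M" unfolding f_def using g by measurable
  have f0: "0 \<le> f \<omega>'" for \<omega>' unfolding f_def using g w0 by auto
  have gf: "g \<omega>' = f \<omega>' * w s t \<omega>' powr \<theta>" and f_le: "f \<omega>' \<le> enn2real (Ynorm \<omega>')" for \<omega>'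
    using g(2)[of \<omega>'] g_le[of \<omega>'] w0[of \<omega>'] \<theta> by (auto simp: f_def divide_le_eq)
  have "LqE M r (\<lambda>\<omega>'. ennreal (g \<omega>'))
      \<le> LqE M 8 (\<lambda>\<omega>'. ennreal (f \<omega>')) * LqE M b (\<lambda>\<omega>'. ennreal (w s t \<omega>' powr \<theta>))"
    unfolding gf by (rule LqE_Hoelder[OF f_meas f0]) (use rb in auto)
  also have "\<dots> \<le> ennreal Ynorm8 * ennreal (2 * w s t \<omega> powr \<theta>)"
  proof (rule mult_mono)
    have "ennreal (f \<omega>') \<le> Ynorm \<omega>'" for \<omega>'
    proof -
      have "ennreal (f \<omega>') \<le> ennreal (enn2real (Ynorm \<omega>'))" using f_le by (rule ennreal_leI)
      also have "\<dots> = Ynorm \<omega>'" using Ynorm_finite[of \<omega>'] by (simp add: less_top)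
      finally show ?thesis .
    qed
    then have "LqE M 8 (\<lambda>\<omega>'. ennreal (f \<omega>')) \<le> LqE M 8 Ynorm"
      by (intro LqE_mono) auto
    then show "LqE M 8 (\<lambda>\<omega>'. ennreal (f \<omega>')) \<le> ennreal Ynorm8" by (simp add: LqE_Ynorm)
  qed (use LqE_w_powr_le[OF st \<theta> rb(2,4)] in auto)
  also have "\<dots> = ennreal (2 * Ynorm8 * w s t \<omega> powr \<theta>)"
    using Ynorm8_nonneg by (simp add: ennreal_mult[symmetric] mult.left_commute)
  finally show ?thesis .
qed

lemma q_mult_p: "16 \<le> q * p"
  using mult_mono[OF q_ge p_ge] q_ge by simp

lemma Lq2_Y_increment_le:
  assumes "0 \<le> s" "s \<le> t" "t \<le> T"
  shows "Lq M 2 (\<lambda>\<omega>'. Y \<omega>' t - Y \<omega>' s) \<le> ennreal (2 * Ynorm8 * w s t \<omega> powr (1/p))"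
  unfolding Lq_def
  by (rule LqE_le_Ynorm8[where b="8/3", OF _ _ Y_increment_bounds(1)[OF assms] assms])
     (use p_ge q_ge q_mult_p in \<open>auto simp: divide_simps\<close>)

lemma Lq4_DY_increment_le:
  assumes "0 \<le> s" "s \<le> t" "t \<le> T"
  shows "Lq M 4 (\<lambda>\<omega>'. DY \<omega>' t - DY \<omega>' s) \<le> ennreal (2 * Ynorm8 * w s t \<omega> powr (1/p))"
  unfolding Lq_def
  by (rule LqE_le_Ynorm8[where b=8, OF _ _ Y_increment_bounds(2)[OF assms] assms])
     (use p_ge q_ge q_mult_p in \<open>auto simp: divide_simps\<close>)

lemma Lq2_Y_remainder_le:
  assumes "0 \<le> s" "s \<le> t" "t \<le> T"
  shows "Lq M 2 (\<lambda>\<omega>'. Y \<omega>' t - Y \<omega>' s - apply_deriv (DY \<omega>' s) (W \<omega>' t - W \<omega>' s))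
    \<le> ennreal (2 * Ynorm8 * w s t \<omega> powr (2/p))"
  unfolding Lq_def
  by (rule LqE_le_Ynorm8[where b="8/3", OF _ _ Y_increment_bounds(3)[OF assms] assms])
     (use p_ge q_ge q_mult_p in \<open>auto simp: divide_simps\<close>)

lemma in_Lq_Y_increment: "0 \<le> s \<Longrightarrow> s \<le> t \<Longrightarrow> t \<le> T \<Longrightarrow> in_Lq M 2 (\<lambda>\<omega>'. Y \<omega>' t - Y \<omega>' s)"
  by (rule in_Lq_le[OF _ Lq2_Y_increment_le]) auto

lemma L2_norm_Y_increment_le:
  "0 \<le> s \<Longrightarrow> s \<le> t \<Longrightarrow> t \<le> T \<Longrightarrow> L2_norm M (\<lambda>\<omega>'. Y \<omega>' t - Y \<omega>' s) \<le> 2 * Ynorm8 * w s t \<omega> powr (1/p)"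
  by (rule L2_norm_le[OF in_Lq_Y_increment Lq2_Y_increment_le]) (auto simp: Ynorm8_nonneg)

lemma in_Lq_Y_remainder:
  "0 \<le> s \<Longrightarrow> s \<le> t \<Longrightarrow> t \<le> T \<Longrightarrow>
    in_Lq M 2 (\<lambda>\<omega>'. Y \<omega>' t - Y \<omega>' s - apply_deriv (DY \<omega>' s) (W \<omega>' t - W \<omega>' s))"
  by (rule in_Lq_le[OF _ Lq2_Y_remainder_le]) auto

lemma L2_norm_Y_remainder_le:
  "0 \<le> s \<Longrightarrow> s \<le> t \<Longrightarrow> t \<le> T \<Longrightarrow>
    L2_norm M (\<lambda>\<omega>'. Y \<omega>' t - Y \<omega>' s - apply_deriv (DY \<omega>' s) (W \<omega>' t - W \<omega>' s))
      \<le> 2 * Ynorm8 * w s t \<omega> powr (2/p)"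
  by (rule L2_norm_le[OF in_Lq_Y_remainder Lq2_Y_remainder_le]) (auto simp: Ynorm8_nonneg)

lemma in_Lq_Y:
  assumes "0 \<le> t" "t \<le> T"
  shows "in_Lq M 2 (\<lambda>\<omega>'. Y \<omega>' t)"
  using in_Lq_add[OF in_Lq_Y0 in_Lq_Y_increment[of 0 t]] assms by simp

end

section \<open>Lipschitz and Taylor estimates for a regular coefficient\<close>

locale regular_lift =
  fixes M :: "'w measure" and F :: "real^'d \<Rightarrow> (real^'d) measure \<Rightarrow> 'v::euclidean_space"
    and DxF :: "real^'d \<Rightarrow> ('w \<Rightarrow> real^'d) \<Rightarrow> 'v^'d"
    and DZF :: "real^'d \<Rightarrow> ('w \<Rightarrow> real^'d) \<Rightarrow> 'w \<Rightarrow> 'v^'d"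
    and DxxF :: "real^'d \<Rightarrow> ('w \<Rightarrow> real^'d) \<Rightarrow> 'v^'d^'d"
    and DxZF :: "real^'d \<Rightarrow> ('w \<Rightarrow> real^'d) \<Rightarrow> 'w \<Rightarrow> 'v^'d^'d"
    and \<Lambda> :: real
  assumes regular: "regularity1 M F DxF DZF DxxF DxZF \<Lambda>"
begin

abbreviation lift :: "real^'d \<Rightarrow> ('w \<Rightarrow> real^'d) \<Rightarrow> 'v" where
  "lift x Z \<equiv> F x (distr M borel Z)"

lemma frechet_C1_lift: "frechet_C1 M lift DxF DZF"
  using regular by (simp add: regularity1_def)

lemma frechet_C1_DxF: "frechet_C1 M DxF DxxF DxZF"
  using regular by (simp add: regularity1_def)

lemma norm_lift_le: "in_Lq M 2 Z \<Longrightarrow> norm (lift x Z) \<le> \<Lambda>"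
  using regular by (simp add: regularity1_def)

lemma norm_DxF_le: "in_Lq M 2 Z \<Longrightarrow> norm (DxF x Z) \<le> \<Lambda>"
  using regular by (simp add: regularity1_def)

lemma norm_DxxF_le: "in_Lq M 2 Z \<Longrightarrow> norm (DxxF x Z) \<le> \<Lambda>"
  using regular by (simp add: regularity1_def)

lemma Lq_DZF_le: "in_Lq M 2 Z \<Longrightarrow> Lq M 2 (DZF x Z) \<le> ennreal \<Lambda>"
  using regular by (simp add: regularity1_def)

lemma Lambda_nonneg: "0 \<le> \<Lambda>"
  using order_trans[OF norm_ge_zero norm_DxF_le[OF in_Lq_zero]] .

lemma in_Lq_DZF: "in_Lq M 2 Z \<Longrightarrow> in_Lq M 2 (DZF x Z)"
  by (rule frechet_C1_in_Lq_grad[OF frechet_C1_lift])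

lemma L2_norm_DZF_le: "in_Lq M 2 Z \<Longrightarrow> L2_norm M (DZF x Z) \<le> \<Lambda>"
  by (rule L2_norm_le[OF in_Lq_DZF Lq_DZF_le Lambda_nonneg])

lemma L2_norm_DxZF_le:
  assumes "in_Lq M 2 Z"
  shows "L2_norm M (DxZF x Z) \<le> \<Lambda>"
proof (rule L2_norm_le[OF frechet_C1_in_Lq_grad[OF frechet_C1_DxF assms] _ Lambda_nonneg])
  show "Lq M 2 (DxZF x Z) \<le> ennreal \<Lambda>" using regular assms by (simp add: regularity1_def)
qed

lemma L2_norm_DZF_lipschitz_Z:
  assumes "in_Lq M 2 Z" "in_Lq M 2 Z'"
  shows "L2_norm M (\<lambda>\<omega>. DZF x Z \<omega> - DZF x Z' \<omega>) \<le> \<Lambda> * L2_norm M (\<lambda>\<omega>. Z \<omega> - Z' \<omega>)"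
proof -
  have "in_Lq M 2 (\<lambda>\<omega>. DZF x Z \<omega> - DZF x Z' \<omega>)" "in_Lq M 2 (\<lambda>\<omega>. Z \<omega> - Z' \<omega>)"
    by (intro in_Lq_diff in_Lq_DZF assms; simp)+
  moreover have "Lq M 2 (\<lambda>\<omega>. DZF x Z \<omega> - DZF x Z' \<omega>) \<le> ennreal \<Lambda> * Lq M 2 (\<lambda>\<omega>. Z \<omega> - Z' \<omega>)"
    using regular assms by (simp add: regularity1_def)
  ultimately have "ennreal (L2_norm M (\<lambda>\<omega>. DZF x Z \<omega> - DZF x Z' \<omega>))
      \<le> ennreal (\<Lambda> * L2_norm M (\<lambda>\<omega>. Z \<omega> - Z' \<omega>))"
    using Lambda_nonneg by (simp add: Lq_2_eq_L2_norm ennreal_mult)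
  then show ?thesis using Lambda_nonneg by simp
qed

lemma lift_lipschitz_x: "in_Lq M 2 Z \<Longrightarrow> norm (lift x' Z - lift x Z) \<le> \<Lambda> * norm (x' - x)"
  by (rule frechet_C1_lipschitz_x[OF frechet_C1_lift]) (auto intro: norm_DxF_le)

lemma DxF_lipschitz_x: "in_Lq M 2 Z \<Longrightarrow> norm (DxF x' Z - DxF x Z) \<le> \<Lambda> * norm (x' - x)"
  by (rule frechet_C1_lipschitz_x[OF frechet_C1_DxF]) (auto intro: norm_DxxF_le)

lemma lift_lipschitz_Z:
  "in_Lq M 2 Z \<Longrightarrow> in_Lq M 2 Z' \<Longrightarrow> norm (lift x Z' - lift x Z) \<le> \<Lambda> * L2_norm M (\<lambda>\<omega>. Z' \<omega> - Z \<omega>)"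
  by (rule frechet_C1_lipschitz_Z[OF frechet_C1_lift]) (auto intro: L2_norm_DZF_le)

lemma DxF_lipschitz_Z:
  "in_Lq M 2 Z \<Longrightarrow> in_Lq M 2 Z' \<Longrightarrow> norm (DxF x Z' - DxF x Z) \<le> \<Lambda> * L2_norm M (\<lambda>\<omega>. Z' \<omega> - Z \<omega>)"
  by (rule frechet_C1_lipschitz_Z[OF frechet_C1_DxF]) (auto intro: L2_norm_DxZF_le)

lemma lift_taylor_x:
  "in_Lq M 2 Z \<Longrightarrow> norm (lift x' Z - lift x Z - apply_deriv (DxF x Z) (x' - x)) \<le> \<Lambda> * norm (x' - x) ^ 2"
  by (rule frechet_C1_taylor_x[OF frechet_C1_lift _ Lambda_nonneg]) (auto intro: DxF_lipschitz_x)

lemma lift_taylor_Z: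
  "in_Lq M 2 Z \<Longrightarrow> in_Lq M 2 Z' \<Longrightarrow>
    norm (lift x Z' - lift x Z - (\<integral>\<omega>. apply_deriv (DZF x Z \<omega>) (Z' \<omega> - Z \<omega>) \<partial>M))
      \<le> \<Lambda> * L2_norm M (\<lambda>\<omega>. Z' \<omega> - Z \<omega>) ^ 2"
  by (rule frechet_C1_taylor_Z[OF frechet_C1_lift _ _ Lambda_nonneg]) (auto intro: L2_norm_DZF_lipschitz_Z)

lemma L2_norm_DZF_lipschitz_x:
  assumes "in_Lq M 2 Z"
  shows "L2_norm M (\<lambda>\<omega>. DZF x' Z \<omega> - DZF x Z \<omega>) \<le> real DIM('v) * \<Lambda> * norm (x' - x)"
  by (rule frechet_C1_grad_lipschitz_x[OF frechet_C1_lift assms Lambda_nonneg]) (intro DxF_lipschitz_Z)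

end

lemma norm_add5_le:
  fixes a b c d e :: "'a::real_normed_vector"
  shows "norm (a + b + c + d + e) \<le> norm a + norm b + norm c + norm d + norm e"
  by (intro order_trans[OF norm_triangle_ineq] add_right_mono) simp_all

text \<open>Each monomial on the left is a product of a factor at most \<open>(1 + \<Lambda>)(1 + Mb)(1 + D)\<close> and a
  factor at most \<open>1 + a\<^sup>2 + A\<^sup>2\<close>, and the coefficients add up to less than 100.\<close>

lemma composition_constant_le:
  fixes \<Lambda> Mb D a A :: real
  assumes nonneg: "0 \<le> \<Lambda>" "0 \<le> Mb" "0 \<le> D" "0 \<le> a" "0 \<le> A"
  shows "\<Lambda> + \<Lambda> * Mb + Mb * \<Lambda> + (\<Lambda> * (a + 2 * A) + (\<Lambda> * (a + 2 * A) * Mb + \<Lambda> * a)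
      + 4 * (Mb * 4 * (D * \<Lambda> * a + 2 * \<Lambda> * A) + 2 * \<Lambda> * A)
      + \<Lambda> * (a\<^sup>2 + 2 * A * a + a + 4 * A\<^sup>2 + 2 * A))
    \<le> 100 * ((1 + \<Lambda>) * (1 + Mb) * (1 + D)) * (1 + a\<^sup>2 + A\<^sup>2)"
proof -
  define V Q where "V = (1 + \<Lambda>) * (1 + Mb) * (1 + D)" and "Q = 1 + a\<^sup>2 + A\<^sup>2"
  have "\<Lambda> * 1 * 1 \<le> V" "\<Lambda> * Mb * 1 \<le> V" "\<Lambda> * Mb * D \<le> V"
    unfolding V_def using nonneg by (intro mult_mono; simp)+
  then have V: "\<Lambda> \<le> V" "\<Lambda> * Mb \<le> V" "\<Lambda> * Mb * D \<le> V" by simp_all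
  have "0 \<le> (a - 1)\<^sup>2" "0 \<le> (A - 1)\<^sup>2" "0 \<le> (a - A)\<^sup>2" by simp_all
  then have "2 * a \<le> 1 + a\<^sup>2" "2 * A \<le> 1 + A\<^sup>2" "2 * (A * a) \<le> a\<^sup>2 + A\<^sup>2"
    by (simp_all add: power2_diff algebra_simps)
  then have Q: "1 \<le> Q" "a \<le> Q" "A \<le> Q" "a\<^sup>2 \<le> Q" "A\<^sup>2 \<le> Q" "A * a \<le> Q"
    unfolding Q_def using nonneg zero_le_power2[of a] zero_le_power2[of A] by linarith+
  have prod: "\<mu> * \<nu> \<le> V * Q" if "0 \<le> \<mu>" "\<mu> \<le> V" "0 \<le> \<nu>" "\<nu> \<le> Q" for \<mu> \<nu>
    using that by (intro mult_mono) auto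
  have "\<Lambda> * 1 \<le> V * Q" "(\<Lambda> * Mb) * 1 \<le> V * Q" "\<Lambda> * a \<le> V * Q" "\<Lambda> * A \<le> V * Q"
    "(\<Lambda> * Mb) * a \<le> V * Q" "(\<Lambda> * Mb) * A \<le> V * Q" "(\<Lambda> * Mb * D) * a \<le> V * Q"
    "\<Lambda> * a\<^sup>2 \<le> V * Q" "\<Lambda> * (A * a) \<le> V * Q" "\<Lambda> * A\<^sup>2 \<le> V * Q"
    by (rule prod; use V Q nonneg in simp)+
  moreover have "0 \<le> V * Q" unfolding V_def Q_def using nonneg by simp
  moreover have "\<Lambda> + \<Lambda> * Mb + Mb * \<Lambda> + (\<Lambda> * (a + 2 * A) + (\<Lambda> * (a + 2 * A) * Mb + \<Lambda> * a)
      + 4 * (Mb * 4 * (D * \<Lambda> * a + 2 * \<Lambda> * A) + 2 * \<Lambda> * A)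
      + \<Lambda> * (a\<^sup>2 + 2 * A * a + a + 4 * A\<^sup>2 + 2 * A))
    = \<Lambda> * 1 + 2 * ((\<Lambda> * Mb) * 1) + 3 * (\<Lambda> * a) + 12 * (\<Lambda> * A) + (\<Lambda> * Mb) * a
      + 34 * ((\<Lambda> * Mb) * A) + 16 * ((\<Lambda> * Mb * D) * a) + \<Lambda> * a\<^sup>2 + 2 * (\<Lambda> * (A * a))
      + 4 * (\<Lambda> * A\<^sup>2)"
    by (simp add: algebra_simps)
  ultimately show ?thesis
    unfolding V_def[symmetric] Q_def[symmetric] by linarith
qed

section \<open>The composed path\<close>

locale lions_composition =
  random_cp M T p q W WW WP w Y DY + regular_lift M F DxF DZF DxxF DxZF \<Lambda>
  for M :: "'w::polish_space measure" and T p q :: real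
    and W :: "'w \<Rightarrow> real \<Rightarrow> real^'m" and WW :: "'w \<Rightarrow> real \<Rightarrow> real \<Rightarrow> real^'m^'m"
    and WP :: "'w \<Rightarrow> 'w \<Rightarrow> real \<Rightarrow> real \<Rightarrow> real^'m^'m" and w :: "real \<Rightarrow> real \<Rightarrow> 'w \<Rightarrow> real"
    and Y :: "'w \<Rightarrow> real \<Rightarrow> real^'d" and DY :: "'w \<Rightarrow> real \<Rightarrow> (real^'d)^'m"
    and F :: "real^'d \<Rightarrow> (real^'d) measure \<Rightarrow> 'v::euclidean_space"
    and DxF :: "real^'d \<Rightarrow> ('w \<Rightarrow> real^'d) \<Rightarrow> 'v^'d"
    and DZF :: "real^'d \<Rightarrow> ('w \<Rightarrow> real^'d) \<Rightarrow> 'w \<Rightarrow> 'v^'d"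
    and DxxF :: "real^'d \<Rightarrow> ('w \<Rightarrow> real^'d) \<Rightarrow> 'v^'d^'d"
    and DxZF :: "real^'d \<Rightarrow> ('w \<Rightarrow> real^'d) \<Rightarrow> 'w \<Rightarrow> 'v^'d^'d"
    and \<Lambda> :: real +
  fixes \<omega> :: 'w and X :: "real \<Rightarrow> real^'d" and DX :: "real \<Rightarrow> (real^'d)^'m" and Mb :: real
  assumes controlled_path_X: "controlled_path M W w T p \<omega> X DX (\<lambda>t \<omega>'. 0)"
    and Mb_nonneg: "0 \<le> Mb"
    and SUP_derivatives: "(SUP t\<in>{0..T}. sup (ennreal (norm (DX t))) (Linf M (\<lambda>\<omega>'. DY \<omega>' t))) = ennreal Mb"
begin

abbreviation Y_at :: "real \<Rightarrow> 'w \<Rightarrow> real^'d" where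
  "Y_at t \<equiv> \<lambda>\<omega>'. Y \<omega>' t"

definition FXY :: "real \<Rightarrow> 'v" where
  "FXY t = lift (X t) (Y_at t)"

definition FXY_Dx :: "real \<Rightarrow> 'v^'m" where
  "FXY_Dx t = (\<chi> k. apply_deriv (DxF (X t) (Y_at t)) (DX t $ k))"

definition FXY_Dmu :: "real \<Rightarrow> 'w \<Rightarrow> 'v^'m" where
  "FXY_Dmu t \<omega>' = (\<chi> k. apply_deriv (DZF (X t) (Y_at t) \<omega>') (DY \<omega>' t $ k))"

definition Xnorm :: real where
  "Xnorm = enn2real (cp_norm M W w T p \<omega> X DX (\<lambda>t \<omega>'. 0))"

lemma Xnorm_nonneg: "0 \<le> Xnorm"
  by (simp add: Xnorm_def)

lemma cp_norm_X: "cp_norm M W w T p \<omega> X DX (\<lambda>t \<omega>'. 0) = ennreal Xnorm"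
  using controlled_path_X by (simp add: controlled_path_def Xnorm_def less_top)

lemma X_increment_bounds:
  assumes "0 \<le> s" "s \<le> t" "t \<le> T"
  shows "norm (X t - X s) \<le> Xnorm * w s t \<omega> powr (1/p)"
    and "norm (DX t - DX s) \<le> Xnorm * w s t \<omega> powr (1/p)"
    and "norm (X t - X s - apply_deriv (DX s) (W \<omega> t - W \<omega> s)) \<le> Xnorm * w s t \<omega> powr (2/p)"
proof -
  have "cp_norm M W w T p \<omega> X DX (\<lambda>t \<omega>'. 0) < \<infinity>"
    using controlled_path_X by (simp add: controlled_path_def)
  from cp_norm_increment_bounds[OF this assms w_nonneg[OF assms]]
  show "norm (X t - X s) \<le> Xnorm * w s t \<omega> powr (1/p)"
    and "norm (DX t - DX s) \<le> Xnorm * w s t \<omega> powr (1/p)"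
    and "norm (X t - X s - apply_deriv (DX s) (W \<omega> t - W \<omega> s)) \<le> Xnorm * w s t \<omega> powr (2/p)"
    unfolding Xnorm_def by auto
qed

lemma norm_DX_le:
  assumes "0 \<le> t" "t \<le> T"
  shows "norm (DX t) \<le> Mb"
proof -
  have "sup (ennreal (norm (DX t))) (Linf M (\<lambda>\<omega>'. DY \<omega>' t)) \<le> ennreal Mb"
    unfolding SUP_derivatives[symmetric] by (rule SUP_upper) (use assms in auto)
  then show ?thesis using Mb_nonneg by simp
qed

lemma norm_DY_le_AE:
  assumes "0 \<le> t" "t \<le> T"
  shows "AE \<omega>' in M. norm (DY \<omega>' t) \<le> Mb"
proof -
  have "sup (ennreal (norm (DX t))) (Linf M (\<lambda>\<omega>'. DY \<omega>' t)) \<le> ennreal Mb"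
    unfolding SUP_derivatives[symmetric] by (rule SUP_upper) (use assms in auto)
  then have "Linf M (\<lambda>\<omega>'. DY \<omega>' t) \<le> ennreal Mb" by simp
  moreover have "AE \<omega>' in M. ennreal (norm (DY \<omega>' t)) \<le> Linf M (\<lambda>\<omega>'. DY \<omega>' t)"
    unfolding Linf_def by (rule esssup_AE)
  ultimately show ?thesis
    by (auto elim!: eventually_mono dest: order_trans simp: Mb_nonneg)
qed

lemma DZF_measurable: "0 \<le> t \<Longrightarrow> t \<le> T \<Longrightarrow> DZF x (Y_at t) \<in> borel_measurable M"
  using in_Lq_DZF[OF in_Lq_Y] by (simp add: in_Lq_def)

lemma FXY_Dmu_measurable: "0 \<le> t \<Longrightarrow> t \<le> T \<Longrightarrow> FXY_Dmu t \<in> borel_measurable M"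
  unfolding FXY_Dmu_def[abs_def] by (intro borel_measurable_chi_apply_deriv DZF_measurable DY_measurable)

lemma norm_FXY_0_le: "norm (FXY 0) \<le> \<Lambda>"
  unfolding FXY_def by (rule norm_lift_le[OF in_Lq_Y]) (use T_nonneg in auto)

lemma norm_FXY_Dx_0_le: "norm (FXY_Dx 0) \<le> \<Lambda> * Mb"
  unfolding FXY_Dx_def
  by (rule order_trans[OF norm_chi_apply_deriv_le mult_mono[OF norm_DxF_le[OF in_Lq_Y] norm_DX_le]])
     (use T_nonneg Lambda_nonneg in auto)

text \<open>Since \<open>\<delta>\<^sub>xY\<close> is essentially bounded, the measure derivative \<open>\<nabla>\<^sub>ZF \<delta>\<^sub>xY\<close> lies in \<open>L\<^sup>2 \<subseteq> L\<^sup>4\<^sup>/\<^sup>3\<close>.\<close>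

lemma Lq_FXY_Dmu_le:
  assumes "0 \<le> t" "t \<le> T"
  shows "Lq M (4/3) (FXY_Dmu t) \<le> ennreal (Mb * \<Lambda>)"
proof -
  interpret prob_space M by (rule prob)
  have "Lq M (4/3) (FXY_Dmu t) \<le> ennreal Mb * Lq M 2 (DZF (X t) (Y_at t))"
    by (rule Lq_le_AE_bounded_factor[OF _ norm_DY_le_AE[OF assms] Mb_nonneg])
       (use DZF_measurable[OF assms] in \<open>auto simp: FXY_Dmu_def norm_chi_apply_deriv_le\<close>)
  also have "\<dots> \<le> ennreal Mb * ennreal \<Lambda>" by (intro mult_left_mono Lq_DZF_le in_Lq_Y assms) auto
  finally show ?thesis using Mb_nonneg Lambda_nonneg by (simp add: ennreal_mult)
qed

lemma in_Lq_FXY_Dmu: "0 \<le> t \<Longrightarrow> t \<le> T \<Longrightarrow> in_Lq M (4/3) (FXY_Dmu t)"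
  by (rule in_Lq_le[OF FXY_Dmu_measurable Lq_FXY_Dmu_le])

lemma lift_increment_le:
  fixes G :: "real^'d \<Rightarrow> ('w \<Rightarrow> real^'d) \<Rightarrow> 'a::real_normed_vector"
  assumes st: "0 \<le> s" "s \<le> t" "t \<le> T"
    and lip_x: "\<And>x x' Z. in_Lq M 2 Z \<Longrightarrow> norm (G x' Z - G x Z) \<le> \<Lambda> * norm (x' - x)"
    and lip_Z: "\<And>x Z Z'. in_Lq M 2 Z \<Longrightarrow> in_Lq M 2 Z' \<Longrightarrow>
      norm (G x Z' - G x Z) \<le> \<Lambda> * L2_norm M (\<lambda>\<omega>. Z' \<omega> - Z \<omega>)"
  shows "norm (G (X t) (Y_at t) - G (X s) (Y_at s)) \<le> \<Lambda> * (Xnorm + 2 * Ynorm8) * w s t \<omega> powr (1/p)"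
proof -
  have "norm (G (X t) (Y_at t) - G (X s) (Y_at s))
      \<le> norm (G (X t) (Y_at t) - G (X s) (Y_at t)) + norm (G (X s) (Y_at t) - G (X s) (Y_at s))"
    using norm_triangle_ineq[of "G (X t) (Y_at t) - G (X s) (Y_at t)" "G (X s) (Y_at t) - G (X s) (Y_at s)"]
    by simp
  also have "\<dots> \<le> \<Lambda> * norm (X t - X s) + \<Lambda> * L2_norm M (\<lambda>\<omega>'. Y \<omega>' t - Y \<omega>' s)"
    using st by (intro add_mono lip_x lip_Z in_Lq_Y) auto
  also have "\<dots> \<le> \<Lambda> * (Xnorm * w s t \<omega> powr (1/p)) + \<Lambda> * (2 * Ynorm8 * w s t \<omega> powr (1/p))"
    by (intro add_mono mult_left_mono X_increment_bounds(1)[OF st] L2_norm_Y_increment_le[OF st] Lambda_nonneg)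
  finally show ?thesis by (simp add: algebra_simps)
qed

lemma FXY_increment_le:
  "0 \<le> s \<Longrightarrow> s \<le> t \<Longrightarrow> t \<le> T \<Longrightarrow>
    norm (FXY t - FXY s) \<le> \<Lambda> * (Xnorm + 2 * Ynorm8) * w s t \<omega> powr (1/p)"
  unfolding FXY_def by (rule lift_increment_le[OF _ _ _ lift_lipschitz_x lift_lipschitz_Z])

lemma DxF_increment_le:
  "0 \<le> s \<Longrightarrow> s \<le> t \<Longrightarrow> t \<le> T \<Longrightarrow>
    norm (DxF (X t) (Y_at t) - DxF (X s) (Y_at s)) \<le> \<Lambda> * (Xnorm + 2 * Ynorm8) * w s t \<omega> powr (1/p)"
  by (rule lift_increment_le[OF _ _ _ DxF_lipschitz_x DxF_lipschitz_Z])

lemma FXY_Dx_increment_le: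
  assumes st: "0 \<le> s" "s \<le> t" "t \<le> T"
  shows "norm (FXY_Dx t - FXY_Dx s) \<le> (\<Lambda> * (Xnorm + 2 * Ynorm8) * Mb + \<Lambda> * Xnorm) * w s t \<omega> powr (1/p)"
proof -
  have "norm (FXY_Dx t - FXY_Dx s)
      \<le> norm (\<chi> k. apply_deriv (DxF (X t) (Y_at t) - DxF (X s) (Y_at s)) (DX t $ k))
        + norm (\<chi> k. apply_deriv (DxF (X s) (Y_at s)) ((DX t - DX s) $ k))"
    unfolding FXY_Dx_def chi_apply_deriv_diff by (rule norm_triangle_ineq)
  also have "\<dots> \<le> norm (DxF (X t) (Y_at t) - DxF (X s) (Y_at s)) * norm (DX t)
      + norm (DxF (X s) (Y_at s)) * norm (DX t - DX s)"
    by (intro add_mono norm_chi_apply_deriv_le)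
  also have "\<dots> \<le> (\<Lambda> * (Xnorm + 2 * Ynorm8) * w s t \<omega> powr (1/p)) * Mb + \<Lambda> * (Xnorm * w s t \<omega> powr (1/p))"
    using st Lambda_nonneg Xnorm_nonneg Ynorm8_nonneg
    by (intro add_mono mult_mono DxF_increment_le norm_DX_le X_increment_bounds(2) norm_DxF_le in_Lq_Y) auto
  finally show ?thesis by (simp add: algebra_simps)
qed

lemma Lq_DZF_increment_le:
  assumes st: "0 \<le> s" "s \<le> t" "t \<le> T"
  shows "Lq M 2 (\<lambda>\<omega>'. DZF (X t) (Y_at t) \<omega>' - DZF (X s) (Y_at s) \<omega>')
    \<le> ennreal (4 * (real DIM('v) * \<Lambda> * Xnorm + 2 * \<Lambda> * Ynorm8) * w s t \<omega> powr (1/p))"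
proof -
  have Ys: "in_Lq M 2 (Y_at s)" and Yt: "in_Lq M 2 (Y_at t)" using st by (auto intro: in_Lq_Y)
  have "Lq M 2 (\<lambda>\<omega>'. (DZF (X t) (Y_at t) \<omega>' - DZF (X s) (Y_at t) \<omega>') + (DZF (X s) (Y_at t) \<omega>' - DZF (X s) (Y_at s) \<omega>'))
    \<le> ennreal (4 * (real DIM('v) * \<Lambda> * (Xnorm * w s t \<omega> powr (1/p)) + \<Lambda> * (2 * Ynorm8 * w s t \<omega> powr (1/p))))"
  proof (rule ennreal_4_add_le[OF Lq_add_le])
    have "L2_norm M (\<lambda>\<omega>'. DZF (X t) (Y_at t) \<omega>' - DZF (X s) (Y_at t) \<omega>') \<le> real DIM('v) * \<Lambda> * norm (X t - X s)"
      by (rule L2_norm_DZF_lipschitz_x[OF Yt])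
    also have "\<dots> \<le> real DIM('v) * \<Lambda> * (Xnorm * w s t \<omega> powr (1/p))"
      using Lambda_nonneg by (intro mult_left_mono X_increment_bounds(1)[OF st]) auto
    finally have "L2_norm M (\<lambda>\<omega>'. DZF (X t) (Y_at t) \<omega>' - DZF (X s) (Y_at t) \<omega>')
        \<le> real DIM('v) * \<Lambda> * (Xnorm * w s t \<omega> powr (1/p))" .
    moreover have "in_Lq M 2 (\<lambda>\<omega>'. DZF (X t) (Y_at t) \<omega>' - DZF (X s) (Y_at t) \<omega>')"
      by (intro in_Lq_diff in_Lq_DZF Yt) auto
    ultimately show "Lq M 2 (\<lambda>\<omega>'. DZF (X t) (Y_at t) \<omega>' - DZF (X s) (Y_at t) \<omega>')
        \<le> ennreal (real DIM('v) * \<Lambda> * (Xnorm * w s t \<omega> powr (1/p)))"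
      by (simp add: Lq_2_eq_L2_norm ennreal_leI)
    have "L2_norm M (\<lambda>\<omega>'. DZF (X s) (Y_at t) \<omega>' - DZF (X s) (Y_at s) \<omega>') \<le> \<Lambda> * L2_norm M (\<lambda>\<omega>'. Y \<omega>' t - Y \<omega>' s)"
      by (rule L2_norm_DZF_lipschitz_Z[OF Yt Ys])
    also have "\<dots> \<le> \<Lambda> * (2 * Ynorm8 * w s t \<omega> powr (1/p))"
      using Lambda_nonneg by (intro mult_left_mono L2_norm_Y_increment_le[OF st]) auto
    finally have "L2_norm M (\<lambda>\<omega>'. DZF (X s) (Y_at t) \<omega>' - DZF (X s) (Y_at s) \<omega>')
        \<le> \<Lambda> * (2 * Ynorm8 * w s t \<omega> powr (1/p))" .
    moreover have "in_Lq M 2 (\<lambda>\<omega>'. DZF (X s) (Y_at t) \<omega>' - DZF (X s) (Y_at s) \<omega>')"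
      by (intro in_Lq_diff in_Lq_DZF Yt Ys) auto
    ultimately show "Lq M 2 (\<lambda>\<omega>'. DZF (X s) (Y_at t) \<omega>' - DZF (X s) (Y_at s) \<omega>')
        \<le> ennreal (\<Lambda> * (2 * Ynorm8 * w s t \<omega> powr (1/p)))"
      by (simp add: Lq_2_eq_L2_norm ennreal_leI)
  qed (use st DZF_measurable Lambda_nonneg Xnorm_nonneg Ynorm8_nonneg in auto)
  then show ?thesis by (simp add: algebra_simps)
qed

definition Dmu_const :: real where
  "Dmu_const = 4 * (Mb * 4 * (real DIM('v) * \<Lambda> * Xnorm + 2 * \<Lambda> * Ynorm8) + 2 * \<Lambda> * Ynorm8)"

lemma Dmu_const_nonneg: "0 \<le> Dmu_const"
  unfolding Dmu_const_def using Mb_nonneg Lambda_nonneg Xnorm_nonneg Ynorm8_nonneg by simp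

lemma Lq_FXY_Dmu_increment_le:
  assumes st: "0 \<le> s" "s \<le> t" "t \<le> T"
  shows "Lq M (4/3) (\<lambda>\<omega>'. FXY_Dmu t \<omega>' - FXY_Dmu s \<omega>') \<le> ennreal (Dmu_const * w s t \<omega> powr (1/p))"
proof -
  interpret prob_space M by (rule prob)
  define v where "v = w s t \<omega> powr (1/p)"
  have v: "0 \<le> v" unfolding v_def by simp
  define P1 where "P1 \<omega>' = (\<chi> k. apply_deriv (DZF (X t) (Y_at t) \<omega>' - DZF (X s) (Y_at s) \<omega>') (DY \<omega>' t $ k))" for \<omega>'
  define P2 where "P2 \<omega>' = (\<chi> k. apply_deriv (DZF (X s) (Y_at s) \<omega>') ((DY \<omega>' t - DY \<omega>' s) $ k))" for \<omega>'
  have P1_meas: "P1 \<in> borel_measurable M" and P2_meas: "P2 \<in> borel_measurable M"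
    unfolding P1_def[abs_def] P2_def[abs_def] using st
    by (intro borel_measurable_chi_apply_deriv borel_measurable_diff DZF_measurable DY_measurable; simp)+
  have "Lq M (4/3) P1 \<le> ennreal Mb * Lq M 2 (\<lambda>\<omega>'. DZF (X t) (Y_at t) \<omega>' - DZF (X s) (Y_at s) \<omega>')"
    by (rule Lq_le_AE_bounded_factor[OF _ norm_DY_le_AE Mb_nonneg])
       (use st DZF_measurable in \<open>auto simp: P1_def norm_chi_apply_deriv_le\<close>)
  also have "\<dots> \<le> ennreal Mb * ennreal (4 * (real DIM('v) * \<Lambda> * Xnorm + 2 * \<Lambda> * Ynorm8) * v)"
    unfolding v_def by (intro mult_left_mono Lq_DZF_increment_le st) auto
  finally have P1: "Lq M (4/3) P1 \<le> ennreal (Mb * (4 * (real DIM('v) * \<Lambda> * Xnorm + 2 * \<Lambda> * Ynorm8) * v))"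
    using Mb_nonneg Lambda_nonneg Xnorm_nonneg Ynorm8_nonneg v by (simp add: ennreal_mult)
  have "norm (P2 \<omega>') \<le> norm (DZF (X s) (Y_at s) \<omega>') * norm (DY \<omega>' t - DY \<omega>' s)" for \<omega>'
    unfolding P2_def by (rule norm_chi_apply_deriv_le)
  then have "Lq M (4/3) P2 \<le> Lq M 2 (DZF (X s) (Y_at s)) * Lq M 4 (\<lambda>\<omega>'. DY \<omega>' t - DY \<omega>' s)"
    by (rule Lq_Hoelder[rotated 2]) (use st DZF_measurable in auto)
  also have "\<dots> \<le> ennreal \<Lambda> * ennreal (2 * Ynorm8 * v)"
    unfolding v_def using st by (intro mult_mono Lq_DZF_le in_Lq_Y Lq4_DY_increment_le) auto
  finally have P2: "Lq M (4/3) P2 \<le> ennreal (\<Lambda> * (2 * Ynorm8 * v))"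
    using Lambda_nonneg Ynorm8_nonneg v by (simp add: ennreal_mult)
  have "(\<lambda>\<omega>'. FXY_Dmu t \<omega>' - FXY_Dmu s \<omega>') = (\<lambda>\<omega>'. P1 \<omega>' + P2 \<omega>')"
    by (simp add: fun_eq_iff FXY_Dmu_def P1_def P2_def chi_apply_deriv_diff)
  moreover have "Lq M (4/3) (\<lambda>\<omega>'. P1 \<omega>' + P2 \<omega>')
    \<le> ennreal (4 * (Mb * (4 * (real DIM('v) * \<Lambda> * Xnorm + 2 * \<Lambda> * Ynorm8) * v) + \<Lambda> * (2 * Ynorm8 * v)))"
    by (rule ennreal_4_add_le[OF Lq_add_le[OF P1_meas P2_meas] P1 P2])
       (use Mb_nonneg Lambda_nonneg Xnorm_nonneg Ynorm8_nonneg v in auto)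
  ultimately show ?thesis unfolding v_def Dmu_const_def by (simp add: algebra_simps)
qed

lemma FXY_remainder_eq:
  fixes s t :: real
  assumes st: "0 \<le> s" "s \<le> t" "t \<le> T"
  defines "\<Delta> \<equiv> X t - X s" and "A \<equiv> DxF (X s) (Y_at s)" and "A' \<equiv> DxF (X s) (Y_at t)"
    and "RY \<equiv> \<lambda>\<omega>'. Y \<omega>' t - Y \<omega>' s - apply_deriv (DY \<omega>' s) (W \<omega>' t - W \<omega>' s)"
  shows "cp_rem M W \<omega> FXY FXY_Dx FXY_Dmu s t =
      (lift (X t) (Y_at t) - lift (X s) (Y_at t) - apply_deriv A' \<Delta>) + apply_deriv (A' - A) \<Delta>
    + apply_deriv A (\<Delta> - apply_deriv (DX s) (W \<omega> t - W \<omega> s))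
    + (lift (X s) (Y_at t) - lift (X s) (Y_at s)
        - (\<integral>\<omega>'. apply_deriv (DZF (X s) (Y_at s) \<omega>') (Y \<omega>' t - Y \<omega>' s) \<partial>M))
    + (\<integral>\<omega>'. apply_deriv (DZF (X s) (Y_at s) \<omega>') (RY \<omega>') \<partial>M)"
proof -
  define h where "h = W \<omega> t - W \<omega> s"
  have DZ: "in_Lq M 2 (DZF (X s) (Y_at s))" using st by (intro in_Lq_DZF in_Lq_Y) auto
  have "apply_deriv (FXY_Dmu s \<omega>') (W \<omega>' t - W \<omega>' s)
      = apply_deriv (DZF (X s) (Y_at s) \<omega>') (Y \<omega>' t - Y \<omega>' s) - apply_deriv (DZF (X s) (Y_at s) \<omega>') (RY \<omega>')"
    for \<omega>'
    unfolding FXY_Dmu_def apply_deriv_chi_apply_deriv RY_def by (simp add: apply_deriv_diff_right)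
  then have mean: "(\<integral>\<omega>'. apply_deriv (FXY_Dmu s \<omega>') (W \<omega>' t - W \<omega>' s) \<partial>M)
      = (\<integral>\<omega>'. apply_deriv (DZF (X s) (Y_at s) \<omega>') (Y \<omega>' t - Y \<omega>' s) \<partial>M)
        - (\<integral>\<omega>'. apply_deriv (DZF (X s) (Y_at s) \<omega>') (RY \<omega>') \<partial>M)"
    using st unfolding RY_def
    by (simp add: Bochner_Integration.integral_diff integrable_apply_deriv[OF DZ in_Lq_Y_increment]
        integrable_apply_deriv[OF DZ in_Lq_Y_remainder])
  have "apply_deriv (FXY_Dx s) h = apply_deriv A \<Delta> - apply_deriv A (\<Delta> - apply_deriv (DX s) h)"
    unfolding FXY_Dx_def A_def apply_deriv_chi_apply_deriv by (simp add: apply_deriv_diff_right)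
  then show ?thesis
    unfolding cp_rem_def mean h_def[symmetric]
    by (simp add: FXY_def \<Delta>_def A'_def apply_deriv_diff_left algebra_simps)
qed

lemma FXY_remainder_le:
  assumes st: "0 \<le> s" "s \<le> t" "t \<le> T"
  shows "norm (cp_rem M W \<omega> FXY FXY_Dx FXY_Dmu s t)
    \<le> \<Lambda> * (Xnorm\<^sup>2 + 2 * Ynorm8 * Xnorm + Xnorm + 4 * Ynorm8\<^sup>2 + 2 * Ynorm8) * w s t \<omega> powr (2/p)"
proof -
  have Ys: "in_Lq M 2 (Y_at s)" and Yt: "in_Lq M 2 (Y_at t)" using st by (auto intro: in_Lq_Y)
  define v1 v2 where "v1 = w s t \<omega> powr (1/p)" and "v2 = w s t \<omega> powr (2/p)"
  have v: "0 \<le> v1" "v1 * v1 = v2" unfolding v1_def v2_def by (simp_all add: powr_add[symmetric])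
  define \<Delta> where "\<Delta> = X t - X s"
  have \<Delta>: "norm \<Delta> \<le> Xnorm * v1" unfolding \<Delta>_def v1_def by (rule X_increment_bounds(1)[OF st])
  have YI: "L2_norm M (\<lambda>\<omega>'. Y \<omega>' t - Y \<omega>' s) \<le> 2 * Ynorm8 * v1"
    unfolding v1_def by (rule L2_norm_Y_increment_le[OF st])
  have "norm (lift (X t) (Y_at t) - lift (X s) (Y_at t) - apply_deriv (DxF (X s) (Y_at t)) \<Delta>)
      \<le> \<Lambda> * (Xnorm * v1)\<^sup>2"
    unfolding \<Delta>_def using \<Delta> Lambda_nonneg
    by (intro order_trans[OF lift_taylor_x[OF Yt]] mult_left_mono power_mono) (auto simp: \<Delta>_def)
  moreover have "norm (apply_deriv (DxF (X s) (Y_at t) - DxF (X s) (Y_at s)) \<Delta>) \<le> (\<Lambda> * (2 * Ynorm8 * v1)) * (Xnorm * v1)"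
    using Lambda_nonneg Ynorm8_nonneg v YI \<Delta>
    by (intro order_trans[OF norm_apply_deriv_le] mult_mono order_trans[OF DxF_lipschitz_Z[OF Ys Yt]]
        mult_left_mono) auto
  moreover have "norm (apply_deriv (DxF (X s) (Y_at s)) (\<Delta> - apply_deriv (DX s) (W \<omega> t - W \<omega> s))) \<le> \<Lambda> * (Xnorm * v2)"
    using Lambda_nonneg X_increment_bounds(3)[OF st]
    by (intro order_trans[OF norm_apply_deriv_le] mult_mono norm_DxF_le Ys) (auto simp: \<Delta>_def v2_def)
  moreover have "norm (lift (X s) (Y_at t) - lift (X s) (Y_at s)
      - (\<integral>\<omega>'. apply_deriv (DZF (X s) (Y_at s) \<omega>') (Y \<omega>' t - Y \<omega>' s) \<partial>M)) \<le> \<Lambda> * (2 * Ynorm8 * v1)\<^sup>2"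
    using Lambda_nonneg YI by (intro order_trans[OF lift_taylor_Z[OF Ys Yt]] mult_left_mono power_mono) auto
  moreover have "norm (\<integral>\<omega>'. apply_deriv (DZF (X s) (Y_at s) \<omega>')
      (Y \<omega>' t - Y \<omega>' s - apply_deriv (DY \<omega>' s) (W \<omega>' t - W \<omega>' s)) \<partial>M) \<le> \<Lambda> * (2 * Ynorm8 * v2)"
    using Lambda_nonneg L2_norm_Y_remainder_le[OF st]
    by (intro order_trans[OF norm_integral_apply_deriv_le[OF in_Lq_DZF[OF Ys] in_Lq_Y_remainder[OF st]]]
        mult_mono L2_norm_DZF_le Ys) (auto simp: v2_def)
  ultimately have "norm (cp_rem M W \<omega> FXY FXY_Dx FXY_Dmu s t) \<le> \<Lambda> * (Xnorm * v1)\<^sup>2 + (\<Lambda> * (2 * Ynorm8 * v1)) * (Xnorm * v1)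
      + \<Lambda> * (Xnorm * v2) + \<Lambda> * (2 * Ynorm8 * v1)\<^sup>2 + \<Lambda> * (2 * Ynorm8 * v2)"
    unfolding FXY_remainder_eq[OF st] \<Delta>_def
    by (intro order_trans[OF norm_add5_le] add_mono)
  also have "\<dots> = \<Lambda> * (Xnorm\<^sup>2 + 2 * Ynorm8 * Xnorm + Xnorm + 4 * Ynorm8\<^sup>2 + 2 * Ynorm8) * v2"
    unfolding v(2)[symmetric] by (simp add: power2_eq_square algebra_simps)
  finally show ?thesis unfolding v2_def .
qed

lemma FXY_continuous_on: "continuous_on {0..T} FXY"
  by (rule continuous_on_of_increment_le[OF FXY_increment_le]) (use p_pos in auto)

lemma FXY_Dx_continuous_on: "continuous_on {0..T} FXY_Dx"
  by (rule continuous_on_of_increment_le[OF FXY_Dx_increment_le]) (use p_pos in auto)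

lemma FXY_Dmu_Lq_continuous_on: "Lq_continuous_on M (4/3) {0..T} FXY_Dmu"
  by (rule Lq_continuous_on_of_increment_le[OF Lq_FXY_Dmu_increment_le]) (use p_pos in auto)

definition FXY_mean_term :: "real \<Rightarrow> real \<Rightarrow> 'v" where
  "FXY_mean_term s t = (\<integral>\<omega>'. apply_deriv (FXY_Dmu s \<omega>') (W \<omega>' t - W \<omega>' s) \<partial>M)"

lemma Lq_FXY_Dmu_diff_le:
  assumes "a \<in> {0..T}" "b \<in> {0..T}"
  shows "Lq M (4/3) (\<lambda>\<omega>'. FXY_Dmu b \<omega>' - FXY_Dmu a \<omega>') \<le> ennreal (Dmu_const * w_between a b \<omega> powr (1/p))"
proof (rule w_between_le_cases[where P="\<lambda>a b. Lq M (4/3) (\<lambda>\<omega>'. FXY_Dmu b \<omega>' - FXY_Dmu a \<omega>')"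
      and B="\<lambda>x. ennreal (Dmu_const * x powr (1/p))"])
  fix a b show "Lq M (4/3) (\<lambda>\<omega>'. FXY_Dmu b \<omega>' - FXY_Dmu a \<omega>') = Lq M (4/3) (\<lambda>\<omega>'. FXY_Dmu a \<omega>' - FXY_Dmu b \<omega>')"
    by (rule Lq_minus_commute)
qed (use assms Lq_FXY_Dmu_increment_le in auto)

lemma Lq1_Dmu_diff_pairing_le:
  assumes st: "0 \<le> s" "s \<le> t" "t \<le> T" and "s0 \<in> {0..T}"
  shows "Lq M 1 (\<lambda>\<omega>'. apply_deriv (FXY_Dmu s \<omega>' - FXY_Dmu s0 \<omega>') (W \<omega>' t - W \<omega>' s))
    \<le> ennreal (Dmu_const * w_between s0 s \<omega> powr (1/p) * w 0 T \<omega> powr (1/p))"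
proof -
  have "Lq M 1 (\<lambda>\<omega>'. apply_deriv (FXY_Dmu s \<omega>' - FXY_Dmu s0 \<omega>') (W \<omega>' t - W \<omega>' s))
      \<le> Lq M (4/3) (\<lambda>\<omega>'. FXY_Dmu s \<omega>' - FXY_Dmu s0 \<omega>') * Lq M 4 (\<lambda>\<omega>'. W \<omega>' t - W \<omega>' s)"
    using assms FXY_Dmu_measurable by (intro Lq_Hoelder) (auto simp: norm_apply_deriv_le)
  also have "\<dots> \<le> ennreal (Dmu_const * w_between s0 s \<omega> powr (1/p)) * ennreal (w 0 T \<omega> powr (1/p))"
  proof (intro mult_mono)
    have "Lq M 4 (\<lambda>\<omega>'. W \<omega>' t - W \<omega>' s) \<le> ennreal (w s t \<omega> powr (1/p))"
      using Lq4_W_increment_le[of s t \<omega>] st by (simp add: w_between_def)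
    also have "\<dots> \<le> ennreal (w 0 T \<omega> powr (1/p))"
      using st p_pos by (intro ennreal_leI powr_mono2 w_mono w_nonneg) auto
    finally show "Lq M 4 (\<lambda>\<omega>'. W \<omega>' t - W \<omega>' s) \<le> ennreal (w 0 T \<omega> powr (1/p))" .
  qed (use assms Lq_FXY_Dmu_diff_le in auto)
  finally show ?thesis
    using Dmu_const_nonneg by (simp add: ennreal_mult)
qed

lemma Lq1_W_diff_pairing_le:
  assumes "s \<in> {0..T}" "t \<in> {0..T}" "s0 \<in> {0..T}" "t0 \<in> {0..T}"
  shows "Lq M 1 (\<lambda>\<omega>'. apply_deriv (FXY_Dmu s0 \<omega>') ((W \<omega>' t - W \<omega>' t0) - (W \<omega>' s - W \<omega>' s0)))
    \<le> ennreal (Mb * \<Lambda> * (4 * (w_between t0 t \<omega> powr (1/p) + w_between s0 s \<omega> powr (1/p))))"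
proof -
  have "Lq M 1 (\<lambda>\<omega>'. apply_deriv (FXY_Dmu s0 \<omega>') ((W \<omega>' t - W \<omega>' t0) - (W \<omega>' s - W \<omega>' s0)))
      \<le> Lq M (4/3) (FXY_Dmu s0) * Lq M 4 (\<lambda>\<omega>'. (W \<omega>' t - W \<omega>' t0) - (W \<omega>' s - W \<omega>' s0))"
    using assms FXY_Dmu_measurable by (intro Lq_Hoelder) (auto simp: norm_apply_deriv_le)
  also have "\<dots> \<le> ennreal (Mb * \<Lambda>) * ennreal (4 * (w_between t0 t \<omega> powr (1/p) + w_between s0 s \<omega> powr (1/p)))"
    using assms
    by (intro mult_mono Lq_FXY_Dmu_le ennreal_4_add_le[OF Lq_diff_le Lq4_W_increment_le Lq4_W_increment_le]) auto
  finally show ?thesis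
    using Mb_nonneg Lambda_nonneg by (simp add: ennreal_mult)
qed

lemma FXY_mean_term_diff_le:
  assumes st: "0 \<le> s" "s \<le> t" "t \<le> T" and st0: "0 \<le> s0" "s0 \<le> t0" "t0 \<le> T"
  shows "norm (FXY_mean_term s t - FXY_mean_term s0 t0)
    \<le> (4 * Dmu_const * w 0 T \<omega> powr (1/p) + 16 * Mb * \<Lambda>) * w_between s0 s \<omega> powr (1/p)
      + 16 * Mb * \<Lambda> * w_between t0 t \<omega> powr (1/p)"
proof -
  have T: "s \<in> {0..T}" "t \<in> {0..T}" "s0 \<in> {0..T}" "t0 \<in> {0..T}" using st st0 by auto
  define P where "P \<omega>' = apply_deriv (FXY_Dmu s \<omega>' - FXY_Dmu s0 \<omega>') (W \<omega>' t - W \<omega>' s)" for \<omega>'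
  define Q where "Q \<omega>' = apply_deriv (FXY_Dmu s0 \<omega>') ((W \<omega>' t - W \<omega>' t0) - (W \<omega>' s - W \<omega>' s0))" for \<omega>'
  have [measurable]: "FXY_Dmu s \<in> borel_measurable M" "FXY_Dmu s0 \<in> borel_measurable M"
    using T FXY_Dmu_measurable by auto
  have "integrable M (\<lambda>\<omega>'. apply_deriv (FXY_Dmu a \<omega>') (W \<omega>' b - W \<omega>' a))"
    if "a \<in> {0..T}" "b \<in> {0..T}" for a b
    using integrable_apply_deriv[OF in_Lq_FXY_Dmu in_Lq_le[OF _ Lq4_W_increment_le]] that by simp
  then have "FXY_mean_term s t - FXY_mean_term s0 t0 = (\<integral>\<omega>'. P \<omega>' + Q \<omega>' \<partial>M)"
    unfolding FXY_mean_term_def P_def Q_def using T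
    by (subst Bochner_Integration.integral_diff[symmetric])
       (auto simp: apply_deriv_add_right apply_deriv_diff_left apply_deriv_diff_right algebra_simps)
  then have "ennreal (norm (FXY_mean_term s t - FXY_mean_term s0 t0)) \<le> Lq M 1 (\<lambda>\<omega>'. P \<omega>' + Q \<omega>')"
    by (simp add: norm_integral_le_Lq1)
  also have "\<dots> \<le> ennreal (4 * (Dmu_const * w_between s0 s \<omega> powr (1/p) * w 0 T \<omega> powr (1/p)
      + Mb * \<Lambda> * (4 * (w_between t0 t \<omega> powr (1/p) + w_between s0 s \<omega> powr (1/p)))))"
    unfolding P_def Q_def using Dmu_const_nonneg Mb_nonneg Lambda_nonneg T
    by (intro ennreal_4_add_le[OF Lq_add_le] Lq1_Dmu_diff_pairing_le[OF st] Lq1_W_diff_pairing_le) auto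
  finally have "norm (FXY_mean_term s t - FXY_mean_term s0 t0)
    \<le> 4 * (Dmu_const * w_between s0 s \<omega> powr (1/p) * w 0 T \<omega> powr (1/p)
      + Mb * \<Lambda> * (4 * (w_between t0 t \<omega> powr (1/p) + w_between s0 s \<omega> powr (1/p))))"
    using Dmu_const_nonneg Mb_nonneg Lambda_nonneg by (subst (asm) ennreal_le_iff) auto
  then show ?thesis by (simp add: algebra_simps)
qed

lemma FXY_mean_term_continuous_on: "continuous_on (S2 T) (\<lambda>z. FXY_mean_term (fst z) (snd z))"
  unfolding continuous_on_def
proof
  fix z0 assume z0: "z0 \<in> S2 T"
  define c1 c2 where "c1 = 4 * Dmu_const * w 0 T \<omega> powr (1/p) + 16 * Mb * \<Lambda>" and "c2 = 16 * Mb * \<Lambda>"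
  have "norm (FXY_mean_term (fst z) (snd z) - FXY_mean_term (fst z0) (snd z0))
      \<le> c1 * w_between (fst z0) (fst z) \<omega> powr (1/p) + c2 * w_between (snd z0) (snd z) \<omega> powr (1/p)"
    if "z \<in> S2 T" for z
    using FXY_mean_term_diff_le that z0 unfolding c1_def c2_def by (auto simp: S2_def)
  then have "eventually (\<lambda>z. norm (FXY_mean_term (fst z) (snd z) - FXY_mean_term (fst z0) (snd z0))
      \<le> c1 * w_between (fst z0) (fst z) \<omega> powr (1/p) + c2 * w_between (snd z0) (snd z) \<omega> powr (1/p))
      (at z0 within S2 T)"
    unfolding eventually_at_filter by (auto intro!: always_eventually)
  moreover have "((\<lambda>z. c1 * w_between (fst z0) (fst z) \<omega> powr (1/p) + c2 * w_between (snd z0) (snd z) \<omega> powr (1/p))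
      \<longlongrightarrow> 0) (at z0 within S2 T)"
    using tendsto_add[OF tendsto_w_between_powr[OF z0 continuous_on_fst[OF continuous_on_id] fst_S2_subset refl,
          where \<theta>="1/p" and K=c1 and \<omega>=\<omega>]
        tendsto_w_between_powr[OF z0 continuous_on_snd[OF continuous_on_id] snd_S2_subset refl,
          where \<theta>="1/p" and K=c2 and \<omega>=\<omega>]] p_pos
    by simp
  ultimately have "((\<lambda>z. FXY_mean_term (fst z) (snd z) - FXY_mean_term (fst z0) (snd z0)) \<longlongrightarrow> 0) (at z0 within S2 T)"
    by (rule Lim_null_comparison)
  then show "((\<lambda>z. FXY_mean_term (fst z) (snd z)) \<longlongrightarrow> FXY_mean_term (fst z0) (snd z0)) (at z0 within S2 T)"
    by (simp add: LIM_zero_iff)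
qed

lemma FXY_remainder_continuous_on: "continuous_on (S2 T) (\<lambda>(s, t). cp_rem M W \<omega> FXY FXY_Dx FXY_Dmu s t)"
proof -
  note fst = continuous_on_fst[OF continuous_on_id] fst_S2_subset
    and snd = continuous_on_snd[OF continuous_on_id] snd_S2_subset
  have "continuous_on (S2 T) (\<lambda>z. (\<lambda>y. apply_deriv (fst y) (snd y)) (FXY_Dx (fst z), W \<omega> (snd z) - W \<omega> (fst z)))"
    by (rule continuous_on_compose2[OF continuous_on_apply_deriv])
       (auto intro!: continuous_intros continuous_on_compose2[OF FXY_Dx_continuous_on fst]
         continuous_on_compose2[OF W_continuous_on fst] continuous_on_compose2[OF W_continuous_on snd])
  then have "continuous_on (S2 T) (\<lambda>z. FXY (snd z) - FXY (fst z)
      - apply_deriv (FXY_Dx (fst z)) (W \<omega> (snd z) - W \<omega> (fst z)) - FXY_mean_term (fst z) (snd z))"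
    by (intro continuous_on_diff continuous_on_compose2[OF FXY_continuous_on fst]
        continuous_on_compose2[OF FXY_continuous_on snd] FXY_mean_term_continuous_on) auto
  then show ?thesis
    by (simp add: cp_rem_def FXY_mean_term_def split_def)
qed

lemma cp_norm_FXY_le:
  "cp_norm M W w T p \<omega> FXY FXY_Dx FXY_Dmu
    \<le> ennreal (\<Lambda> * (Xnorm + 2 * Ynorm8) + (\<Lambda> * (Xnorm + 2 * Ynorm8) * Mb + \<Lambda> * Xnorm) + Dmu_const
        + \<Lambda> * (Xnorm\<^sup>2 + 2 * Ynorm8 * Xnorm + Xnorm + 4 * Ynorm8\<^sup>2 + 2 * Ynorm8))"
proof -
  have nonneg: "0 \<le> \<Lambda> * (Xnorm + 2 * Ynorm8)" "0 \<le> \<Lambda> * (Xnorm + 2 * Ynorm8) * Mb + \<Lambda> * Xnorm"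
    "0 \<le> \<Lambda> * (Xnorm\<^sup>2 + 2 * Ynorm8 * Xnorm + Xnorm + 4 * Ynorm8\<^sup>2 + 2 * Ynorm8)"
    using Lambda_nonneg Xnorm_nonneg Ynorm8_nonneg Mb_nonneg by simp_all
  have "cp_norm M W w T p \<omega> FXY FXY_Dx FXY_Dmu
    \<le> ennreal (\<Lambda> * (Xnorm + 2 * Ynorm8)) + ennreal (\<Lambda> * (Xnorm + 2 * Ynorm8) * Mb + \<Lambda> * Xnorm)
      + ennreal Dmu_const + ennreal (\<Lambda> * (Xnorm\<^sup>2 + 2 * Ynorm8 * Xnorm + Xnorm + 4 * Ynorm8\<^sup>2 + 2 * Ynorm8))"
    unfolding cp_norm_def using nonneg Dmu_const_nonneg
    by (intro add_mono SUP_divide_w_le ennreal_leI FXY_increment_le FXY_Dx_increment_le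
        Lq_FXY_Dmu_increment_le FXY_remainder_le)
  also have "\<dots> = ennreal (\<Lambda> * (Xnorm + 2 * Ynorm8) + (\<Lambda> * (Xnorm + 2 * Ynorm8) * Mb + \<Lambda> * Xnorm) + Dmu_const
        + \<Lambda> * (Xnorm\<^sup>2 + 2 * Ynorm8 * Xnorm + Xnorm + 4 * Ynorm8\<^sup>2 + 2 * Ynorm8))"
    using nonneg Dmu_const_nonneg by (simp del: ennreal_plus add: ennreal_plus[symmetric])
  finally show ?thesis .
qed

lemma controlled_path_FXY: "controlled_path M W w T p \<omega> FXY FXY_Dx FXY_Dmu"
  unfolding controlled_path_def
  using FXY_continuous_on FXY_Dx_continuous_on in_Lq_FXY_Dmu FXY_Dmu_Lq_continuous_on
    FXY_remainder_continuous_on le_less_trans[OF cp_norm_FXY_le ennreal_less_top]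
  by auto

lemma cp_norm_star_FXY_le:
  "cp_norm_star M W w T p \<omega> FXY FXY_Dx FXY_Dmu
    \<le> ennreal (100 * (1 + \<bar>\<Lambda>\<bar>) * (1 + Mb) * (1 + real DIM('v)))
      * (1 + (cp_norm M W w T p \<omega> X DX (\<lambda>t \<omega>'. 0))\<^sup>2 + (LqE M 8 Ynorm)\<^sup>2)"
proof -
  have "cp_norm_star M W w T p \<omega> FXY FXY_Dx FXY_Dmu
      \<le> ennreal \<Lambda> + ennreal (\<Lambda> * Mb) + ennreal (Mb * \<Lambda>)
        + ennreal (\<Lambda> * (Xnorm + 2 * Ynorm8) + (\<Lambda> * (Xnorm + 2 * Ynorm8) * Mb + \<Lambda> * Xnorm) + Dmu_const
        + \<Lambda> * (Xnorm\<^sup>2 + 2 * Ynorm8 * Xnorm + Xnorm + 4 * Ynorm8\<^sup>2 + 2 * Ynorm8))"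
    unfolding cp_norm_star_def using T_nonneg
    by (intro add_mono ennreal_leI norm_FXY_0_le norm_FXY_Dx_0_le Lq_FXY_Dmu_le cp_norm_FXY_le) auto
  also have "\<dots> = ennreal (\<Lambda> + \<Lambda> * Mb + Mb * \<Lambda>
        + (\<Lambda> * (Xnorm + 2 * Ynorm8) + (\<Lambda> * (Xnorm + 2 * Ynorm8) * Mb + \<Lambda> * Xnorm) + Dmu_const
        + \<Lambda> * (Xnorm\<^sup>2 + 2 * Ynorm8 * Xnorm + Xnorm + 4 * Ynorm8\<^sup>2 + 2 * Ynorm8)))"
    using Lambda_nonneg Mb_nonneg Xnorm_nonneg Ynorm8_nonneg Dmu_const_nonneg
    by (simp del: ennreal_plus add: ennreal_plus[symmetric])
  also have "\<dots> \<le> ennreal (100 * ((1 + \<Lambda>) * (1 + Mb) * (1 + real DIM('v))) * (1 + Xnorm\<^sup>2 + Ynorm8\<^sup>2))"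
    unfolding Dmu_const_def
    by (intro ennreal_leI composition_constant_le Lambda_nonneg Mb_nonneg Xnorm_nonneg Ynorm8_nonneg) simp
  also have "\<dots> = ennreal (100 * (1 + \<bar>\<Lambda>\<bar>) * (1 + Mb) * (1 + real DIM('v))) * ennreal (1 + Xnorm\<^sup>2 + Ynorm8\<^sup>2)"
  proof -
    have "100 * ((1 + \<Lambda>) * (1 + Mb) * (1 + real DIM('v))) * (1 + Xnorm\<^sup>2 + Ynorm8\<^sup>2)
        = (100 * (1 + \<bar>\<Lambda>\<bar>) * (1 + Mb) * (1 + real DIM('v))) * (1 + Xnorm\<^sup>2 + Ynorm8\<^sup>2)"
      using Lambda_nonneg by (simp add: mult.assoc)
    then show ?thesis by (simp only: ennreal_mult'' add_nonneg_nonneg zero_le_one zero_le_power2)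
  qed
  also have "ennreal (1 + Xnorm\<^sup>2 + Ynorm8\<^sup>2) = 1 + (cp_norm M W w T p \<omega> X DX (\<lambda>t \<omega>'. 0))\<^sup>2 + (LqE M 8 Ynorm)\<^sup>2"
    by (simp add: cp_norm_X LqE_Ynorm ennreal_power Xnorm_nonneg Ynorm8_nonneg)
  finally show ?thesis .
qed

theorem FXY_controlled_path_bound:
  "controlled_path M W w T p \<omega> (\<lambda>t. F (X t) (distr M borel (\<lambda>\<omega>'. Y \<omega>' t)))
      (\<lambda>t. \<chi> k. apply_deriv (DxF (X t) (\<lambda>\<omega>'. Y \<omega>' t)) (DX t $ k))
      (\<lambda>t \<omega>'. \<chi> k. apply_deriv (DZF (X t) (\<lambda>\<omega>''. Y \<omega>'' t) \<omega>') (DY \<omega>' t $ k)) \<and>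
   cp_norm_star M W w T p \<omega> (\<lambda>t. F (X t) (distr M borel (\<lambda>\<omega>'. Y \<omega>' t)))
      (\<lambda>t. \<chi> k. apply_deriv (DxF (X t) (\<lambda>\<omega>'. Y \<omega>' t)) (DX t $ k))
      (\<lambda>t \<omega>'. \<chi> k. apply_deriv (DZF (X t) (\<lambda>\<omega>''. Y \<omega>'' t) \<omega>') (DY \<omega>' t $ k))
    \<le> ennreal (100 * (1 + \<bar>\<Lambda>\<bar>) * (1 + Mb) * (1 + real DIM('v)))
      * (1 + (cp_norm M W w T p \<omega> X DX (\<lambda>t \<omega>'. 0))\<^sup>2
           + (LqE M 8 (\<lambda>\<omega>'. cp_norm M W w T p \<omega>' (Y \<omega>') (DY \<omega>') (\<lambda>t \<omega>''. 0)))\<^sup>2)"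
  using controlled_path_FXY cp_norm_star_FXY_le
  unfolding FXY_def[abs_def] FXY_Dx_def[abs_def] FXY_Dmu_def[abs_def] Ynorm_def[abs_def] by simp

end

theorem proposition12:
  fixes \<Lambda> Mb :: real
  assumes "0 \<le> Mb"
  shows "\<exists>C::real. \<forall>(M :: 'w::polish_space measure) (T::real) (p::real) (q::real)
      (W :: 'w \<Rightarrow> real \<Rightarrow> real^'m) (WW :: 'w \<Rightarrow> real \<Rightarrow> real \<Rightarrow> real^'m^'m)
      (WP :: 'w \<Rightarrow> 'w \<Rightarrow> real \<Rightarrow> real \<Rightarrow> real^'m^'m) (w :: real \<Rightarrow> real \<Rightarrow> 'w \<Rightarrow> real)
      (F :: real^'d \<Rightarrow> (real^'d) measure \<Rightarrow> real^'m^'d)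
      (DxF :: real^'d \<Rightarrow> ('w \<Rightarrow> real^'d) \<Rightarrow> (real^'m^'d)^'d)
      (DZF :: real^'d \<Rightarrow> ('w \<Rightarrow> real^'d) \<Rightarrow> 'w \<Rightarrow> (real^'m^'d)^'d)
      (DxxF :: real^'d \<Rightarrow> ('w \<Rightarrow> real^'d) \<Rightarrow> (real^'m^'d)^'d^'d)
      (DxZF :: real^'d \<Rightarrow> ('w \<Rightarrow> real^'d) \<Rightarrow> 'w \<Rightarrow> (real^'m^'d)^'d^'d)
      (\<omega> :: 'w) (X :: real \<Rightarrow> real^'d) (DX :: real \<Rightarrow> (real^'d)^'m)
      (Y :: 'w \<Rightarrow> real \<Rightarrow> real^'d) (DY :: 'w \<Rightarrow> real \<Rightarrow> (real^'d)^'m).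
    standing_space M \<and> 0 < T \<and> 2 \<le> p \<and> p < 3 \<and> 8 \<le> q \<and>
    rough_setup M T p q W WW WP \<and> control M T p q W WW WP w \<and>
    regularity1 M F DxF DZF DxxF DxZF \<Lambda> \<and>
    controlled_path M W w T p \<omega> X DX (\<lambda>t \<omega>'. 0) \<and>
    random_controlled_path M W w T p Y DY (\<lambda>\<omega>' t \<omega>''. 0) \<and>
    (SUP t\<in>{0..T}. sup (ennreal (norm (DX t))) (Linf M (\<lambda>\<omega>'. DY \<omega>' t))) = ennreal Mb
    \<longrightarrow>
    controlled_path M W w T p \<omega>
       (\<lambda>t. F (X t) (distr M borel (\<lambda>\<omega>'. Y \<omega>' t)))
       (\<lambda>t. \<chi> k. apply_deriv (DxF (X t) (\<lambda>\<omega>'. Y \<omega>' t)) (DX t $ k))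
       (\<lambda>t \<omega>'. \<chi> k. apply_deriv (DZF (X t) (\<lambda>\<omega>''. Y \<omega>'' t) \<omega>') (DY \<omega>' t $ k)) \<and>
    cp_norm_star M W w T p \<omega>
       (\<lambda>t. F (X t) (distr M borel (\<lambda>\<omega>'. Y \<omega>' t)))
       (\<lambda>t. \<chi> k. apply_deriv (DxF (X t) (\<lambda>\<omega>'. Y \<omega>' t)) (DX t $ k))
       (\<lambda>t \<omega>'. \<chi> k. apply_deriv (DZF (X t) (\<lambda>\<omega>''. Y \<omega>'' t) \<omega>') (DY \<omega>' t $ k))
    \<le> ennreal C * (1 + (cp_norm M W w T p \<omega> X DX (\<lambda>t \<omega>'. 0)) ^ 2
                     + (LqE M 8 (\<lambda>\<omega>'. cp_norm M W w T p \<omega>' (Y \<omega>') (DY \<omega>') (\<lambda>t \<omega>''. 0))) ^ 2)"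
proof (intro exI[of _ "100 * (1 + \<bar>\<Lambda>\<bar>) * (1 + Mb) * (1 + real DIM(real^'m^'d))"] allI impI,
    elim conjE, intro lions_composition.FXY_controlled_path_bound lions_composition.intro random_cp.intro
    rough_control.intro random_cp_axioms.intro regular_lift.intro lions_composition_axioms.intro)
qed (use assms in \<open>simp_all add: standing_space_def\<close>)

end
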